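(* Let $W^{(1)}$ be a pro-$p$ Coxeter group and $\mathcal H^{(1)}=\mathcal H^{(1)}_R(a,b)$ a generic pro-$p$ Hecke algebra over a commutative ring $R$ (notation as in the context), and assume that all $a_s$ ($s\in S$) are units of $R$ (so that every $T_w$ is invertible in $\mathcal H^{(1)}$). Let $\mathfrak A(W^{(1)})$ be the group with generators $\{T_w\}_{w\in W^{(1)}}$ and relations $T_{ww'}=T_wT_{w'}$ whenever $\ell(ww')=\ell(w)+\ell(w')$, and let $\mathfrak a$ be the two-sided ideal of the group algebra $R[\mathfrak A(W^{(1)})]$ generated by $T_{n_s}^2-a_sT_{n_s^2}-T_{n_s}b_s$, $s\in S$ (with $b_s=\sum_tc_tt$ read as $\sum_tc_tT_t$). Then the homomorphism \[ \varphi:R[\mathfrak A(W^{(1)})]/\mathfrak a\longrightarrow\mathcal H^{(1)} \] induced by $T_w\mapsto T_w$ is well defined and is an isomorphism of $R$-algebras.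
   Context: Coxeter group $(W_{\mathrm{aff}},S)$ with length $\ell$, $m(s,t)$ the order of $st$. Extended Coxeter group: $W=W_{\mathrm{aff}}\rtimes\Omega$, $(W_{\mathrm{aff}},S)$ Coxeter, $\Omega$ preserving $S$ under conjugation; $\ell(wu)=\ell(w)$ for $w\in W_{\mathrm{aff}},u\in\Omega$. Pro-$p$ Coxeter group: extension $1\to T\to W^{(1)}\xrightarrow{\pi}W\to1$ with $T$ abelian, $T\subseteq W^{(1)}$, lifts $n_s\in\pi^{-1}(s)$ satisfying braid relations ($m(s,t)$ alternating factors) when $m(s,t)<\infty$; length on $W^{(1)}$ is $\ell\circ\pi$; $W^{(1)}$ acts on $T$ and $R[T]$ by conjugation. Generic pro-$p$ Hecke algebra: given $a_s\in R$, $b_s\in R[T]$ such that $a_s=a_t$ and $(n_swn_t^{-1}w^{-1})w(b_t)=b_s$ whenever $s,t\in S$, $w\in W^{(1)}$, $s\pi(w)=\pi(w)t$, $\mathcal H^{(1)}_R(a,b)$ is the unique $R$-algebra free as $R$-module on $\{T_w\}_{w\in W^{(1)}}$ with $T_{ww'}=T_wT_{w'}$ when $\ell(ww')=\ell(w)+\ell(w')$ and $T_{n_s}^2=a_sT_{n_s^2}+T_{n_s}b_s$, $R[T]$ embedded via $t\mapsto T_t$. *)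

theory Defs
  imports "HOL-Algebra.Algebra"
begin

definition wprod :: "('a,'b) monoid_scheme \<Rightarrow> 'a list \<Rightarrow> 'a" where
  "wprod G ws = foldr (\<lambda>x y. x \<otimes>\<^bsub>G\<^esub> y) ws \<one>\<^bsub>G\<^esub>"

definition alt_word :: "'a \<Rightarrow> 'a \<Rightarrow> nat \<Rightarrow> 'a list" where
  "alt_word s t k = map (\<lambda>i. if even i then s else t) [0..<k]"

text \<open>m(s,t): the order of s t (0 encodes infinity).\<close>
definition cox_m :: "('a,'b) monoid_scheme \<Rightarrow> 'a \<Rightarrow> 'a \<Rightarrow> nat" where
  "cox_m G s t =
     (if \<exists>k::nat. k > 0 \<and> (s \<otimes>\<^bsub>G\<^esub> t) [^]\<^bsub>G\<^esub> k = \<one>\<^bsub>G\<^esub>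
      then LEAST k::nat. k > 0 \<and> (s \<otimes>\<^bsub>G\<^esub> t) [^]\<^bsub>G\<^esub> k = \<one>\<^bsub>G\<^esub>
      else 0)"

inductive cox_step :: "('a,'b) monoid_scheme \<Rightarrow> 'a set \<Rightarrow> 'a list \<Rightarrow> 'a list \<Rightarrow> bool"
  for G S where
  "\<lbrakk>s \<in> S; t \<in> S; cox_m G s t > 0\<rbrakk> \<Longrightarrow>
     cox_step G S (u @ v) (u @ alt_word s t (2 * cox_m G s t) @ v)"

definition coxeter_system :: "('a,'b) monoid_scheme \<Rightarrow> 'a set \<Rightarrow> bool" where
  "coxeter_system G S \<longleftrightarrow>
     group G \<and> S \<subseteq> carrier G \<and> \<one>\<^bsub>G\<^esub> \<notin> S \<and>
     (\<forall>s\<in>S. s \<otimes>\<^bsub>G\<^esub> s = \<one>\<^bsub>G\<^esub>) \<and>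
     carrier G = wprod G ` lists S \<and>
     (\<forall>ws \<in> lists S. wprod G ws = \<one>\<^bsub>G\<^esub> \<longrightarrow> equivclp (cox_step G S) ws [])"

definition ext_coxeter :: "('v,'b) monoid_scheme \<Rightarrow> 'v set \<Rightarrow> 'v set \<Rightarrow> 'v set \<Rightarrow> bool" where
  "ext_coxeter W Waff S Omega \<longleftrightarrow>
     group W \<and> Waff \<lhd> W \<and> subgroup Omega W \<and> Waff \<inter> Omega = {\<one>\<^bsub>W\<^esub>} \<and>
     Waff <#>\<^bsub>W\<^esub> Omega = carrier W \<and>
     coxeter_system (W\<lparr>carrier := Waff\<rparr>) S \<and>
     (\<forall>u\<in>Omega. \<forall>s\<in>S. u \<otimes>\<^bsub>W\<^esub> s \<otimes>\<^bsub>W\<^esub> inv\<^bsub>W\<^esub> u \<in> S)"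

definition ext_len :: "('v,'b) monoid_scheme \<Rightarrow> 'v set \<Rightarrow> 'v set \<Rightarrow> 'v \<Rightarrow> nat" where
  "ext_len W S Omega x =
     (LEAST k. \<exists>ws\<in>lists S. length ws = k \<and> (\<exists>u\<in>Omega. x = wprod W ws \<otimes>\<^bsub>W\<^esub> u))"

definition pro_p_coxeter ::
  "('w,'c) monoid_scheme \<Rightarrow> ('v,'b) monoid_scheme \<Rightarrow> ('w \<Rightarrow> 'v) \<Rightarrow> 'v set \<Rightarrow> 'v set \<Rightarrow> 'v set
   \<Rightarrow> ('v \<Rightarrow> 'w) \<Rightarrow> bool" where
  "pro_p_coxeter W1 W proj Waff S Omega n \<longleftrightarrow>
     group W1 \<and> ext_coxeter W Waff S Omega \<and>
     proj \<in> hom W1 W \<and> proj ` carrier W1 = carrier W \<and>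
     (\<forall>x\<in>kernel W1 W proj. \<forall>y\<in>kernel W1 W proj. x \<otimes>\<^bsub>W1\<^esub> y = y \<otimes>\<^bsub>W1\<^esub> x) \<and>
     (\<forall>s\<in>S. n s \<in> carrier W1 \<and> proj (n s) = s) \<and>
     (\<forall>s\<in>S. \<forall>t\<in>S. cox_m W s t > 0 \<longrightarrow>
        wprod W1 (alt_word (n s) (n t) (cox_m W s t)) = wprod W1 (alt_word (n t) (n s) (cox_m W s t)))"

definition len1 :: "('w \<Rightarrow> 'v) \<Rightarrow> ('v,'b) monoid_scheme \<Rightarrow> 'v set \<Rightarrow> 'v set \<Rightarrow> 'w \<Rightarrow> nat" where
  "len1 proj W S Omega x = ext_len W S Omega (proj x)"

definition fin_coeffs :: "('r,'d) ring_scheme \<Rightarrow> 'g set \<Rightarrow> ('g \<Rightarrow> 'r) set" where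
  "fin_coeffs R A = {f. (\<forall>x. f x \<in> carrier R) \<and> (\<forall>x. x \<notin> A \<longrightarrow> f x = \<zero>\<^bsub>R\<^esub>)
                        \<and> finite {x. f x \<noteq> \<zero>\<^bsub>R\<^esub>}}"

definition galg :: "('r,'d) ring_scheme \<Rightarrow> ('g,'e) monoid_scheme \<Rightarrow> ('r, 'g \<Rightarrow> 'r) module" where
  "galg R G =
    \<lparr>carrier = fin_coeffs R (carrier G),
     monoid.mult = (\<lambda>f g z. if z \<in> carrier G
                      then finsum R (\<lambda>x. f x \<otimes>\<^bsub>R\<^esub> g (inv\<^bsub>G\<^esub> x \<otimes>\<^bsub>G\<^esub> z)) {x. f x \<noteq> \<zero>\<^bsub>R\<^esub>}
                      else \<zero>\<^bsub>R\<^esub>),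
     monoid.one = (\<lambda>z. if z = \<one>\<^bsub>G\<^esub> then \<one>\<^bsub>R\<^esub> else \<zero>\<^bsub>R\<^esub>),
     ring.zero = (\<lambda>z. \<zero>\<^bsub>R\<^esub>),
     ring.add = (\<lambda>f g z. f z \<oplus>\<^bsub>R\<^esub> g z),
     module.smult = (\<lambda>r f z. r \<otimes>\<^bsub>R\<^esub> f z)\<rparr>"

definition delta :: "('r,'d) ring_scheme \<Rightarrow> 'g \<Rightarrow> 'g \<Rightarrow> 'r" where
  "delta R g = (\<lambda>z. if z = g then \<one>\<^bsub>R\<^esub> else \<zero>\<^bsub>R\<^esub>)"

text \<open>Parameters a_s in R and b_s in R[T]; b s is the coefficient function of b_s
  (finitely supported on T = ker proj).\<close>
definition hecke_params ::
  "('r,'d) ring_scheme \<Rightarrow> ('w,'c) monoid_scheme \<Rightarrow> ('v,'b) monoid_scheme \<Rightarrow> ('w \<Rightarrow> 'v) \<Rightarrow> 'v set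
   \<Rightarrow> ('v \<Rightarrow> 'w) \<Rightarrow> ('v \<Rightarrow> 'r) \<Rightarrow> ('v \<Rightarrow> 'w \<Rightarrow> 'r) \<Rightarrow> bool" where
  "hecke_params R W1 W proj S n a b \<longleftrightarrow>
     (\<forall>s\<in>S. a s \<in> carrier R \<and> b s \<in> fin_coeffs R (kernel W1 W proj)) \<and>
     (\<forall>s\<in>S. \<forall>t\<in>S. \<forall>w\<in>carrier W1. s \<otimes>\<^bsub>W\<^esub> proj w = proj w \<otimes>\<^bsub>W\<^esub> t \<longrightarrow>
        a s = a t \<and>
        (let u = n s \<otimes>\<^bsub>W1\<^esub> w \<otimes>\<^bsub>W1\<^esub> inv\<^bsub>W1\<^esub> (n t) \<otimes>\<^bsub>W1\<^esub> inv\<^bsub>W1\<^esub> w in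
         \<forall>y\<in>carrier W1.
           b s y = b t (inv\<^bsub>W1\<^esub> w \<otimes>\<^bsub>W1\<^esub> inv\<^bsub>W1\<^esub> u \<otimes>\<^bsub>W1\<^esub> y \<otimes>\<^bsub>W1\<^esub> w)))"

definition hecke_alg ::
  "('r,'d) ring_scheme \<Rightarrow> ('w,'c) monoid_scheme \<Rightarrow> ('v,'b) monoid_scheme \<Rightarrow> ('w \<Rightarrow> 'v) \<Rightarrow> 'v set
   \<Rightarrow> 'v set \<Rightarrow> ('v \<Rightarrow> 'w) \<Rightarrow> ('v \<Rightarrow> 'r) \<Rightarrow> ('v \<Rightarrow> 'w \<Rightarrow> 'r)
   \<Rightarrow> ('r,'h) module \<Rightarrow> ('w \<Rightarrow> 'h) \<Rightarrow> bool" where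
  "hecke_alg R W1 W proj S Omega n a b H Tw \<longleftrightarrow>
     ring H \<and> module R H \<and>
     (\<forall>r\<in>carrier R. \<forall>x\<in>carrier H. \<forall>y\<in>carrier H.
        (r \<odot>\<^bsub>H\<^esub> x) \<otimes>\<^bsub>H\<^esub> y = r \<odot>\<^bsub>H\<^esub> (x \<otimes>\<^bsub>H\<^esub> y) \<and>
        x \<otimes>\<^bsub>H\<^esub> (r \<odot>\<^bsub>H\<^esub> y) = r \<odot>\<^bsub>H\<^esub> (x \<otimes>\<^bsub>H\<^esub> y)) \<and>
     Tw \<in> carrier W1 \<rightarrow> carrier H \<and>
     (\<forall>h\<in>carrier H. \<exists>!f. f \<in> fin_coeffs R (carrier W1) \<and>
        h = finsum H (\<lambda>w. f w \<odot>\<^bsub>H\<^esub> Tw w) {w. f w \<noteq> \<zero>\<^bsub>R\<^esub>}) \<and>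
     (\<forall>w\<in>carrier W1. \<forall>w'\<in>carrier W1.
        len1 proj W S Omega (w \<otimes>\<^bsub>W1\<^esub> w') = len1 proj W S Omega w + len1 proj W S Omega w' \<longrightarrow>
        Tw (w \<otimes>\<^bsub>W1\<^esub> w') = Tw w \<otimes>\<^bsub>H\<^esub> Tw w') \<and>
     (\<forall>s\<in>S. Tw (n s) \<otimes>\<^bsub>H\<^esub> Tw (n s) =
        a s \<odot>\<^bsub>H\<^esub> Tw (n s \<otimes>\<^bsub>W1\<^esub> n s) \<oplus>\<^bsub>H\<^esub>
        Tw (n s) \<otimes>\<^bsub>H\<^esub> finsum H (\<lambda>t. b s t \<odot>\<^bsub>H\<^esub> Tw t) {t. b s t \<noteq> \<zero>\<^bsub>R\<^esub>})"

text \<open>Words in the letters T_w^{+1} (True) and T_w^{-1} (False); one step of the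
  congruence generated by free cancellation and T_{ww'} = T_w T_w' when lengths add.\<close>
inductive pres_step :: "('w,'c) monoid_scheme \<Rightarrow> ('w \<Rightarrow> nat) \<Rightarrow> ('w \<times> bool) list \<Rightarrow> ('w \<times> bool) list \<Rightarrow> bool"
  for W1 len where
  cancel: "x \<in> carrier W1 \<Longrightarrow> pres_step W1 len (u @ v) (u @ [(x, e), (x, \<not> e)] @ v)"
| lenrel: "\<lbrakk>w \<in> carrier W1; w' \<in> carrier W1; len (w \<otimes>\<^bsub>W1\<^esub> w') = len w + len w'\<rbrakk> \<Longrightarrow>
     pres_step W1 len (u @ [(w \<otimes>\<^bsub>W1\<^esub> w', True)] @ v) (u @ [(w, True), (w', True)] @ v)"

definition pres_rel :: "('w,'c) monoid_scheme \<Rightarrow> ('w \<Rightarrow> nat) \<Rightarrow> ('w \<times> bool) list \<Rightarrow> ('w \<times> bool) list \<Rightarrow> bool" where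
  "pres_rel W1 len = equivclp (pres_step W1 len)"

definition pres_group :: "('w,'c) monoid_scheme \<Rightarrow> ('w \<Rightarrow> nat) \<Rightarrow> (('w \<times> bool) list set) monoid" where
  "pres_group W1 len =
    \<lparr>carrier = {Collect (pres_rel W1 len ws) | ws. ws \<in> lists (carrier W1 \<times> UNIV)},
     monoid.mult = (\<lambda>A B. {z. \<exists>x\<in>A. \<exists>y\<in>B. pres_rel W1 len (x @ y) z}),
     monoid.one = Collect (pres_rel W1 len [])\<rparr>"

definition pres_gen :: "('w,'c) monoid_scheme \<Rightarrow> ('w \<Rightarrow> nat) \<Rightarrow> 'w \<Rightarrow> ('w \<times> bool) list set" where
  "pres_gen W1 len w = Collect (pres_rel W1 len [(w, True)])"

definition hecke_ideal_gens ::
  "('r,'d) ring_scheme \<Rightarrow> ('w,'c) monoid_scheme \<Rightarrow> ('w \<Rightarrow> nat) \<Rightarrow> 'v set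
   \<Rightarrow> ('v \<Rightarrow> 'w) \<Rightarrow> ('v \<Rightarrow> 'r) \<Rightarrow> ('v \<Rightarrow> 'w \<Rightarrow> 'r) \<Rightarrow> (('w \<times> bool) list set \<Rightarrow> 'r) set" where
  "hecke_ideal_gens R W1 len S n a b =
    (let RA = galg R (pres_group W1 len); T = (\<lambda>w. delta R (pres_gen W1 len w)) in
     (\<lambda>s. T (n s) \<otimes>\<^bsub>RA\<^esub> T (n s)
          \<ominus>\<^bsub>RA\<^esub> a s \<odot>\<^bsub>RA\<^esub> T (n s \<otimes>\<^bsub>W1\<^esub> n s)
          \<ominus>\<^bsub>RA\<^esub> T (n s) \<otimes>\<^bsub>RA\<^esub> finsum RA (\<lambda>t. b s t \<odot>\<^bsub>RA\<^esub> T t) {t. b s t \<noteq> \<zero>\<^bsub>R\<^esub>}) ` S)"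

end

theory Submission
  imports Defs
begin

text \<open>Since every \<open>a s\<close> is a unit, every \<open>T w\<close> is invertible in \<open>H\<close>: by induction on the length,
  the quadratic relation \<open>T(n s) (T(n s) - b s) = a s T(n s \<otimes> n s)\<close> exhibits an inverse of \<open>T(n s)\<close>.
  Hence \<open>w \<mapsto> T w\<close> extends to a group homomorphism from \<open>\<AA>(W\<^sup>(\<^sup>1\<^sup>))\<close> to the units of \<open>H\<close>, and
  then to an \<open>R\<close>-algebra homomorphism \<open>R[\<AA>(W\<^sup>(\<^sup>1\<^sup>))] \<rightarrow> H\<close> killing the ideal \<open>\<aa>\<close>, which is
  surjective because the \<open>T w\<close> span \<open>H\<close>. Conversely, the quadratic relations, read in the group
  algebra modulo \<open>\<aa>\<close>, rewrite every product of generators and their inverses as an \<open>R\<close>-linear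
  combination of generators \<open>T w\<close>. So the quotient is spanned by the \<open>T w\<close>, whose images form a
  basis of \<open>H\<close>, and the induced map is injective.\<close>

lemma (in abelian_monoid) finsum_swap:
  assumes "finite A" "finite B" "\<And>x y. x \<in> A \<Longrightarrow> y \<in> B \<Longrightarrow> f x y \<in> carrier G"
  shows "(\<Oplus>x\<in>A. \<Oplus>y\<in>B. f x y) = (\<Oplus>y\<in>B. \<Oplus>x\<in>A. f x y)"
  using assms(1,3)
proof (induct A rule: finite_induct)
  case empty
  then show ?case by simp
next
  case (insert a A)
  have "(\<Oplus>x\<in>insert a A. \<Oplus>y\<in>B. f x y) = (\<Oplus>y\<in>B. f a y) \<oplus> (\<Oplus>x\<in>A. \<Oplus>y\<in>B. f x y)"
    using insert by (intro finsum_insert) (auto intro!: finsum_closed)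
  also have "\<dots> = (\<Oplus>y\<in>B. f a y) \<oplus> (\<Oplus>y\<in>B. \<Oplus>x\<in>A. f x y)"
    using insert by simp
  also have "\<dots> = (\<Oplus>y\<in>B. f a y \<oplus> (\<Oplus>x\<in>A. f x y))"
    using insert by (intro finsum_addf[symmetric]) (auto intro!: finsum_closed)
  also have "\<dots> = (\<Oplus>y\<in>B. \<Oplus>x\<in>insert a A. f x y)"
    using insert by (intro finsum_cong') (auto simp: finsum_insert)
  finally show ?case .
qed

lemma (in abelian_monoid) finsum_superset:
  assumes "finite B" "A \<subseteq> B" "\<And>x. x \<in> B \<Longrightarrow> f x \<in> carrier G" "\<And>x. x \<in> B - A \<Longrightarrow> f x = \<zero>"
  shows "(\<Oplus>x\<in>A. f x) = (\<Oplus>x\<in>B. f x)"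
  by (rule add.finprod_mono_neutral_cong_left) (use assms in auto)

lemma (in abelian_monoid) finsum_reindex_superset:
  assumes "finite C" "inj_on h B" "h ` B \<subseteq> C" "\<And>y. y \<in> C \<Longrightarrow> F y \<in> carrier G"
    "\<And>y. y \<in> C \<Longrightarrow> y \<notin> h ` B \<Longrightarrow> F y = \<zero>"
  shows "(\<Oplus>y\<in>C. F y) = (\<Oplus>y\<in>B. F (h y))"
proof -
  have "(\<Oplus>y\<in>C. F y) = (\<Oplus>y\<in>h ` B. F y)"
    by (rule add.finprod_mono_neutral_cong_right) (use assms in auto)
  also have "\<dots> = (\<Oplus>y\<in>B. F (h y))"
    by (rule finsum_reindex) (use assms in auto)
  finally show ?thesis .
qed

lemma (in monoid) Units_of_left_right_inverse:
  assumes "x \<in> carrier G" "y \<in> carrier G" "z \<in> carrier G" "x \<otimes> y = \<one>" "z \<otimes> x = \<one>"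
  shows "x \<in> Units G"
proof -
  have "z = y" using assms by (metis l_one m_assoc r_one)
  then show ?thesis unfolding Units_def using assms by blast
qed

lemma (in abelian_group) add_diff_add:
  "x \<in> carrier G \<Longrightarrow> y \<in> carrier G \<Longrightarrow> u \<in> carrier G \<Longrightarrow> v \<in> carrier G \<Longrightarrow>
   (x \<oplus> y) \<ominus> (u \<oplus> v) = (x \<ominus> u) \<oplus> (y \<ominus> v)"
  by (simp add: a_minus_def minus_add a_ac)

lemma (in abelian_group) add_diff_comm:
  "x \<in> carrier G \<Longrightarrow> i \<in> carrier G \<Longrightarrow> u \<in> carrier G \<Longrightarrow>
   (x \<oplus> i) \<ominus> u = (x \<ominus> u) \<oplus> i"
  by (simp add: a_minus_def a_ac)

lemma (in abelian_group) diff_diff_add_cancel: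
  "x \<in> carrier G \<Longrightarrow> y \<in> carrier G \<Longrightarrow> z \<in> carrier G \<Longrightarrow> (x \<ominus> y \<ominus> z) \<oplus> (y \<oplus> z) = x"
  by (simp add: a_minus_def a_assoc r_neg1 a_lcomm[of "\<ominus> z" y z] l_neg)

lemma (in ring) mult_diff_diff_distrib: "x \<in> carrier R \<Longrightarrow> y \<in> carrier R \<Longrightarrow> z \<in> carrier R \<Longrightarrow> w \<in> carrier R \<Longrightarrow> v \<in> carrier R \<Longrightarrow>
   x \<otimes> (y \<ominus> z \<ominus> w) \<otimes> v = x \<otimes> y \<otimes> v \<ominus> x \<otimes> z \<otimes> v \<ominus> x \<otimes> w \<otimes> v"
  by algebra

lemma (in ring) diff_diff_diff_cancel: "x \<in> carrier R \<Longrightarrow> y \<in> carrier R \<Longrightarrow> z \<in> carrier R \<Longrightarrow>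
   x \<ominus> y \<ominus> (x \<ominus> z \<ominus> y) = z"
  by algebra

lemma fin_coeffsD:
  assumes "f \<in> fin_coeffs R A"
  shows "f x \<in> carrier R" "x \<notin> A \<Longrightarrow> f x = \<zero>\<^bsub>R\<^esub>" "finite {x. f x \<noteq> \<zero>\<^bsub>R\<^esub>}"
    "{x. f x \<noteq> \<zero>\<^bsub>R\<^esub>} \<subseteq> A"
  using assms unfolding fin_coeffs_def by auto

context ring
begin

lemma fin_coeffs_add: "f \<in> fin_coeffs R A \<Longrightarrow> g \<in> fin_coeffs R A \<Longrightarrow> (\<lambda>z. f z \<oplus> g z) \<in> fin_coeffs R A"
proof -
  assume f: "f \<in> fin_coeffs R A" and g: "g \<in> fin_coeffs R A"
  have "{x. f x \<oplus> g x \<noteq> \<zero>} \<subseteq> {x. f x \<noteq> \<zero>} \<union> {x. g x \<noteq> \<zero>}"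
    by auto
  then show ?thesis using fin_coeffsD[OF f] fin_coeffsD[OF g]
    unfolding fin_coeffs_def by (auto intro: finite_subset)
qed

lemma fin_coeffs_smult: "f \<in> fin_coeffs R A \<Longrightarrow> r \<in> carrier R \<Longrightarrow> (\<lambda>z. r \<otimes> f z) \<in> fin_coeffs R A"
proof -
  assume f: "f \<in> fin_coeffs R A" and r: "r \<in> carrier R"
  have "{x. r \<otimes> f x \<noteq> \<zero>} \<subseteq> {x. f x \<noteq> \<zero>}"
    using r by auto
  then show ?thesis using fin_coeffsD[OF f] r
    unfolding fin_coeffs_def by (auto intro: finite_subset)
qed

lemma fin_coeffs_neg: "f \<in> fin_coeffs R A \<Longrightarrow> (\<lambda>z. \<ominus> f z) \<in> fin_coeffs R A"
proof -
  assume f: "f \<in> fin_coeffs R A"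
  have "{x. \<ominus> f x \<noteq> \<zero>} \<subseteq> {x. f x \<noteq> \<zero>}"
    by auto
  then show ?thesis using fin_coeffsD[OF f]
    unfolding fin_coeffs_def by (auto intro: finite_subset)
qed

lemma fin_coeffs_zero: "(\<lambda>z. \<zero>) \<in> fin_coeffs R A"
  unfolding fin_coeffs_def by auto

lemma delta_fin_coeffs: "x \<in> A \<Longrightarrow> delta R x \<in> fin_coeffs R A"
  unfolding fin_coeffs_def delta_def by auto

end

locale r_algebra = R: cring R + M: module R H + H: ring H
  for R :: "('r,'d) ring_scheme" and H :: "('r,'h) module" +
  assumes smult_mult_l: "\<lbrakk>r \<in> carrier R; x \<in> carrier H; y \<in> carrier H\<rbrakk> \<Longrightarrow>
      (r \<odot>\<^bsub>H\<^esub> x) \<otimes>\<^bsub>H\<^esub> y = r \<odot>\<^bsub>H\<^esub> (x \<otimes>\<^bsub>H\<^esub> y)"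
    and smult_mult_r: "\<lbrakk>r \<in> carrier R; x \<in> carrier H; y \<in> carrier H\<rbrakk> \<Longrightarrow>
      x \<otimes>\<^bsub>H\<^esub> (r \<odot>\<^bsub>H\<^esub> y) = r \<odot>\<^bsub>H\<^esub> (x \<otimes>\<^bsub>H\<^esub> y)"
begin

lemma finsum_smult_rdistr:
  assumes "finite A" "\<And>i. i \<in> A \<Longrightarrow> f i \<in> carrier R" "x \<in> carrier H"
  shows "(\<Oplus>\<^bsub>R\<^esub>i\<in>A. f i) \<odot>\<^bsub>H\<^esub> x = (\<Oplus>\<^bsub>H\<^esub>i\<in>A. f i \<odot>\<^bsub>H\<^esub> x)"
  using assms
proof (induct A rule: finite_induct)
  case empty then show ?case by simp
next
  case (insert a A)
  then show ?case
    by (simp add: M.smult_l_distr R.finsum_closed Pi_def M.finsum_insert M.finsum_closed)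
qed

end

section \<open>Group algebras\<close>

locale group_algebra = R: cring R + G: group G
  for R :: "('r,'d) ring_scheme" and G :: "('g,'e) monoid_scheme"
begin

abbreviation "coeffs \<equiv> fin_coeffs R (carrier G)"

lemma galg_simps:
  "carrier (galg R G) = coeffs"
  "f \<otimes>\<^bsub>galg R G\<^esub> g = (\<lambda>z. if z \<in> carrier G
                      then finsum R (\<lambda>x. f x \<otimes>\<^bsub>R\<^esub> g (inv\<^bsub>G\<^esub> x \<otimes>\<^bsub>G\<^esub> z)) {x. f x \<noteq> \<zero>\<^bsub>R\<^esub>}
                      else \<zero>\<^bsub>R\<^esub>)"
  "\<one>\<^bsub>galg R G\<^esub> = (\<lambda>z. if z = \<one>\<^bsub>G\<^esub> then \<one>\<^bsub>R\<^esub> else \<zero>\<^bsub>R\<^esub>)"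
  "\<zero>\<^bsub>galg R G\<^esub> = (\<lambda>z. \<zero>\<^bsub>R\<^esub>)"
  "f \<oplus>\<^bsub>galg R G\<^esub> g = (\<lambda>z. f z \<oplus>\<^bsub>R\<^esub> g z)"
  "r \<odot>\<^bsub>galg R G\<^esub> f = (\<lambda>z. r \<otimes>\<^bsub>R\<^esub> f z)"
  by (simp_all add: galg_def)

lemma coeffs_closed: "f \<in> coeffs \<Longrightarrow> f x \<in> carrier R"
  by (rule fin_coeffsD(1))

lemma galg_abelian_group: "abelian_group (galg R G)"
proof (rule abelian_groupI, goal_cases)
  case (1 x y) then show ?case by (simp add: galg_simps R.fin_coeffs_add)
next
  case 2 then show ?case by (simp add: galg_simps R.fin_coeffs_zero)
next
  case (3 x y z) then show ?case
    by (simp add: galg_simps) (rule ext, simp add: R.a_assoc coeffs_closed)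
next
  case (4 x y) then show ?case
    by (simp add: galg_simps) (rule ext, simp add: R.a_comm coeffs_closed)
next
  case (5 x) then show ?case
    by (simp add: galg_simps) (rule ext, simp add: coeffs_closed)
next
  case (6 x)
  have "(\<lambda>z. \<ominus>\<^bsub>R\<^esub> x z) \<oplus>\<^bsub>galg R G\<^esub> x = \<zero>\<^bsub>galg R G\<^esub>"
    using 6 by (simp add: galg_simps) (rule ext, simp add: coeffs_closed R.l_neg)
  moreover have "(\<lambda>z. \<ominus>\<^bsub>R\<^esub> x z) \<in> carrier (galg R G)"
    using 6 by (simp add: galg_simps R.fin_coeffs_neg)
  ultimately show ?case by blast
qed

abbreviation "supp f \<equiv> {x. f x \<noteq> \<zero>\<^bsub>R\<^esub>}"

lemma galg_mult_eq_sum: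
  assumes f: "f \<in> coeffs" and g: "g \<in> coeffs" and A: "finite A" "supp f \<subseteq> A" "A \<subseteq> carrier G"
    and z: "z \<in> carrier G"
  shows "(f \<otimes>\<^bsub>galg R G\<^esub> g) z = (\<Oplus>\<^bsub>R\<^esub>x\<in>A. f x \<otimes>\<^bsub>R\<^esub> g (inv\<^bsub>G\<^esub> x \<otimes>\<^bsub>G\<^esub> z))"
  unfolding galg_simps using z
  by (simp, intro R.finsum_superset) (use A f g in \<open>auto simp: coeffs_closed\<close>)

lemma galg_mult_outside: "z \<notin> carrier G \<Longrightarrow> (f \<otimes>\<^bsub>galg R G\<^esub> g) z = \<zero>\<^bsub>R\<^esub>"
  unfolding galg_simps by simp

lemma supp_coeffs: "f \<in> coeffs \<Longrightarrow> finite (supp f) \<and> supp f \<subseteq> carrier G"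
  using fin_coeffsD(3,4) by blast

lemma translate_supp:
  assumes x: "x \<in> carrier G" and y: "y \<in> carrier G" and g: "g (inv\<^bsub>G\<^esub> x \<otimes>\<^bsub>G\<^esub> y) \<noteq> \<zero>\<^bsub>R\<^esub>"
  shows "y \<in> (\<lambda>y. x \<otimes>\<^bsub>G\<^esub> y) ` supp g"
proof -
  have "y = x \<otimes>\<^bsub>G\<^esub> (inv\<^bsub>G\<^esub> x \<otimes>\<^bsub>G\<^esub> y)"
    using x y by (simp add: G.m_assoc[symmetric])
  then show ?thesis using g by blast
qed

lemma supp_galg_mult:
  assumes f: "f \<in> coeffs" and g: "g \<in> coeffs"
  shows "supp (f \<otimes>\<^bsub>galg R G\<^esub> g) \<subseteq> supp f <#>\<^bsub>G\<^esub> supp g"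
proof
  fix z assume zs: "z \<in> supp (f \<otimes>\<^bsub>galg R G\<^esub> g)"
  then have z: "z \<in> carrier G" using galg_mult_outside by fastforce
  show "z \<in> supp f <#>\<^bsub>G\<^esub> supp g"
  proof (rule ccontr)
    assume nz: "z \<notin> supp f <#>\<^bsub>G\<^esub> supp g"
    have "(f \<otimes>\<^bsub>galg R G\<^esub> g) z = (\<Oplus>\<^bsub>R\<^esub>x\<in>supp f. f x \<otimes>\<^bsub>R\<^esub> g (inv\<^bsub>G\<^esub> x \<otimes>\<^bsub>G\<^esub> z))"
      using galg_mult_eq_sum[OF f g _ _ _ z] supp_coeffs[OF f] by blast
    also have "\<dots> = \<zero>\<^bsub>R\<^esub>"
    proof (rule R.add.finprod_one_eqI)
      fix x assume x: "x \<in> supp f"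
      then have "x \<in> carrier G" using supp_coeffs[OF f] by blast
      then have "g (inv\<^bsub>G\<^esub> x \<otimes>\<^bsub>G\<^esub> z) = \<zero>\<^bsub>R\<^esub>"
        using translate_supp[of x z g] x z nz by (auto simp: set_mult_def)
      then show "f x \<otimes>\<^bsub>R\<^esub> g (inv\<^bsub>G\<^esub> x \<otimes>\<^bsub>G\<^esub> z) = \<zero>\<^bsub>R\<^esub>"
        using f by (simp add: coeffs_closed)
    qed
    finally show False using zs by simp
  qed
qed

lemma finite_supp_set_mult:
  assumes "f \<in> coeffs" "g \<in> coeffs"
  shows "finite (supp f <#>\<^bsub>G\<^esub> supp g)" "supp f <#>\<^bsub>G\<^esub> supp g \<subseteq> carrier G"
  using supp_coeffs[OF assms(1)] supp_coeffs[OF assms(2)] by (auto simp: set_mult_def)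

lemma galg_mult_closed:
  assumes f: "f \<in> coeffs" and g: "g \<in> coeffs"
  shows "f \<otimes>\<^bsub>galg R G\<^esub> g \<in> coeffs"
proof -
  have "finite (supp (f \<otimes>\<^bsub>galg R G\<^esub> g))"
    using finite_subset[OF supp_galg_mult[OF f g]] finite_supp_set_mult[OF f g] by blast
  moreover have "(f \<otimes>\<^bsub>galg R G\<^esub> g) x \<in> carrier R" for x
    unfolding galg_simps using f g by (auto intro!: R.finsum_closed simp: coeffs_closed)
  ultimately show ?thesis unfolding fin_coeffs_def using galg_mult_outside by auto
qed

lemma finsum_translate:
  assumes M: "abelian_monoid M" and x: "x \<in> carrier G" and g: "g \<in> coeffs"
    and C: "finite C" "(\<lambda>y. x \<otimes>\<^bsub>G\<^esub> y) ` supp g \<subseteq> C" "C \<subseteq> carrier G"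
    and F: "\<And>y. y \<in> C \<Longrightarrow> F y \<in> carrier M"
    and F_zero: "\<And>y. y \<in> C \<Longrightarrow> g (inv\<^bsub>G\<^esub> x \<otimes>\<^bsub>G\<^esub> y) = \<zero>\<^bsub>R\<^esub> \<Longrightarrow> F y = \<zero>\<^bsub>M\<^esub>"
  shows "(\<Oplus>\<^bsub>M\<^esub>y\<in>C. F y) = (\<Oplus>\<^bsub>M\<^esub>y\<in>supp g. F (x \<otimes>\<^bsub>G\<^esub> y))"
proof (rule abelian_monoid.finsum_reindex_superset[OF M C(1) _ C(2) F])
  show "inj_on (\<lambda>y. x \<otimes>\<^bsub>G\<^esub> y) (supp g)"
    using x supp_coeffs[OF g] unfolding inj_on_def by (metis G.l_cancel subsetD)
  fix y assume "y \<in> C" "y \<notin> (\<lambda>y. x \<otimes>\<^bsub>G\<^esub> y) ` supp g"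
  then show "F y = \<zero>\<^bsub>M\<^esub>" using translate_supp[OF x, of y g] F_zero C(3) by blast
qed

lemma galg_mult_translated_sum:
  assumes g: "g \<in> coeffs" and h: "h \<in> coeffs" and x: "x \<in> carrier G" and z: "z \<in> carrier G"
    and C: "finite C" "(\<lambda>y. x \<otimes>\<^bsub>G\<^esub> y) ` supp g \<subseteq> C" "C \<subseteq> carrier G"
  shows "(\<Oplus>\<^bsub>R\<^esub>y\<in>C. g (inv\<^bsub>G\<^esub> x \<otimes>\<^bsub>G\<^esub> y) \<otimes>\<^bsub>R\<^esub> h (inv\<^bsub>G\<^esub> y \<otimes>\<^bsub>G\<^esub> z))
    = (g \<otimes>\<^bsub>galg R G\<^esub> h) (inv\<^bsub>G\<^esub> x \<otimes>\<^bsub>G\<^esub> z)"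
proof -
  have B: "finite (supp g)" "supp g \<subseteq> carrier G" using supp_coeffs[OF g] by auto
  have "(\<Oplus>\<^bsub>R\<^esub>y\<in>C. g (inv\<^bsub>G\<^esub> x \<otimes>\<^bsub>G\<^esub> y) \<otimes>\<^bsub>R\<^esub> h (inv\<^bsub>G\<^esub> y \<otimes>\<^bsub>G\<^esub> z))
      = (\<Oplus>\<^bsub>R\<^esub>y\<in>supp g. g (inv\<^bsub>G\<^esub> x \<otimes>\<^bsub>G\<^esub> (x \<otimes>\<^bsub>G\<^esub> y)) \<otimes>\<^bsub>R\<^esub> h (inv\<^bsub>G\<^esub> (x \<otimes>\<^bsub>G\<^esub> y) \<otimes>\<^bsub>G\<^esub> z))"
    by (rule finsum_translate[OF R.abelian_monoid_axioms x g C(1,2,3)])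
      (use g h in \<open>auto simp: coeffs_closed\<close>)
  also have "\<dots> = (\<Oplus>\<^bsub>R\<^esub>y\<in>supp g. g y \<otimes>\<^bsub>R\<^esub> h (inv\<^bsub>G\<^esub> y \<otimes>\<^bsub>G\<^esub> (inv\<^bsub>G\<^esub> x \<otimes>\<^bsub>G\<^esub> z)))"
    by (intro R.finsum_cong') (use x B z g h in \<open>auto simp: G.m_assoc[symmetric] G.inv_mult_group coeffs_closed\<close>)
  also have "\<dots> = (g \<otimes>\<^bsub>galg R G\<^esub> h) (inv\<^bsub>G\<^esub> x \<otimes>\<^bsub>G\<^esub> z)"
    using galg_mult_eq_sum[OF g h B(1) _ B(2)] x z by simp
  finally show ?thesis .
qed

lemma galg_mult_assoc:
  assumes f: "f \<in> coeffs" and g: "g \<in> coeffs" and h: "h \<in> coeffs"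
  shows "(f \<otimes>\<^bsub>galg R G\<^esub> g) \<otimes>\<^bsub>galg R G\<^esub> h = f \<otimes>\<^bsub>galg R G\<^esub> (g \<otimes>\<^bsub>galg R G\<^esub> h)"
proof (rule ext)
  fix z
  show "((f \<otimes>\<^bsub>galg R G\<^esub> g) \<otimes>\<^bsub>galg R G\<^esub> h) z = (f \<otimes>\<^bsub>galg R G\<^esub> (g \<otimes>\<^bsub>galg R G\<^esub> h)) z"
  proof (cases "z \<in> carrier G")
    case False then show ?thesis by (simp add: galg_mult_outside)
  next
    case z: True
    define A where "A = supp f"
    define AB where "AB = supp f <#>\<^bsub>G\<^esub> supp g"
    have A: "finite A" "A \<subseteq> carrier G" using supp_coeffs[OF f] A_def by auto
    have AB: "finite AB" "AB \<subseteq> carrier G" using finite_supp_set_mult[OF f g] AB_def by auto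
    have fg: "f \<otimes>\<^bsub>galg R G\<^esub> g \<in> coeffs" by (rule galg_mult_closed[OF f g])
    have gh: "g \<otimes>\<^bsub>galg R G\<^esub> h \<in> coeffs" by (rule galg_mult_closed[OF g h])
    have fc: "\<And>x. f x \<in> carrier R" "\<And>x. g x \<in> carrier R" "\<And>x. h x \<in> carrier R"
      using f g h by (auto simp: coeffs_closed)
    have "((f \<otimes>\<^bsub>galg R G\<^esub> g) \<otimes>\<^bsub>galg R G\<^esub> h) z
        = (\<Oplus>\<^bsub>R\<^esub>y\<in>AB. (f \<otimes>\<^bsub>galg R G\<^esub> g) y \<otimes>\<^bsub>R\<^esub> h (inv\<^bsub>G\<^esub> y \<otimes>\<^bsub>G\<^esub> z))"
      using galg_mult_eq_sum[OF fg h AB(1) _ AB(2) z] supp_galg_mult[OF f g] AB_def by blast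
    also have "\<dots> = (\<Oplus>\<^bsub>R\<^esub>y\<in>AB. (\<Oplus>\<^bsub>R\<^esub>x\<in>A. f x \<otimes>\<^bsub>R\<^esub> g (inv\<^bsub>G\<^esub> x \<otimes>\<^bsub>G\<^esub> y)) \<otimes>\<^bsub>R\<^esub> h (inv\<^bsub>G\<^esub> y \<otimes>\<^bsub>G\<^esub> z))"
      by (intro R.finsum_cong') (use galg_mult_eq_sum[OF f g A(1) _ A(2)] A_def AB fc in \<open>auto intro!: R.finsum_closed\<close>)
    also have "\<dots> = (\<Oplus>\<^bsub>R\<^esub>y\<in>AB. \<Oplus>\<^bsub>R\<^esub>x\<in>A. f x \<otimes>\<^bsub>R\<^esub> g (inv\<^bsub>G\<^esub> x \<otimes>\<^bsub>G\<^esub> y) \<otimes>\<^bsub>R\<^esub> h (inv\<^bsub>G\<^esub> y \<otimes>\<^bsub>G\<^esub> z))"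
      by (intro R.finsum_cong' R.finsum_ldistr) (use A fc in auto)
    also have "\<dots> = (\<Oplus>\<^bsub>R\<^esub>x\<in>A. \<Oplus>\<^bsub>R\<^esub>y\<in>AB. f x \<otimes>\<^bsub>R\<^esub> g (inv\<^bsub>G\<^esub> x \<otimes>\<^bsub>G\<^esub> y) \<otimes>\<^bsub>R\<^esub> h (inv\<^bsub>G\<^esub> y \<otimes>\<^bsub>G\<^esub> z))"
      by (rule R.finsum_swap) (use A AB fc in auto)
    also have "\<dots> = (\<Oplus>\<^bsub>R\<^esub>x\<in>A. f x \<otimes>\<^bsub>R\<^esub> (\<Oplus>\<^bsub>R\<^esub>y\<in>AB. g (inv\<^bsub>G\<^esub> x \<otimes>\<^bsub>G\<^esub> y) \<otimes>\<^bsub>R\<^esub> h (inv\<^bsub>G\<^esub> y \<otimes>\<^bsub>G\<^esub> z)))"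
      by (intro R.finsum_cong') (use A AB fc in \<open>auto simp: R.finsum_rdistr R.m_assoc intro!: R.finsum_closed\<close>)
    also have "\<dots> = (\<Oplus>\<^bsub>R\<^esub>x\<in>A. f x \<otimes>\<^bsub>R\<^esub> (g \<otimes>\<^bsub>galg R G\<^esub> h) (inv\<^bsub>G\<^esub> x \<otimes>\<^bsub>G\<^esub> z))"
    proof (intro R.finsum_cong' refl)
      fix x assume x: "x \<in> A"
      then have "(\<lambda>y. x \<otimes>\<^bsub>G\<^esub> y) ` supp g \<subseteq> AB" using A_def AB_def by (auto simp: set_mult_def)
      then show "f x \<otimes>\<^bsub>R\<^esub> (\<Oplus>\<^bsub>R\<^esub>y\<in>AB. g (inv\<^bsub>G\<^esub> x \<otimes>\<^bsub>G\<^esub> y) \<otimes>\<^bsub>R\<^esub> h (inv\<^bsub>G\<^esub> y \<otimes>\<^bsub>G\<^esub> z))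
          = f x \<otimes>\<^bsub>R\<^esub> (g \<otimes>\<^bsub>galg R G\<^esub> h) (inv\<^bsub>G\<^esub> x \<otimes>\<^bsub>G\<^esub> z)"
        using galg_mult_translated_sum[OF g h _ z AB(1) _ AB(2)] x A by auto
    qed (use gh fc in \<open>auto simp: coeffs_closed\<close>)
    also have "\<dots> = (f \<otimes>\<^bsub>galg R G\<^esub> (g \<otimes>\<^bsub>galg R G\<^esub> h)) z"
      using galg_mult_eq_sum[OF f gh A(1) _ A(2) z] A_def by simp
    finally show ?thesis .
  qed
qed

lemma galg_one_closed: "\<one>\<^bsub>galg R G\<^esub> \<in> coeffs"
  unfolding galg_simps fin_coeffs_def by auto

lemma galg_one_eq_delta: "\<one>\<^bsub>galg R G\<^esub> = delta R \<one>\<^bsub>G\<^esub>"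
  unfolding galg_simps delta_def by simp

lemma galg_l_one:
  assumes g: "g \<in> coeffs" shows "\<one>\<^bsub>galg R G\<^esub> \<otimes>\<^bsub>galg R G\<^esub> g = g"
proof (rule ext)
  fix z show "(\<one>\<^bsub>galg R G\<^esub> \<otimes>\<^bsub>galg R G\<^esub> g) z = g z"
  proof (cases "z \<in> carrier G")
    case False then show ?thesis using fin_coeffsD(2)[OF g False] by (simp add: galg_mult_outside)
  next
    case True
    have "(\<one>\<^bsub>galg R G\<^esub> \<otimes>\<^bsub>galg R G\<^esub> g) z = (\<Oplus>\<^bsub>R\<^esub>x\<in>{\<one>\<^bsub>G\<^esub>}. \<one>\<^bsub>galg R G\<^esub> x \<otimes>\<^bsub>R\<^esub> g (inv\<^bsub>G\<^esub> x \<otimes>\<^bsub>G\<^esub> z))"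
      proof (rule galg_mult_eq_sum[OF galg_one_closed g _ _ _ True])
      show "supp \<one>\<^bsub>galg R G\<^esub> \<subseteq> {\<one>\<^bsub>G\<^esub>}" unfolding galg_simps(3) by auto
    qed auto
    also have "\<dots> = g z" using True g by (simp add: galg_simps coeffs_closed)
    finally show ?thesis .
  qed
qed

lemma galg_r_one:
  assumes f: "f \<in> coeffs" shows "f \<otimes>\<^bsub>galg R G\<^esub> \<one>\<^bsub>galg R G\<^esub> = f"
proof (rule ext)
  fix z show "(f \<otimes>\<^bsub>galg R G\<^esub> \<one>\<^bsub>galg R G\<^esub>) z = f z"
  proof (cases "z \<in> carrier G")
    case False then show ?thesis using fin_coeffsD(2)[OF f False] by (simp add: galg_mult_outside)
  next
    case True
    have A: "finite (insert z (supp f))" "insert z (supp f) \<subseteq> carrier G" using supp_coeffs[OF f] True by auto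
    have "(f \<otimes>\<^bsub>galg R G\<^esub> \<one>\<^bsub>galg R G\<^esub>) z = (\<Oplus>\<^bsub>R\<^esub>x\<in>insert z (supp f). f x \<otimes>\<^bsub>R\<^esub> \<one>\<^bsub>galg R G\<^esub> (inv\<^bsub>G\<^esub> x \<otimes>\<^bsub>G\<^esub> z))"
      by (rule galg_mult_eq_sum[OF f galg_one_closed A(1) _ A(2) True]) auto
    also have "\<dots> = (\<Oplus>\<^bsub>R\<^esub>x\<in>insert z (supp f). if z = x then f x else \<zero>\<^bsub>R\<^esub>)"
    proof (intro R.finsum_cong' refl)
      fix x assume x: "x \<in> insert z (supp f)"
      then have xc: "x \<in> carrier G" using A by auto
      have "(inv\<^bsub>G\<^esub> x \<otimes>\<^bsub>G\<^esub> z = \<one>\<^bsub>G\<^esub>) = (z = x)"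
      proof
        assume hh: "inv\<^bsub>G\<^esub> x \<otimes>\<^bsub>G\<^esub> z = \<one>\<^bsub>G\<^esub>"
        have "z = x \<otimes>\<^bsub>G\<^esub> (inv\<^bsub>G\<^esub> x \<otimes>\<^bsub>G\<^esub> z)" using xc True by (simp add: G.m_assoc[symmetric])
        then show "z = x" using hh xc by simp
      next
        assume "z = x" then show "inv\<^bsub>G\<^esub> x \<otimes>\<^bsub>G\<^esub> z = \<one>\<^bsub>G\<^esub>" using xc by simp
      qed
      then show "f x \<otimes>\<^bsub>R\<^esub> \<one>\<^bsub>galg R G\<^esub> (inv\<^bsub>G\<^esub> x \<otimes>\<^bsub>G\<^esub> z) = (if z = x then f x else \<zero>\<^bsub>R\<^esub>)"
        using f by (simp add: galg_simps(3) coeffs_closed)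
    qed (use f in \<open>auto simp: coeffs_closed\<close>)
    also have "\<dots> = f z" by (rule R.add.finprod_singleton) (use A f in \<open>auto simp: coeffs_closed\<close>)
    finally show ?thesis .
  qed
qed

lemma galg_l_distr:
  assumes f: "f \<in> coeffs" and g: "g \<in> coeffs" and h: "h \<in> coeffs"
  shows "(f \<oplus>\<^bsub>galg R G\<^esub> g) \<otimes>\<^bsub>galg R G\<^esub> h = f \<otimes>\<^bsub>galg R G\<^esub> h \<oplus>\<^bsub>galg R G\<^esub> g \<otimes>\<^bsub>galg R G\<^esub> h"
proof (rule ext)
  fix z
  have fg: "f \<oplus>\<^bsub>galg R G\<^esub> g \<in> coeffs" using f g by (simp add: galg_simps(5) R.fin_coeffs_add)
  show "((f \<oplus>\<^bsub>galg R G\<^esub> g) \<otimes>\<^bsub>galg R G\<^esub> h) z = (f \<otimes>\<^bsub>galg R G\<^esub> h \<oplus>\<^bsub>galg R G\<^esub> g \<otimes>\<^bsub>galg R G\<^esub> h) z"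
  proof (cases "z \<in> carrier G")
    case False then show ?thesis by (simp add: galg_mult_outside galg_simps(5))
  next
    case True
    define A where "A = supp f \<union> supp g"
    have A: "finite A" "A \<subseteq> carrier G" using supp_coeffs[OF f] supp_coeffs[OF g] A_def by auto
    have fc: "\<And>x. f x \<in> carrier R" "\<And>x. g x \<in> carrier R" "\<And>x. h x \<in> carrier R"
      using f g h by (auto simp: coeffs_closed)
    have "((f \<oplus>\<^bsub>galg R G\<^esub> g) \<otimes>\<^bsub>galg R G\<^esub> h) z = (\<Oplus>\<^bsub>R\<^esub>x\<in>A. (f \<oplus>\<^bsub>galg R G\<^esub> g) x \<otimes>\<^bsub>R\<^esub> h (inv\<^bsub>G\<^esub> x \<otimes>\<^bsub>G\<^esub> z))"
      by (rule galg_mult_eq_sum[OF fg h A(1) _ A(2) True]) (auto simp: A_def galg_simps(5))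
    also have "\<dots> = (\<Oplus>\<^bsub>R\<^esub>x\<in>A. f x \<otimes>\<^bsub>R\<^esub> h (inv\<^bsub>G\<^esub> x \<otimes>\<^bsub>G\<^esub> z) \<oplus>\<^bsub>R\<^esub> g x \<otimes>\<^bsub>R\<^esub> h (inv\<^bsub>G\<^esub> x \<otimes>\<^bsub>G\<^esub> z))"
      by (intro R.finsum_cong') (use fc in \<open>auto simp: galg_simps(5) R.l_distr\<close>)
    also have "\<dots> = (\<Oplus>\<^bsub>R\<^esub>x\<in>A. f x \<otimes>\<^bsub>R\<^esub> h (inv\<^bsub>G\<^esub> x \<otimes>\<^bsub>G\<^esub> z)) \<oplus>\<^bsub>R\<^esub> (\<Oplus>\<^bsub>R\<^esub>x\<in>A. g x \<otimes>\<^bsub>R\<^esub> h (inv\<^bsub>G\<^esub> x \<otimes>\<^bsub>G\<^esub> z))"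
      by (rule R.finsum_addf) (use fc in auto)
    also have "\<dots> = (f \<otimes>\<^bsub>galg R G\<^esub> h \<oplus>\<^bsub>galg R G\<^esub> g \<otimes>\<^bsub>galg R G\<^esub> h) z"
      using galg_mult_eq_sum[OF f h A(1) _ A(2) True] galg_mult_eq_sum[OF g h A(1) _ A(2) True] A_def
      by (simp add: galg_simps(5))
    finally show ?thesis .
  qed
qed

lemma galg_r_distr:
  assumes f: "f \<in> coeffs" and g: "g \<in> coeffs" and h: "h \<in> coeffs"
  shows "h \<otimes>\<^bsub>galg R G\<^esub> (f \<oplus>\<^bsub>galg R G\<^esub> g) = h \<otimes>\<^bsub>galg R G\<^esub> f \<oplus>\<^bsub>galg R G\<^esub> h \<otimes>\<^bsub>galg R G\<^esub> g"
proof (rule ext)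
  fix z
  have fg: "f \<oplus>\<^bsub>galg R G\<^esub> g \<in> coeffs" using f g by (simp add: galg_simps(5) R.fin_coeffs_add)
  show "(h \<otimes>\<^bsub>galg R G\<^esub> (f \<oplus>\<^bsub>galg R G\<^esub> g)) z = (h \<otimes>\<^bsub>galg R G\<^esub> f \<oplus>\<^bsub>galg R G\<^esub> h \<otimes>\<^bsub>galg R G\<^esub> g) z"
  proof (cases "z \<in> carrier G")
    case False then show ?thesis by (simp add: galg_mult_outside galg_simps(5))
  next
    case True
    define A where "A = supp h"
    have A: "finite A" "A \<subseteq> carrier G" using supp_coeffs[OF h] A_def by auto
    have fc: "\<And>x. f x \<in> carrier R" "\<And>x. g x \<in> carrier R" "\<And>x. h x \<in> carrier R"
      using f g h by (auto simp: coeffs_closed)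
    have "(h \<otimes>\<^bsub>galg R G\<^esub> (f \<oplus>\<^bsub>galg R G\<^esub> g)) z = (\<Oplus>\<^bsub>R\<^esub>x\<in>A. h x \<otimes>\<^bsub>R\<^esub> (f \<oplus>\<^bsub>galg R G\<^esub> g) (inv\<^bsub>G\<^esub> x \<otimes>\<^bsub>G\<^esub> z))"
      by (rule galg_mult_eq_sum[OF h fg A(1) _ A(2) True]) (auto simp: A_def)
    also have "\<dots> = (\<Oplus>\<^bsub>R\<^esub>x\<in>A. h x \<otimes>\<^bsub>R\<^esub> f (inv\<^bsub>G\<^esub> x \<otimes>\<^bsub>G\<^esub> z) \<oplus>\<^bsub>R\<^esub> h x \<otimes>\<^bsub>R\<^esub> g (inv\<^bsub>G\<^esub> x \<otimes>\<^bsub>G\<^esub> z))"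
      by (intro R.finsum_cong') (use fc in \<open>auto simp: galg_simps(5) R.r_distr\<close>)
    also have "\<dots> = (\<Oplus>\<^bsub>R\<^esub>x\<in>A. h x \<otimes>\<^bsub>R\<^esub> f (inv\<^bsub>G\<^esub> x \<otimes>\<^bsub>G\<^esub> z)) \<oplus>\<^bsub>R\<^esub> (\<Oplus>\<^bsub>R\<^esub>x\<in>A. h x \<otimes>\<^bsub>R\<^esub> g (inv\<^bsub>G\<^esub> x \<otimes>\<^bsub>G\<^esub> z))"
      by (rule R.finsum_addf) (use fc in auto)
    also have "\<dots> = (h \<otimes>\<^bsub>galg R G\<^esub> f \<oplus>\<^bsub>galg R G\<^esub> h \<otimes>\<^bsub>galg R G\<^esub> g) z"
      using galg_mult_eq_sum[OF h f A(1) _ A(2) True] galg_mult_eq_sum[OF h g A(1) _ A(2) True] A_def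
      by (simp add: galg_simps(5))
    finally show ?thesis .
  qed
qed

lemma galg_ring: "ring (galg R G)"
proof (rule ringI)
  show "abelian_group (galg R G)" by (rule galg_abelian_group)
  show "monoid (galg R G)"
    by (rule monoidI) (auto simp: galg_mult_closed galg_mult_assoc galg_l_one galg_r_one galg_one_closed galg_simps(1))
qed (auto simp: galg_l_distr galg_r_distr galg_simps(1))

lemma galg_smult_closed: "r \<in> carrier R \<Longrightarrow> f \<in> coeffs \<Longrightarrow> r \<odot>\<^bsub>galg R G\<^esub> f \<in> coeffs"
  by (simp add: galg_simps(6) R.fin_coeffs_smult)

lemma galg_smult_mult_l:
  assumes r: "r \<in> carrier R" and f: "f \<in> coeffs" and g: "g \<in> coeffs"
  shows "(r \<odot>\<^bsub>galg R G\<^esub> f) \<otimes>\<^bsub>galg R G\<^esub> g = r \<odot>\<^bsub>galg R G\<^esub> (f \<otimes>\<^bsub>galg R G\<^esub> g)"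
proof (rule ext)
  fix z
  have rf: "r \<odot>\<^bsub>galg R G\<^esub> f \<in> coeffs" by (rule galg_smult_closed[OF r f])
  show "((r \<odot>\<^bsub>galg R G\<^esub> f) \<otimes>\<^bsub>galg R G\<^esub> g) z = (r \<odot>\<^bsub>galg R G\<^esub> (f \<otimes>\<^bsub>galg R G\<^esub> g)) z"
  proof (cases "z \<in> carrier G")
    case False then show ?thesis using r by (simp add: galg_mult_outside galg_simps(6))
  next
    case True
    define A where "A = supp f"
    have A: "finite A" "A \<subseteq> carrier G" using supp_coeffs[OF f] A_def by auto
    have fc: "\<And>x. f x \<in> carrier R" "\<And>x. g x \<in> carrier R"
      using f g by (auto simp: coeffs_closed)
    have "((r \<odot>\<^bsub>galg R G\<^esub> f) \<otimes>\<^bsub>galg R G\<^esub> g) z = (\<Oplus>\<^bsub>R\<^esub>x\<in>A. (r \<odot>\<^bsub>galg R G\<^esub> f) x \<otimes>\<^bsub>R\<^esub> g (inv\<^bsub>G\<^esub> x \<otimes>\<^bsub>G\<^esub> z))"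
      by (rule galg_mult_eq_sum[OF rf g A(1) _ A(2) True]) (use r in \<open>auto simp: A_def galg_simps(6)\<close>)
    also have "\<dots> = (\<Oplus>\<^bsub>R\<^esub>x\<in>A. r \<otimes>\<^bsub>R\<^esub> (f x \<otimes>\<^bsub>R\<^esub> g (inv\<^bsub>G\<^esub> x \<otimes>\<^bsub>G\<^esub> z)))"
      by (intro R.finsum_cong') (use fc r in \<open>auto simp: galg_simps(6) R.m_assoc\<close>)
    also have "\<dots> = r \<otimes>\<^bsub>R\<^esub> (\<Oplus>\<^bsub>R\<^esub>x\<in>A. f x \<otimes>\<^bsub>R\<^esub> g (inv\<^bsub>G\<^esub> x \<otimes>\<^bsub>G\<^esub> z))"
      by (rule R.finsum_rdistr[symmetric]) (use fc r A in auto)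
    also have "\<dots> = (r \<odot>\<^bsub>galg R G\<^esub> (f \<otimes>\<^bsub>galg R G\<^esub> g)) z"
      using galg_mult_eq_sum[OF f g A(1) _ A(2) True] A_def by (simp add: galg_simps(6))
    finally show ?thesis .
  qed
qed

lemma galg_smult_mult_r:
  assumes r: "r \<in> carrier R" and f: "f \<in> coeffs" and g: "g \<in> coeffs"
  shows "f \<otimes>\<^bsub>galg R G\<^esub> (r \<odot>\<^bsub>galg R G\<^esub> g) = r \<odot>\<^bsub>galg R G\<^esub> (f \<otimes>\<^bsub>galg R G\<^esub> g)"
proof (rule ext)
  fix z
  have rg: "r \<odot>\<^bsub>galg R G\<^esub> g \<in> coeffs" by (rule galg_smult_closed[OF r g])
  show "(f \<otimes>\<^bsub>galg R G\<^esub> (r \<odot>\<^bsub>galg R G\<^esub> g)) z = (r \<odot>\<^bsub>galg R G\<^esub> (f \<otimes>\<^bsub>galg R G\<^esub> g)) z"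
  proof (cases "z \<in> carrier G")
    case False then show ?thesis using r by (simp add: galg_mult_outside galg_simps(6))
  next
    case True
    define A where "A = supp f"
    have A: "finite A" "A \<subseteq> carrier G" using supp_coeffs[OF f] A_def by auto
    have fc: "\<And>x. f x \<in> carrier R" "\<And>x. g x \<in> carrier R"
      using f g by (auto simp: coeffs_closed)
    have "(f \<otimes>\<^bsub>galg R G\<^esub> (r \<odot>\<^bsub>galg R G\<^esub> g)) z = (\<Oplus>\<^bsub>R\<^esub>x\<in>A. f x \<otimes>\<^bsub>R\<^esub> (r \<odot>\<^bsub>galg R G\<^esub> g) (inv\<^bsub>G\<^esub> x \<otimes>\<^bsub>G\<^esub> z))"
      by (rule galg_mult_eq_sum[OF f rg A(1) _ A(2) True]) (auto simp: A_def)
    also have "\<dots> = (\<Oplus>\<^bsub>R\<^esub>x\<in>A. r \<otimes>\<^bsub>R\<^esub> (f x \<otimes>\<^bsub>R\<^esub> g (inv\<^bsub>G\<^esub> x \<otimes>\<^bsub>G\<^esub> z)))"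
      by (intro R.finsum_cong') (use fc r in \<open>auto simp: galg_simps(6) R.m_lcomm\<close>)
    also have "\<dots> = r \<otimes>\<^bsub>R\<^esub> (\<Oplus>\<^bsub>R\<^esub>x\<in>A. f x \<otimes>\<^bsub>R\<^esub> g (inv\<^bsub>G\<^esub> x \<otimes>\<^bsub>G\<^esub> z))"
      by (rule R.finsum_rdistr[symmetric]) (use fc r A in auto)
    also have "\<dots> = (r \<odot>\<^bsub>galg R G\<^esub> (f \<otimes>\<^bsub>galg R G\<^esub> g)) z"
      using galg_mult_eq_sum[OF f g A(1) _ A(2) True] A_def by (simp add: galg_simps(6))
    finally show ?thesis .
  qed
qed

lemma galg_module: "module R (galg R G)"
proof (rule moduleI)
  show "cring R" by (rule R.is_cring)
  show "abelian_group (galg R G)" by (rule galg_abelian_group)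
qed (auto simp: galg_simps(1,5,6) R.fin_coeffs_smult coeffs_closed R.l_distr R.r_distr R.m_assoc)

lemma delta_mult:
  assumes a: "a \<in> carrier G" and b: "b \<in> carrier G"
  shows "delta R a \<otimes>\<^bsub>galg R G\<^esub> delta R b = delta R (a \<otimes>\<^bsub>G\<^esub> b)"
proof (rule ext)
  fix z
  show "(delta R a \<otimes>\<^bsub>galg R G\<^esub> delta R b) z = delta R (a \<otimes>\<^bsub>G\<^esub> b) z"
  proof (cases "z \<in> carrier G")
    case False
    then have "z \<noteq> a \<otimes>\<^bsub>G\<^esub> b" using a b by auto
    then show ?thesis using False by (simp add: galg_mult_outside delta_def)
  next
    case True
    have "(delta R a \<otimes>\<^bsub>galg R G\<^esub> delta R b) z = (\<Oplus>\<^bsub>R\<^esub>x\<in>{a}. delta R a x \<otimes>\<^bsub>R\<^esub> delta R b (inv\<^bsub>G\<^esub> x \<otimes>\<^bsub>G\<^esub> z))"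
    proof (rule galg_mult_eq_sum[OF R.delta_fin_coeffs[OF a] R.delta_fin_coeffs[OF b] _ _ _ True])
      show "supp (delta R a) \<subseteq> {a}" unfolding delta_def by auto
    qed (use a in auto)
    also have "\<dots> = delta R b (inv\<^bsub>G\<^esub> a \<otimes>\<^bsub>G\<^esub> z)"
      by (simp add: delta_def)
    also have "\<dots> = delta R (a \<otimes>\<^bsub>G\<^esub> b) z"
      using G.inv_solve_left[OF b a True] by (auto simp: delta_def)
    finally show ?thesis .
  qed
qed

lemma galg_finsum_eval:
  assumes A: "finite A" and F: "\<And>x. x \<in> A \<Longrightarrow> F x \<in> coeffs"
  shows "finsum (galg R G) F A z = (\<Oplus>\<^bsub>R\<^esub>x\<in>A. F x z)"
  using A F
proof (induct A rule: finite_induct)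
  case empty
  have e: "finsum (galg R G) F {} = (\<lambda>z. \<zero>\<^bsub>R\<^esub>)"
    using abelian_monoid.finsum_empty[OF abelian_group.axioms(1)[OF galg_abelian_group]] by (simp add: galg_simps(4))
  then show ?case by simp
next
  case (insert a A)
  have "finsum (galg R G) F (insert a A) = F a \<oplus>\<^bsub>galg R G\<^esub> finsum (galg R G) F A"
    using insert by (intro abelian_monoid.finsum_insert[OF abelian_group.axioms(1)[OF galg_abelian_group]]) (auto simp: galg_simps(1))
  then show ?case using insert
    by (simp add: galg_simps(5) coeffs_closed R.finsum_insert)
qed

lemma galg_expansion:
  assumes f: "f \<in> coeffs"
  shows "f = (\<Oplus>\<^bsub>galg R G\<^esub>x\<in>supp f. f x \<odot>\<^bsub>galg R G\<^esub> delta R x)"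
proof (rule ext)
  fix z
  have sp: "finite (supp f)" "supp f \<subseteq> carrier G" using supp_coeffs[OF f] by auto
  have dd: "\<And>x. x \<in> supp f \<Longrightarrow> f x \<odot>\<^bsub>galg R G\<^esub> delta R x \<in> coeffs"
    using sp f by (auto intro!: galg_smult_closed R.delta_fin_coeffs simp: coeffs_closed)
  have "(\<Oplus>\<^bsub>galg R G\<^esub>x\<in>supp f. f x \<odot>\<^bsub>galg R G\<^esub> delta R x) z
      = (\<Oplus>\<^bsub>R\<^esub>x\<in>supp f. (f x \<odot>\<^bsub>galg R G\<^esub> delta R x) z)"
    by (rule galg_finsum_eval[OF sp(1) dd])
  also have "\<dots> = (\<Oplus>\<^bsub>R\<^esub>x\<in>supp f. if z = x then f x else \<zero>\<^bsub>R\<^esub>)"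
    by (intro R.finsum_cong') (use f in \<open>auto simp: galg_simps(6) delta_def coeffs_closed\<close>)
  also have "\<dots> = f z"
  proof (cases "z \<in> supp f")
    case True then show ?thesis
      by (intro R.add.finprod_singleton) (use sp f in \<open>auto simp: coeffs_closed\<close>)
  next
    case False then show ?thesis
      by (intro trans[OF R.add.finprod_one_eqI]) auto
  qed
  finally show "f z = (\<Oplus>\<^bsub>galg R G\<^esub>x\<in>supp f. f x \<odot>\<^bsub>galg R G\<^esub> delta R x) z" by simp
qed

end

lemma (in group_algebra) galg_r_algebra: "r_algebra R (galg R G)"
  unfolding r_algebra_def r_algebra_axioms_def
  using R.is_cring galg_module galg_ring galg_smult_mult_l galg_smult_mult_r by (auto simp: galg_simps(1))

sublocale group_algebra \<subseteq> RA: r_algebra R "galg R G" by (rule galg_r_algebra)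

section \<open>The universal property of group algebras\<close>

locale group_algebra_lift = group_algebra R G + r_algebra R H
  for R :: "('r,'d) ring_scheme" and G :: "('g,'e) monoid_scheme" and H :: "('r,'h) module" +
  fixes psi :: "'g \<Rightarrow> 'h"
  assumes psi_closed: "x \<in> carrier G \<Longrightarrow> psi x \<in> carrier H"
    and psi_mult: "x \<in> carrier G \<Longrightarrow> y \<in> carrier G \<Longrightarrow> psi (x \<otimes>\<^bsub>G\<^esub> y) = psi x \<otimes>\<^bsub>H\<^esub> psi y"
    and psi_one: "psi \<one>\<^bsub>G\<^esub> = \<one>\<^bsub>H\<^esub>"
begin

definition lift where "lift f = (\<Oplus>\<^bsub>H\<^esub>x\<in>supp f. f x \<odot>\<^bsub>H\<^esub> psi x)"

lemma lift_eq_sum: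
  assumes f: "f \<in> coeffs" and A: "finite A" "supp f \<subseteq> A" "A \<subseteq> carrier G"
  shows "lift f = (\<Oplus>\<^bsub>H\<^esub>x\<in>A. f x \<odot>\<^bsub>H\<^esub> psi x)"
  unfolding lift_def
  by (rule M.finsum_superset) (use A f in \<open>auto simp: coeffs_closed psi_closed\<close>)

lemma lift_closed: assumes f: "f \<in> coeffs" shows "lift f \<in> carrier H"
proof -
  have "supp f \<subseteq> carrier G" using supp_coeffs[OF f] by blast
  then show ?thesis unfolding lift_def using f by (intro M.finsum_closed) (auto simp: coeffs_closed psi_closed)
qed

lemma lift_add:
  assumes f: "f \<in> coeffs" and g: "g \<in> coeffs"
  shows "lift (f \<oplus>\<^bsub>galg R G\<^esub> g) = lift f \<oplus>\<^bsub>H\<^esub> lift g"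
proof -
  define A where "A = supp f \<union> supp g"
  have A: "finite A" "A \<subseteq> carrier G" using supp_coeffs[OF f] supp_coeffs[OF g] A_def by auto
  have fg: "f \<oplus>\<^bsub>galg R G\<^esub> g \<in> coeffs" using f g by (simp add: galg_simps(5) R.fin_coeffs_add)
  have "lift (f \<oplus>\<^bsub>galg R G\<^esub> g) = (\<Oplus>\<^bsub>H\<^esub>x\<in>A. (f x \<oplus>\<^bsub>R\<^esub> g x) \<odot>\<^bsub>H\<^esub> psi x)"
    by (subst lift_eq_sum[OF fg A(1) _ A(2)]) (auto simp: A_def galg_simps(5))
  also have "\<dots> = (\<Oplus>\<^bsub>H\<^esub>x\<in>A. f x \<odot>\<^bsub>H\<^esub> psi x \<oplus>\<^bsub>H\<^esub> g x \<odot>\<^bsub>H\<^esub> psi x)"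
    by (intro M.finsum_cong') (use A f g in \<open>auto simp: M.smult_l_distr coeffs_closed psi_closed\<close>)
  also have "\<dots> = lift f \<oplus>\<^bsub>H\<^esub> lift g"
    by (subst M.finsum_addf) (use A f g in \<open>auto simp: coeffs_closed psi_closed lift_eq_sum[OF f A(1) _ A(2)] lift_eq_sum[OF g A(1) _ A(2)] A_def\<close>)
  finally show ?thesis .
qed

lemma lift_smult:
  assumes r: "r \<in> carrier R" and f: "f \<in> coeffs"
  shows "lift (r \<odot>\<^bsub>galg R G\<^esub> f) = r \<odot>\<^bsub>H\<^esub> lift f"
proof -
  define A where "A = supp f"
  have A: "finite A" "A \<subseteq> carrier G" using supp_coeffs[OF f] A_def by auto
  have rf: "r \<odot>\<^bsub>galg R G\<^esub> f \<in> coeffs" by (rule galg_smult_closed[OF r f])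
  have "lift (r \<odot>\<^bsub>galg R G\<^esub> f) = (\<Oplus>\<^bsub>H\<^esub>x\<in>A. (r \<otimes>\<^bsub>R\<^esub> f x) \<odot>\<^bsub>H\<^esub> psi x)"
    by (subst lift_eq_sum[OF rf A(1) _ A(2)]) (use r in \<open>auto simp: A_def galg_simps(6)\<close>)
  also have "\<dots> = (\<Oplus>\<^bsub>H\<^esub>x\<in>A. r \<odot>\<^bsub>H\<^esub> (f x \<odot>\<^bsub>H\<^esub> psi x))"
    by (intro M.finsum_cong') (use A f r in \<open>auto simp: M.smult_assoc1 coeffs_closed psi_closed\<close>)
  also have "\<dots> = r \<odot>\<^bsub>H\<^esub> (\<Oplus>\<^bsub>H\<^esub>x\<in>A. f x \<odot>\<^bsub>H\<^esub> psi x)"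
    by (rule M.finsum_smult_ldistr[symmetric]) (use A f r in \<open>auto simp: coeffs_closed psi_closed\<close>)
  also have "\<dots> = r \<odot>\<^bsub>H\<^esub> lift f"
    using lift_eq_sum[OF f A(1) _ A(2)] A_def by simp
  finally show ?thesis .
qed

lemma lift_delta: "g \<in> carrier G \<Longrightarrow> lift (delta R g) = psi g"
  by (subst lift_eq_sum[OF R.delta_fin_coeffs, of g "{g}"]) (auto simp: delta_def psi_closed)

lemma lift_one: "lift \<one>\<^bsub>galg R G\<^esub> = \<one>\<^bsub>H\<^esub>"
  using lift_delta[of "\<one>\<^bsub>G\<^esub>"] psi_one by (simp add: galg_one_eq_delta)

lemma lift_translated_sum:
  assumes g: "g \<in> coeffs" and r: "r \<in> carrier R" and x: "x \<in> carrier G"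
    and C: "finite C" "(\<lambda>y. x \<otimes>\<^bsub>G\<^esub> y) ` supp g \<subseteq> C" "C \<subseteq> carrier G"
  shows "(\<Oplus>\<^bsub>H\<^esub>z\<in>C. (r \<otimes>\<^bsub>R\<^esub> g (inv\<^bsub>G\<^esub> x \<otimes>\<^bsub>G\<^esub> z)) \<odot>\<^bsub>H\<^esub> psi z) = (r \<odot>\<^bsub>H\<^esub> psi x) \<otimes>\<^bsub>H\<^esub> lift g"
proof -
  have B: "finite (supp g)" "supp g \<subseteq> carrier G" using supp_coeffs[OF g] by auto
  have gc: "\<And>y. g y \<in> carrier R" using g by (rule coeffs_closed)
  have "(\<Oplus>\<^bsub>H\<^esub>z\<in>C. (r \<otimes>\<^bsub>R\<^esub> g (inv\<^bsub>G\<^esub> x \<otimes>\<^bsub>G\<^esub> z)) \<odot>\<^bsub>H\<^esub> psi z)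
      = (\<Oplus>\<^bsub>H\<^esub>y\<in>supp g. (r \<otimes>\<^bsub>R\<^esub> g (inv\<^bsub>G\<^esub> x \<otimes>\<^bsub>G\<^esub> (x \<otimes>\<^bsub>G\<^esub> y))) \<odot>\<^bsub>H\<^esub> psi (x \<otimes>\<^bsub>G\<^esub> y))"
    by (rule finsum_translate[OF M.abelian_monoid_axioms x g C(1,2,3)])
      (use r gc C(3) psi_closed in auto)
  also have "\<dots> = (\<Oplus>\<^bsub>H\<^esub>y\<in>supp g. (r \<odot>\<^bsub>H\<^esub> psi x) \<otimes>\<^bsub>H\<^esub> (g y \<odot>\<^bsub>H\<^esub> psi y))"
  proof (intro M.finsum_cong' refl)
    fix y assume "y \<in> supp g"
    then have y: "y \<in> carrier G" using B by auto
    have "(r \<otimes>\<^bsub>R\<^esub> g (inv\<^bsub>G\<^esub> x \<otimes>\<^bsub>G\<^esub> (x \<otimes>\<^bsub>G\<^esub> y))) \<odot>\<^bsub>H\<^esub> psi (x \<otimes>\<^bsub>G\<^esub> y)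
        = r \<odot>\<^bsub>H\<^esub> (g y \<odot>\<^bsub>H\<^esub> (psi x \<otimes>\<^bsub>H\<^esub> psi y))"
      using x y r gc by (simp add: G.m_assoc[symmetric] psi_mult psi_closed M.smult_assoc1)
    also have "\<dots> = (r \<odot>\<^bsub>H\<^esub> psi x) \<otimes>\<^bsub>H\<^esub> (g y \<odot>\<^bsub>H\<^esub> psi y)"
      using x y r gc by (simp add: psi_closed smult_mult_l[of r "psi x"] smult_mult_r[of "g y" "psi x" "psi y"])
    finally show "(r \<otimes>\<^bsub>R\<^esub> g (inv\<^bsub>G\<^esub> x \<otimes>\<^bsub>G\<^esub> (x \<otimes>\<^bsub>G\<^esub> y))) \<odot>\<^bsub>H\<^esub> psi (x \<otimes>\<^bsub>G\<^esub> y)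
        = (r \<odot>\<^bsub>H\<^esub> psi x) \<otimes>\<^bsub>H\<^esub> (g y \<odot>\<^bsub>H\<^esub> psi y)" .
  qed (use x B r gc psi_closed in auto)
  also have "\<dots> = (r \<odot>\<^bsub>H\<^esub> psi x) \<otimes>\<^bsub>H\<^esub> lift g"
    unfolding lift_def
    by (rule H.finsum_rdistr[symmetric]) (use B r gc x psi_closed in auto)
  finally show ?thesis .
qed

lemma lift_mult:
  assumes f: "f \<in> coeffs" and g: "g \<in> coeffs"
  shows "lift (f \<otimes>\<^bsub>galg R G\<^esub> g) = lift f \<otimes>\<^bsub>H\<^esub> lift g"
proof -
  define A where "A = supp f"
  define AB where "AB = supp f <#>\<^bsub>G\<^esub> supp g"
  have A: "finite A" "A \<subseteq> carrier G" using supp_coeffs[OF f] A_def by auto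
  have AB: "finite AB" "AB \<subseteq> carrier G" using finite_supp_set_mult[OF f g] AB_def by auto
  have fg: "f \<otimes>\<^bsub>galg R G\<^esub> g \<in> coeffs" by (rule galg_mult_closed[OF f g])
  have fc: "\<And>x. f x \<in> carrier R" "\<And>x. g x \<in> carrier R"
    using f g by (auto simp: coeffs_closed)
  have pc: "\<And>x. x \<in> carrier G \<Longrightarrow> psi x \<in> carrier H" by (rule psi_closed)
  have "lift (f \<otimes>\<^bsub>galg R G\<^esub> g) = (\<Oplus>\<^bsub>H\<^esub>z\<in>AB. (f \<otimes>\<^bsub>galg R G\<^esub> g) z \<odot>\<^bsub>H\<^esub> psi z)"
    by (rule lift_eq_sum[OF fg AB(1) _ AB(2)]) (use supp_galg_mult[OF f g] AB_def in blast)
  also have "\<dots> = (\<Oplus>\<^bsub>H\<^esub>z\<in>AB. (\<Oplus>\<^bsub>R\<^esub>x\<in>A. f x \<otimes>\<^bsub>R\<^esub> g (inv\<^bsub>G\<^esub> x \<otimes>\<^bsub>G\<^esub> z)) \<odot>\<^bsub>H\<^esub> psi z)"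
    by (intro M.finsum_cong') (use galg_mult_eq_sum[OF f g A(1) _ A(2)] A_def AB fc pc in \<open>auto intro!: R.finsum_closed\<close>)
  also have "\<dots> = (\<Oplus>\<^bsub>H\<^esub>z\<in>AB. \<Oplus>\<^bsub>H\<^esub>x\<in>A. (f x \<otimes>\<^bsub>R\<^esub> g (inv\<^bsub>G\<^esub> x \<otimes>\<^bsub>G\<^esub> z)) \<odot>\<^bsub>H\<^esub> psi z)"
    by (intro M.finsum_cong' finsum_smult_rdistr) (use A AB fc pc in auto)
  also have "\<dots> = (\<Oplus>\<^bsub>H\<^esub>x\<in>A. \<Oplus>\<^bsub>H\<^esub>z\<in>AB. (f x \<otimes>\<^bsub>R\<^esub> g (inv\<^bsub>G\<^esub> x \<otimes>\<^bsub>G\<^esub> z)) \<odot>\<^bsub>H\<^esub> psi z)"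
    by (rule M.finsum_swap) (use A AB fc pc in auto)
  also have "\<dots> = (\<Oplus>\<^bsub>H\<^esub>x\<in>A. (f x \<odot>\<^bsub>H\<^esub> psi x) \<otimes>\<^bsub>H\<^esub> lift g)"
  proof (intro M.finsum_cong' refl)
    fix x assume x: "x \<in> A"
    then have "(\<lambda>y. x \<otimes>\<^bsub>G\<^esub> y) ` supp g \<subseteq> AB" using A_def AB_def by (auto simp: set_mult_def)
    then show "(\<Oplus>\<^bsub>H\<^esub>z\<in>AB. (f x \<otimes>\<^bsub>R\<^esub> g (inv\<^bsub>G\<^esub> x \<otimes>\<^bsub>G\<^esub> z)) \<odot>\<^bsub>H\<^esub> psi z) = (f x \<odot>\<^bsub>H\<^esub> psi x) \<otimes>\<^bsub>H\<^esub> lift g"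
      using lift_translated_sum[OF g fc(1) _ AB(1) _ AB(2)] x A by auto
  qed (use A fc pc lift_closed[OF g] in auto)
  also have "\<dots> = lift f \<otimes>\<^bsub>H\<^esub> lift g"
    unfolding lift_def[of f] A_def
    by (rule H.finsum_ldistr[symmetric]) (use A_def A fc pc lift_closed[OF g] in auto)
  finally show ?thesis .
qed

lemma lift_ring_hom: "lift \<in> ring_hom (galg R G) H"
  by (rule ring_hom_memI) (auto simp: galg_simps(1) lift_closed lift_mult lift_add lift_one)

end

section \<open>Groups given by generators and relations\<close>

lemma equivclp_invariant:
  assumes "equivclp r x y" "\<And>a b. r a b \<Longrightarrow> f a = f b"
  shows "f x = f y"
proof -
  have "(symclp r)\<^sup>*\<^sup>* x y" using assms(1) by (simp add: equivclp_def)
  then show ?thesis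
  proof (induct rule: rtranclp_induct)
    case base then show ?case by simp
  next
    case (step y z)
    then show ?case using assms(2) by (auto simp: symclp_def)
  qed
qed

lemma equivclp_map:
  assumes "equivclp r x y" "\<And>a b. r a b \<Longrightarrow> r (f a) (f b)"
  shows "equivclp r (f x) (f y)"
proof -
  have "(symclp r)\<^sup>*\<^sup>* x y" using assms(1) by (simp add: equivclp_def)
  then show ?thesis
  proof (induct rule: rtranclp_induct)
    case base then show ?case by simp
  next
    case (step y z)
    then have "symclp r (f y) (f z)" using assms(2) by (auto simp: symclp_def)
    then have "equivclp r (f y) (f z)" by (simp add: equivclp_def)
    then show ?case using step(3) by (meson equivclp_trans)
  qed
qed

locale presented_group = W1: group W1 for W1 :: "('w,'c) monoid_scheme" and len :: "'w \<Rightarrow> nat"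
begin

abbreviation "word_eq \<equiv> pres_rel W1 len"
abbreviation "A \<equiv> pres_group W1 len"
abbreviation "words \<equiv> lists (carrier W1 \<times> (UNIV :: bool set))"
definition "cls ws = Collect (word_eq ws)"

lemma word_eq_refl: "word_eq a a" by (simp add: pres_rel_def)
lemma word_eq_sym: "word_eq a b \<Longrightarrow> word_eq b a" by (simp add: pres_rel_def equivclp_sym)
lemma word_eq_trans: "word_eq a b \<Longrightarrow> word_eq b c \<Longrightarrow> word_eq a c" unfolding pres_rel_def by (rule equivclp_trans)
lemma word_eq_step: "pres_step W1 len a b \<Longrightarrow> word_eq a b" by (simp add: pres_rel_def r_into_equivclp)

lemma cls_eq_iff: "(cls a = cls b) = word_eq a b"
proof
  assume "cls a = cls b"
  then have "b \<in> cls a" using word_eq_refl unfolding cls_def by auto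
  then show "word_eq a b" unfolding cls_def by simp
next
  assume ab: "word_eq a b"
  show "cls a = cls b" unfolding cls_def
    using ab word_eq_sym word_eq_trans by blast
qed

lemma pres_step_context: "pres_step W1 len a b \<Longrightarrow> pres_step W1 len (p @ a @ q) (p @ b @ q)"
proof (induct rule: pres_step.induct)
  case (cancel x u v e)
  then show ?case using pres_step.cancel[of x W1 len "p @ u" "v @ q" e] by simp
next
  case (lenrel w w' u v)
  then show ?case using pres_step.lenrel[of w W1 w' len "p @ u" "v @ q"] by simp
qed

lemma word_eq_context: "word_eq a b \<Longrightarrow> word_eq (p @ a @ q) (p @ b @ q)"
  unfolding pres_rel_def by (rule equivclp_map[where f = "\<lambda>x. p @ x @ q"]) (auto intro: pres_step_context)

lemma word_eq_append: "word_eq a a' \<Longrightarrow> word_eq b b' \<Longrightarrow> word_eq (a @ b) (a' @ b')"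
  using word_eq_context[of a a' "[]" b] word_eq_context[of b b' a' "[]"] by (auto intro: word_eq_trans)

lemma pres_step_words: "pres_step W1 len a b \<Longrightarrow> (a \<in> words) = (b \<in> words)"
  by (induct rule: pres_step.induct) auto

lemma word_eq_words: "word_eq a b \<Longrightarrow> (a \<in> words) = (b \<in> words)"
proof -
  assume "word_eq a b"
  then show ?thesis
    using equivclp_invariant[of "pres_step W1 len" a b "\<lambda>a. a \<in> words"] pres_step_words unfolding pres_rel_def by blast
qed

lemma A_carrier: "carrier A = cls ` words"
  unfolding pres_group_def cls_def by auto

lemma A_one: "\<one>\<^bsub>A\<^esub> = cls []"
  unfolding pres_group_def cls_def by simp

lemma A_mult: "cls a \<otimes>\<^bsub>A\<^esub> cls b = cls (a @ b)"
proof -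
  have "{z. \<exists>x\<in>cls a. \<exists>y\<in>cls b. word_eq (x @ y) z} = cls (a @ b)"
  proof (rule equalityI; rule subsetI)
    fix z assume "z \<in> {z. \<exists>x\<in>cls a. \<exists>y\<in>cls b. word_eq (x @ y) z}"
    then obtain x y where "word_eq a x" "word_eq b y" "word_eq (x @ y) z" unfolding cls_def by auto
    then show "z \<in> cls (a @ b)" unfolding cls_def using word_eq_append word_eq_trans by blast
  next
    fix z assume "z \<in> cls (a @ b)"
    then show "z \<in> {z. \<exists>x\<in>cls a. \<exists>y\<in>cls b. word_eq (x @ y) z}"
      unfolding cls_def using word_eq_refl by auto
  qed
  then show ?thesis unfolding pres_group_def by (simp add: cls_def)
qed

definition "inv_word ws = rev (map (\<lambda>(x,e). (x, \<not> e)) ws)"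

lemma inv_word_words: "ws \<in> words \<Longrightarrow> inv_word ws \<in> words" by (auto simp: inv_word_def)
lemma inv_word_inv_word: "inv_word (inv_word ws) = ws" by (induct ws) (auto simp: inv_word_def)

lemma word_eq_append_inv_word: "ws \<in> words \<Longrightarrow> word_eq (ws @ inv_word ws) []"
proof (induct ws)
  case Nil then show ?case by (simp add: word_eq_refl inv_word_def)
next
  case (Cons p ws)
  obtain x e where p: "p = (x, e)" by (cases p)
  have x: "x \<in> carrier W1" using Cons p by auto
  have "word_eq ([p] @ (ws @ inv_word ws) @ [(x, \<not> e)]) ([p] @ [] @ [(x, \<not> e)])"
    using Cons by (intro word_eq_context) auto
  moreover have "word_eq ([p] @ [] @ [(x, \<not> e)]) []"
    using word_eq_step[OF pres_step.cancel[OF x, of len "[]" "[]" e]] p by (simp add: word_eq_sym)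
  ultimately show ?case using p by (auto simp: inv_word_def intro: word_eq_trans)
qed

lemma word_eq_inv_word_append: "ws \<in> words \<Longrightarrow> word_eq (inv_word ws @ ws) []"
  using word_eq_append_inv_word[OF inv_word_words] inv_word_inv_word by metis

lemma A_group: "group A"
proof (rule groupI)
  show "\<one>\<^bsub>A\<^esub> \<in> carrier A" by (simp add: A_carrier A_one)
  show "x \<otimes>\<^bsub>A\<^esub> y \<in> carrier A" if hx: "x \<in> carrier A" and hy: "y \<in> carrier A" for x y
  proof -
    obtain p where "p \<in> words" "x = cls p" using hx A_carrier by auto
    moreover obtain q where "q \<in> words" "y = cls q" using hy A_carrier by auto
    ultimately have "x \<otimes>\<^bsub>A\<^esub> y = cls (p @ q)" "p @ q \<in> words" by (auto simp: A_mult)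
    then show ?thesis unfolding A_carrier by blast
  qed
  show "x \<otimes>\<^bsub>A\<^esub> y \<otimes>\<^bsub>A\<^esub> z = x \<otimes>\<^bsub>A\<^esub> (y \<otimes>\<^bsub>A\<^esub> z)" if "x \<in> carrier A" "y \<in> carrier A" "z \<in> carrier A" for x y z
    using that by (auto simp: A_carrier A_mult)
  show "\<one>\<^bsub>A\<^esub> \<otimes>\<^bsub>A\<^esub> x = x" if "x \<in> carrier A" for x
    using that by (auto simp: A_carrier A_mult A_one)
  show "\<exists>y\<in>carrier A. y \<otimes>\<^bsub>A\<^esub> x = \<one>\<^bsub>A\<^esub>" if hx: "x \<in> carrier A" for x
  proof -
    obtain ws where ws: "ws \<in> words" "x = cls ws" using hx A_carrier by auto
    then have "cls (inv_word ws) \<otimes>\<^bsub>A\<^esub> x = \<one>\<^bsub>A\<^esub>"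
      using word_eq_inv_word_append[OF ws(1)] by (simp add: A_mult A_one cls_eq_iff)
    moreover have "cls (inv_word ws) \<in> carrier A" using inv_word_words[OF ws(1)] A_carrier by auto
    ultimately show ?thesis by blast
  qed
qed

sublocale A: group A by (rule A_group)

lemma pres_gen_cls: "pres_gen W1 len w = cls [(w, True)]"
  by (simp add: pres_gen_def cls_def)

lemma pres_gen_closed: "w \<in> carrier W1 \<Longrightarrow> pres_gen W1 len w \<in> carrier A"
  by (auto simp: pres_gen_cls A_carrier)

lemma pres_gen_mult: "w \<in> carrier W1 \<Longrightarrow> w' \<in> carrier W1 \<Longrightarrow> len (w \<otimes>\<^bsub>W1\<^esub> w') = len w + len w' \<Longrightarrow>
    pres_gen W1 len (w \<otimes>\<^bsub>W1\<^esub> w') = pres_gen W1 len w \<otimes>\<^bsub>A\<^esub> pres_gen W1 len w'"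
  using word_eq_step[OF pres_step.lenrel[of w W1 w' len "[]" "[]"]]
  by (simp add: pres_gen_cls A_mult cls_eq_iff)

lemma inv_pres_gen: "w \<in> carrier W1 \<Longrightarrow> inv\<^bsub>A\<^esub> (pres_gen W1 len w) = cls [(w, False)]"
proof -
  assume w: "w \<in> carrier W1"
  have "pres_gen W1 len w \<otimes>\<^bsub>A\<^esub> cls [(w, False)] = \<one>\<^bsub>A\<^esub>"
    using word_eq_step[OF pres_step.cancel[OF w, of len "[]" "[]" True]]
    by (simp add: pres_gen_cls A_mult A_one cls_eq_iff word_eq_sym)
  moreover have "cls [(w, False)] \<otimes>\<^bsub>A\<^esub> pres_gen W1 len w = \<one>\<^bsub>A\<^esub>"
    using word_eq_step[OF pres_step.cancel[OF w, of len "[]" "[]" False]]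
    by (simp add: pres_gen_cls A_mult A_one cls_eq_iff word_eq_sym)
  moreover have "cls [(w, False)] \<in> carrier A" using w by (auto simp: A_carrier)
  ultimately show ?thesis using pres_gen_closed[OF w] A.inv_equality by blast
qed

lemma cls_Cons_True: "cls ((x, True) # ws) = pres_gen W1 len x \<otimes>\<^bsub>A\<^esub> cls ws"
  by (simp add: pres_gen_cls A_mult)

lemma cls_Cons_False: "x \<in> carrier W1 \<Longrightarrow> cls ((x, False) # ws) = inv\<^bsub>A\<^esub> (pres_gen W1 len x) \<otimes>\<^bsub>A\<^esub> cls ws"
  by (simp add: inv_pres_gen A_mult)

end

locale presented_group_rep = presented_group W1 len + H: monoid H
  for W1 :: "('w,'c) monoid_scheme" and len and H :: "('h,'e) monoid_scheme" +
  fixes T :: "'w \<Rightarrow> 'h"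
  assumes T_unit: "w \<in> carrier W1 \<Longrightarrow> T w \<in> Units H"
    and T_len: "w \<in> carrier W1 \<Longrightarrow> w' \<in> carrier W1 \<Longrightarrow> len (w \<otimes>\<^bsub>W1\<^esub> w') = len w + len w' \<Longrightarrow>
        T (w \<otimes>\<^bsub>W1\<^esub> w') = T w \<otimes>\<^bsub>H\<^esub> T w'"
begin

definition "eval_letter p = (if snd p then T (fst p) else inv\<^bsub>H\<^esub> (T (fst p)))"
definition "eval_word ws = foldr (\<lambda>p acc. eval_letter p \<otimes>\<^bsub>H\<^esub> acc) ws \<one>\<^bsub>H\<^esub>"

lemma eval_word_Nil [simp]: "eval_word [] = \<one>\<^bsub>H\<^esub>" by (simp add: eval_word_def)
lemma eval_word_Cons [simp]: "eval_word (p # ws) = eval_letter p \<otimes>\<^bsub>H\<^esub> eval_word ws" by (simp add: eval_word_def)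

lemma eval_letter_closed: "fst p \<in> carrier W1 \<Longrightarrow> eval_letter p \<in> carrier H"
  using T_unit by (auto simp: eval_letter_def)

lemma eval_word_closed: "ws \<in> words \<Longrightarrow> eval_word ws \<in> carrier H"
  by (induct ws) (auto simp: eval_letter_closed)

lemma eval_word_closed': "\<forall>x\<in>set ws. x \<in> carrier W1 \<times> UNIV \<Longrightarrow> eval_word ws \<in> carrier H"
  using eval_word_closed by (simp add: in_lists_conv_set)

lemma eval_word_append: "a \<in> words \<Longrightarrow> b \<in> words \<Longrightarrow> eval_word (a @ b) = eval_word a \<otimes>\<^bsub>H\<^esub> eval_word b"
  by (induct a) (auto simp: eval_letter_closed eval_word_closed' H.m_assoc)

lemma eval_word_pres_step: "pres_step W1 len a b \<Longrightarrow> a \<in> words \<Longrightarrow> eval_word a = eval_word b"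
proof (induct rule: pres_step.induct)
  case (cancel x u v e)
  have u: "u \<in> words" and v: "v \<in> words" using cancel by auto
  have "eval_word [(x, e), (x, \<not> e)] = \<one>\<^bsub>H\<^esub>" using T_unit[OF cancel(1)] H.Units_closed[OF T_unit[OF cancel(1)]] by (cases e) (auto simp: eval_letter_def)
  moreover have "eval_word (u @ [(x, e), (x, \<not> e)] @ v) = eval_word u \<otimes>\<^bsub>H\<^esub> (eval_word [(x, e), (x, \<not> e)] \<otimes>\<^bsub>H\<^esub> eval_word v)"
    using u v cancel(1) eval_letter_closed[of "(x,e)"] eval_letter_closed[of "(x, \<not> e)"] eval_word_closed[OF v] by (simp add: eval_word_append H.m_assoc)
  ultimately show ?case using u v by (simp add: eval_word_append eval_word_closed)
next
  case (lenrel w w' u v)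
  have u: "u \<in> words" and v: "v \<in> words" using lenrel by auto
  have "eval_word [(w \<otimes>\<^bsub>W1\<^esub> w', True)] = eval_word [(w, True), (w', True)]"
    using T_len[OF lenrel(1-3)] H.Units_closed[OF T_unit[OF lenrel(1)]] H.Units_closed[OF T_unit[OF lenrel(2)]]
    by (simp add: eval_letter_def H.m_assoc)
  moreover have "eval_word (u @ [(w \<otimes>\<^bsub>W1\<^esub> w', True)] @ v) = eval_word u \<otimes>\<^bsub>H\<^esub> (eval_word [(w \<otimes>\<^bsub>W1\<^esub> w', True)] \<otimes>\<^bsub>H\<^esub> eval_word v)"
    using u v lenrel(1,2) eval_letter_closed[of "(w \<otimes>\<^bsub>W1\<^esub> w', True)"] eval_word_closed[OF v] by (simp add: eval_word_append)
  moreover have "eval_word (u @ [(w, True), (w', True)] @ v) = eval_word u \<otimes>\<^bsub>H\<^esub> (eval_word [(w, True), (w', True)] \<otimes>\<^bsub>H\<^esub> eval_word v)"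
    using u v lenrel(1,2) eval_letter_closed[of "(w, True)"] eval_letter_closed[of "(w', True)"] eval_word_closed[OF v] by (simp add: eval_word_append H.m_assoc)
  ultimately show ?case by simp
qed

lemma eval_word_word_eq: assumes "word_eq a b" "a \<in> words" shows "eval_word a = eval_word b"
proof -
  let ?f = "\<lambda>a. if a \<in> words then Some (eval_word a) else None"
  have st: "?f x = ?f y" if "pres_step W1 len x y" for x y
  proof -
    have "(x \<in> words) = (y \<in> words)" using pres_step_words[OF that] .
    moreover have "x \<in> words \<Longrightarrow> eval_word x = eval_word y" using eval_word_pres_step[OF that] .
    ultimately show ?thesis by simp
  qed
  have "?f a = ?f b"
    using equivclp_invariant[of "pres_step W1 len" a b ?f, OF _ st] assms(1) unfolding pres_rel_def by blast
  then show ?thesis using assms(2) word_eq_words[OF assms(1)] by simp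
qed

definition "ind_hom P = eval_word (SOME ws. ws \<in> words \<and> P = cls ws)"

lemma ind_hom_cls: "ws \<in> words \<Longrightarrow> ind_hom (cls ws) = eval_word ws"
proof -
  assume ws: "ws \<in> words"
  define v where "v = (SOME v. v \<in> words \<and> cls ws = cls v)"
  have "\<exists>v. v \<in> words \<and> cls ws = cls v" using ws by blast
  then have v: "v \<in> words \<and> cls ws = cls v" unfolding v_def by (rule someI_ex)
  then have "word_eq ws v" using cls_eq_iff by blast
  then have "eval_word ws = eval_word v" using eval_word_word_eq ws by blast
  then show ?thesis unfolding ind_hom_def v_def[symmetric] by simp
qed

lemma ind_hom_closed: "P \<in> carrier A \<Longrightarrow> ind_hom P \<in> carrier H"
proof -
  assume "P \<in> carrier A"
  then obtain p where "p \<in> words" "P = cls p" by (auto simp: A_carrier)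
  then show ?thesis by (simp add: ind_hom_cls eval_word_closed)
qed

lemma ind_hom_mult: "P \<in> carrier A \<Longrightarrow> Q \<in> carrier A \<Longrightarrow> ind_hom (P \<otimes>\<^bsub>A\<^esub> Q) = ind_hom P \<otimes>\<^bsub>H\<^esub> ind_hom Q"
proof -
  assume "P \<in> carrier A" "Q \<in> carrier A"
  then obtain p q where "p \<in> words" "P = cls p" "q \<in> words" "Q = cls q" by (auto simp: A_carrier)
  moreover then have "p @ q \<in> words" by simp
  ultimately show ?thesis by (simp add: ind_hom_cls eval_word_append A_mult del: append_in_lists_conv)
qed

lemma ind_hom_one: "ind_hom \<one>\<^bsub>A\<^esub> = \<one>\<^bsub>H\<^esub>"
  by (simp add: A_one ind_hom_cls)

lemma ind_hom_pres_gen: "w \<in> carrier W1 \<Longrightarrow> ind_hom (pres_gen W1 len w) = T w"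
  using T_unit H.Units_closed by (auto simp: pres_gen_cls ind_hom_cls eval_letter_def)

end

section \<open>Extended Coxeter groups\<close>

lemma wprod_Nil [simp]: "wprod G [] = \<one>\<^bsub>G\<^esub>"
  by (simp add: wprod_def)

lemma wprod_Cons [simp]: "wprod G (x # xs) = x \<otimes>\<^bsub>G\<^esub> wprod G xs"
  by (simp add: wprod_def)

lemma wprod_upd [simp]: "wprod (M\<lparr>carrier := A\<rparr>) = wprod M"
  by (rule ext) (simp add: wprod_def)

lemma wprod_closed: "monoid G \<Longrightarrow> set ws \<subseteq> carrier G \<Longrightarrow> wprod G ws \<in> carrier G"
  by (induct ws) (auto simp: monoid.m_closed)

lemma wprod_append:
  "monoid G \<Longrightarrow> set xs \<subseteq> carrier G \<Longrightarrow> set ys \<subseteq> carrier G \<Longrightarrow> wprod G (xs @ ys) = wprod G xs \<otimes>\<^bsub>G\<^esub> wprod G ys"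
  by (induct xs) (auto simp: monoid.m_assoc wprod_closed)

lemma cox_step_parity: "cox_step G S a b \<Longrightarrow> even (length a) = even (length b)"
  by (induct rule: cox_step.induct) (auto simp: alt_word_def)

locale ext_coxeter_grp =
  fixes W :: "('v,'b) monoid_scheme" and Waff S Omega :: "'v set"
  assumes ext: "ext_coxeter W Waff S Omega"
begin

lemma W_group: "group W" using ext by (simp add: ext_coxeter_def)

sublocale W: group W by (rule W_group)

lemma Waff_normal: "Waff \<lhd> W" using ext by (simp add: ext_coxeter_def)
lemma Waff_subgroup: "subgroup Waff W" using Waff_normal by (simp add: normal_def)
lemma Omega_subgroup: "subgroup Omega W" using ext by (simp add: ext_coxeter_def)
lemma Waff_Omega_inter: "Waff \<inter> Omega = {\<one>\<^bsub>W\<^esub>}" using ext by (simp add: ext_coxeter_def)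
lemma Waff_Omega_set_mult: "Waff <#>\<^bsub>W\<^esub> Omega = carrier W" using ext by (simp add: ext_coxeter_def)
lemma coxeter_Waff: "coxeter_system (W\<lparr>carrier := Waff\<rparr>) S" using ext by (simp add: ext_coxeter_def)
lemma Omega_conj_S: "u \<in> Omega \<Longrightarrow> s \<in> S \<Longrightarrow> u \<otimes>\<^bsub>W\<^esub> s \<otimes>\<^bsub>W\<^esub> inv\<^bsub>W\<^esub> u \<in> S"
  using ext by (simp add: ext_coxeter_def)

lemma coxeter_Waff_unfolded: "group (W\<lparr>carrier := Waff\<rparr>) \<and> S \<subseteq> Waff \<and> \<one>\<^bsub>W\<^esub> \<notin> S \<and> (\<forall>s\<in>S. s \<otimes>\<^bsub>W\<^esub> s = \<one>\<^bsub>W\<^esub>)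
   \<and> Waff = wprod W ` lists S \<and>
   (\<forall>ws\<in>lists S. wprod W ws = \<one>\<^bsub>W\<^esub> \<longrightarrow> equivclp (cox_step (W\<lparr>carrier := Waff\<rparr>) S) ws [])"
  using coxeter_Waff unfolding coxeter_system_def by (simp (no_asm_use))

lemma S_Waff: "S \<subseteq> Waff" using coxeter_Waff_unfolded by blast
lemma Waff_carrier: "Waff \<subseteq> carrier W" using Waff_subgroup subgroup.subset by blast
lemma Omega_carrier: "Omega \<subseteq> carrier W" using Omega_subgroup subgroup.subset by blast
lemma S_carrier: "S \<subseteq> carrier W" using S_Waff Waff_carrier by blast
lemma S_involution: "s \<in> S \<Longrightarrow> s \<otimes>\<^bsub>W\<^esub> s = \<one>\<^bsub>W\<^esub>" using coxeter_Waff_unfolded by blast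
lemma Waff_gen: "Waff = wprod W ` lists S" using coxeter_Waff_unfolded by blast
lemma Waff_rel: "ws \<in> lists S \<Longrightarrow> wprod W ws = \<one>\<^bsub>W\<^esub> \<Longrightarrow> equivclp (cox_step (W\<lparr>carrier := Waff\<rparr>) S) ws []"
  using coxeter_Waff_unfolded by blast

lemma inv_S: "s \<in> S \<Longrightarrow> inv\<^bsub>W\<^esub> s = s"
  using S_involution S_carrier by (metis W.inv_equality subsetD)

lemma lists_S_carrier: "ws \<in> lists S \<Longrightarrow> set ws \<subseteq> carrier W"
  using S_carrier by auto

lemma wprod_Waff: "ws \<in> lists S \<Longrightarrow> wprod W ws \<in> Waff"
  using Waff_gen by blast

lemma wprod_rev: "ws \<in> lists S \<Longrightarrow> wprod W (rev ws) = inv\<^bsub>W\<^esub> (wprod W ws)"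
proof (induct ws)
  case Nil then show ?case by simp
next
  case (Cons s ws)
  then have s: "s \<in> S" "s \<in> carrier W" and ws: "ws \<in> lists S" using S_carrier by auto
  have "wprod W (rev (s # ws)) = wprod W (rev ws) \<otimes>\<^bsub>W\<^esub> s"
    using wprod_append[OF W.monoid_axioms, of "rev ws" "[s]"] ws s lists_S_carrier[OF ws] by simp
  also have "\<dots> = inv\<^bsub>W\<^esub> (wprod W ws) \<otimes>\<^bsub>W\<^esub> inv\<^bsub>W\<^esub> s" using Cons ws s by (simp add: inv_S)
  also have "\<dots> = inv\<^bsub>W\<^esub> (s \<otimes>\<^bsub>W\<^esub> wprod W ws)"
    using s wprod_closed[OF W.monoid_axioms lists_S_carrier[OF ws]] by (simp add: W.inv_mult_group)
  finally show ?case by simp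
qed

lemma even_length_of_wprod_one: "ws \<in> lists S \<Longrightarrow> wprod W ws = \<one>\<^bsub>W\<^esub> \<Longrightarrow> even (length ws)"
  using equivclp_invariant[OF Waff_rel, of ws "\<lambda>l. even (length l)"] cox_step_parity by fastforce

lemma factorization_unique:
  assumes ws: "ws \<in> lists S" and ws': "ws' \<in> lists S" and u: "u \<in> Omega" and u': "u' \<in> Omega"
    and eq: "wprod W ws \<otimes>\<^bsub>W\<^esub> u = wprod W ws' \<otimes>\<^bsub>W\<^esub> u'"
  shows "u = u' \<and> even (length ws + length ws')"
proof -
  have a: "wprod W ws \<in> Waff" "wprod W ws' \<in> Waff" using wprod_Waff ws ws' by auto
  have ac: "wprod W ws \<in> carrier W" "wprod W ws' \<in> carrier W" using a Waff_carrier by auto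
  have uc: "u \<in> carrier W" "u' \<in> carrier W" using u u' Omega_carrier by auto
  have e: "inv\<^bsub>W\<^esub> (wprod W ws') \<otimes>\<^bsub>W\<^esub> wprod W ws = u' \<otimes>\<^bsub>W\<^esub> inv\<^bsub>W\<^esub> u"
  proof -
    have "inv\<^bsub>W\<^esub> (wprod W ws') \<otimes>\<^bsub>W\<^esub> wprod W ws = inv\<^bsub>W\<^esub> (wprod W ws') \<otimes>\<^bsub>W\<^esub> (wprod W ws \<otimes>\<^bsub>W\<^esub> u) \<otimes>\<^bsub>W\<^esub> inv\<^bsub>W\<^esub> u"
      using ac uc by (simp add: W.m_assoc)
    also have "\<dots> = inv\<^bsub>W\<^esub> (wprod W ws') \<otimes>\<^bsub>W\<^esub> (wprod W ws' \<otimes>\<^bsub>W\<^esub> u') \<otimes>\<^bsub>W\<^esub> inv\<^bsub>W\<^esub> u" using eq by simp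
    also have "\<dots> = u' \<otimes>\<^bsub>W\<^esub> inv\<^bsub>W\<^esub> u" using ac uc by (simp add: W.m_assoc[symmetric])
    finally show ?thesis .
  qed
  have l: "inv\<^bsub>W\<^esub> (wprod W ws') \<otimes>\<^bsub>W\<^esub> wprod W ws \<in> Waff"
    using a Waff_subgroup by (simp add: subgroup.m_closed subgroup.m_inv_closed)
  have r: "u' \<otimes>\<^bsub>W\<^esub> inv\<^bsub>W\<^esub> u \<in> Omega"
    using u u' Omega_subgroup by (simp add: subgroup.m_closed subgroup.m_inv_closed)
  have one: "u' \<otimes>\<^bsub>W\<^esub> inv\<^bsub>W\<^esub> u = \<one>\<^bsub>W\<^esub>" using l r e Waff_Omega_inter by auto
  then have uu: "u = u'" using uc by (metis W.inv_equality W.inv_inv W.inv_closed)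
  have "inv\<^bsub>W\<^esub> (wprod W ws') \<otimes>\<^bsub>W\<^esub> wprod W ws = \<one>\<^bsub>W\<^esub>" using e one by simp
  then have "wprod W (rev ws' @ ws) = \<one>\<^bsub>W\<^esub>"
    using wprod_append[OF W.monoid_axioms, of "rev ws'" ws] lists_S_carrier[OF ws] lists_S_carrier[OF ws'] wprod_rev[OF ws']
    by simp
  moreover have "rev ws' @ ws \<in> lists S" using ws ws' by (auto simp: in_lists_conv_set)
  ultimately have "even (length (rev ws' @ ws))" using even_length_of_wprod_one by blast
  then have "even (length ws + length ws')" by (simp add: add.commute)
  then show ?thesis using uu by blast
qed

abbreviation "len \<equiv> ext_len W S Omega"

lemma Omega_closed: "u \<in> Omega \<Longrightarrow> u \<in> carrier W" using Omega_carrier by auto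

lemma wprod_S_closed: "ws \<in> lists S \<Longrightarrow> wprod W ws \<in> carrier W"
  using wprod_Waff Waff_carrier by blast

lemma factorization_exists: "x \<in> carrier W \<Longrightarrow> \<exists>ws\<in>lists S. \<exists>u\<in>Omega. x = wprod W ws \<otimes>\<^bsub>W\<^esub> u"
proof -
  assume "x \<in> carrier W"
  then have "x \<in> Waff <#>\<^bsub>W\<^esub> Omega" using Waff_Omega_set_mult by simp
  then obtain h k where "h \<in> Waff" "k \<in> Omega" "x = h \<otimes>\<^bsub>W\<^esub> k" unfolding set_mult_def by auto
  then show ?thesis using Waff_gen by blast
qed

lemma len_witness: "x \<in> carrier W \<Longrightarrow> \<exists>ws\<in>lists S. length ws = len x \<and> (\<exists>u\<in>Omega. x = wprod W ws \<otimes>\<^bsub>W\<^esub> u)"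
proof -
  assume x: "x \<in> carrier W"
  obtain ws u where "ws \<in> lists S" "u \<in> Omega" "x = wprod W ws \<otimes>\<^bsub>W\<^esub> u" using factorization_exists[OF x] by blast
  then have ex: "\<exists>k. \<exists>ws\<in>lists S. length ws = k \<and> (\<exists>u\<in>Omega. x = wprod W ws \<otimes>\<^bsub>W\<^esub> u)" by blast
  show ?thesis unfolding ext_len_def by (rule LeastI_ex[OF ex])
qed

lemma len_le_length: "ws \<in> lists S \<Longrightarrow> u \<in> Omega \<Longrightarrow> x = wprod W ws \<otimes>\<^bsub>W\<^esub> u \<Longrightarrow> len x \<le> length ws"
  unfolding ext_len_def by (rule Least_le) blast

lemma len_parity: "ws \<in> lists S \<Longrightarrow> u \<in> Omega \<Longrightarrow> x = wprod W ws \<otimes>\<^bsub>W\<^esub> u \<Longrightarrow> even (len x + length ws)"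
proof -
  assume ws: "ws \<in> lists S" and u: "u \<in> Omega" and x: "x = wprod W ws \<otimes>\<^bsub>W\<^esub> u"
  have xc: "x \<in> carrier W" using x ws u wprod_S_closed Omega_carrier by auto
  obtain ws' u' where "ws' \<in> lists S" "length ws' = len x" "u' \<in> Omega" "x = wprod W ws' \<otimes>\<^bsub>W\<^esub> u'"
    using len_witness[OF xc] by blast
  then show ?thesis using factorization_unique[OF _ ws _ u, of ws' u'] x by auto
qed

text \<open>Only the parity of the Coxeter relators enters here: they all have even length, so the length
  of a word representing the identity is even, and left multiplication by \<open>s\<close> changes \<open>len\<close> by exactly one.\<close>

lemma len_S_mult:
  assumes s: "s \<in> S" and x: "x \<in> carrier W"
  shows "len (s \<otimes>\<^bsub>W\<^esub> x) = Suc (len x) \<or> len x = Suc (len (s \<otimes>\<^bsub>W\<^esub> x))"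
proof -
  have sc: "s \<in> carrier W" using s S_carrier by auto
  obtain ws u where ws: "ws \<in> lists S" "length ws = len x" "u \<in> Omega" "x = wprod W ws \<otimes>\<^bsub>W\<^esub> u"
    using len_witness[OF x] by blast
  have "s \<otimes>\<^bsub>W\<^esub> x = wprod W (s # ws) \<otimes>\<^bsub>W\<^esub> u"
    using ws(4) sc wprod_S_closed[OF ws(1)] Omega_closed[OF ws(3)] by (simp add: W.m_assoc)
  moreover have "s # ws \<in> lists S" using s ws by simp
  ultimately have a: "len (s \<otimes>\<^bsub>W\<^esub> x) \<le> Suc (len x)" "even (len (s \<otimes>\<^bsub>W\<^esub> x) + Suc (len x))"
    using len_le_length[of "s # ws" u] len_parity[of "s # ws" u] ws by auto
  have sxc: "s \<otimes>\<^bsub>W\<^esub> x \<in> carrier W" using sc x by simp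
  obtain ws' u' where ws': "ws' \<in> lists S" "length ws' = len (s \<otimes>\<^bsub>W\<^esub> x)" "u' \<in> Omega" "s \<otimes>\<^bsub>W\<^esub> x = wprod W ws' \<otimes>\<^bsub>W\<^esub> u'"
    using len_witness[OF sxc] by blast
  have "x = s \<otimes>\<^bsub>W\<^esub> (s \<otimes>\<^bsub>W\<^esub> x)" using sc x S_involution[OF s] by (simp add: W.m_assoc[symmetric])
  also have "\<dots> = wprod W (s # ws') \<otimes>\<^bsub>W\<^esub> u'"
    using ws'(4) sc wprod_S_closed[OF ws'(1)] Omega_closed[OF ws'(3)] by (simp add: W.m_assoc)
  finally have "len x \<le> Suc (len (s \<otimes>\<^bsub>W\<^esub> x))" using len_le_length[of "s # ws'" u' x] ws' s by auto
  then show ?thesis using a by presburger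
qed

lemma len_mult_Omega:
  assumes u: "u \<in> Omega" and x: "x \<in> carrier W"
  shows "len (x \<otimes>\<^bsub>W\<^esub> u) = len x"
proof -
  have uc: "u \<in> carrier W" using u Omega_carrier by auto
  have le: "len (y \<otimes>\<^bsub>W\<^esub> v) \<le> len y" if v: "v \<in> Omega" and y: "y \<in> carrier W" for v y
  proof -
    obtain ws u0 where ws: "ws \<in> lists S" "length ws = len y" "u0 \<in> Omega" "y = wprod W ws \<otimes>\<^bsub>W\<^esub> u0"
      using len_witness[OF y] by blast
    have "y \<otimes>\<^bsub>W\<^esub> v = wprod W ws \<otimes>\<^bsub>W\<^esub> (u0 \<otimes>\<^bsub>W\<^esub> v)"
      using ws(4) wprod_S_closed[OF ws(1)] Omega_closed[OF ws(3)] Omega_closed[OF v] by (simp add: W.m_assoc)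
    moreover have "u0 \<otimes>\<^bsub>W\<^esub> v \<in> Omega" using ws v Omega_subgroup by (simp add: subgroup.m_closed)
    ultimately show ?thesis using len_le_length ws by metis
  qed
  have "len x = len ((x \<otimes>\<^bsub>W\<^esub> u) \<otimes>\<^bsub>W\<^esub> inv\<^bsub>W\<^esub> u)" using x uc by (simp add: W.m_assoc)
  also have "\<dots> \<le> len (x \<otimes>\<^bsub>W\<^esub> u)"
    using le[of "inv\<^bsub>W\<^esub> u" "x \<otimes>\<^bsub>W\<^esub> u"] u Omega_subgroup x uc by (simp add: subgroup.m_inv_closed)
  finally show ?thesis using le[OF u x] by simp
qed

lemma Omega_conj_wprod:
  assumes u: "u \<in> Omega" and ws: "ws \<in> lists S"
  shows "u \<otimes>\<^bsub>W\<^esub> wprod W ws = wprod W (map (\<lambda>s. u \<otimes>\<^bsub>W\<^esub> s \<otimes>\<^bsub>W\<^esub> inv\<^bsub>W\<^esub> u) ws) \<otimes>\<^bsub>W\<^esub> u"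
  using ws
proof (induct ws)
  case Nil then show ?case using u Omega_carrier by auto
next
  case (Cons s ws)
  have uc: "u \<in> carrier W" using u Omega_carrier by auto
  have sc: "s \<in> carrier W" using Cons S_carrier by auto
  have wc: "wprod W ws \<in> carrier W" using Cons wprod_S_closed by auto
  have mc: "wprod W (map (\<lambda>s. u \<otimes>\<^bsub>W\<^esub> s \<otimes>\<^bsub>W\<^esub> inv\<^bsub>W\<^esub> u) ws) \<in> carrier W"
    using Cons Omega_conj_S[OF u] by (intro wprod_S_closed) auto
  have "u \<otimes>\<^bsub>W\<^esub> wprod W (s # ws) = (u \<otimes>\<^bsub>W\<^esub> s \<otimes>\<^bsub>W\<^esub> inv\<^bsub>W\<^esub> u) \<otimes>\<^bsub>W\<^esub> (u \<otimes>\<^bsub>W\<^esub> wprod W ws)"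
    using uc sc wc by (simp add: W.m_assoc W.inv_solve_left)
  also have "\<dots> = (u \<otimes>\<^bsub>W\<^esub> s \<otimes>\<^bsub>W\<^esub> inv\<^bsub>W\<^esub> u) \<otimes>\<^bsub>W\<^esub> (wprod W (map (\<lambda>s. u \<otimes>\<^bsub>W\<^esub> s \<otimes>\<^bsub>W\<^esub> inv\<^bsub>W\<^esub> u) ws) \<otimes>\<^bsub>W\<^esub> u)"
    using Cons by simp
  also have "\<dots> = wprod W (map (\<lambda>s. u \<otimes>\<^bsub>W\<^esub> s \<otimes>\<^bsub>W\<^esub> inv\<^bsub>W\<^esub> u) (s # ws)) \<otimes>\<^bsub>W\<^esub> u"
    using uc sc mc by (simp add: W.m_assoc)
  finally show ?case .
qed

lemma len_Omega_mult:
  assumes u: "u \<in> Omega" and x: "x \<in> carrier W"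
  shows "len (u \<otimes>\<^bsub>W\<^esub> x) = len x"
proof -
  have uc: "u \<in> carrier W" using u Omega_carrier by auto
  have le: "len (v \<otimes>\<^bsub>W\<^esub> y) \<le> len y" if v: "v \<in> Omega" and y: "y \<in> carrier W" for v y
  proof -
    obtain ws u0 where ws: "ws \<in> lists S" "length ws = len y" "u0 \<in> Omega" "y = wprod W ws \<otimes>\<^bsub>W\<^esub> u0"
      using len_witness[OF y] by blast
    have vc: "v \<in> carrier W" using v Omega_carrier by auto
    let ?ws = "map (\<lambda>s. v \<otimes>\<^bsub>W\<^esub> s \<otimes>\<^bsub>W\<^esub> inv\<^bsub>W\<^esub> v) ws"
    have mc: "?ws \<in> lists S" using ws Omega_conj_S[OF v] by auto
    have "v \<otimes>\<^bsub>W\<^esub> y = (v \<otimes>\<^bsub>W\<^esub> wprod W ws) \<otimes>\<^bsub>W\<^esub> u0"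
      using ws(4) vc wprod_S_closed[OF ws(1)] Omega_closed[OF ws(3)] by (simp add: W.m_assoc)
    also have "\<dots> = wprod W ?ws \<otimes>\<^bsub>W\<^esub> (v \<otimes>\<^bsub>W\<^esub> u0)"
      using Omega_conj_wprod[OF v ws(1)] wprod_S_closed[OF mc] vc Omega_closed[OF ws(3)] by (simp add: W.m_assoc)
    finally have "v \<otimes>\<^bsub>W\<^esub> y = wprod W ?ws \<otimes>\<^bsub>W\<^esub> (v \<otimes>\<^bsub>W\<^esub> u0)" .
    moreover have "v \<otimes>\<^bsub>W\<^esub> u0 \<in> Omega" using ws v Omega_subgroup by (simp add: subgroup.m_closed)
    ultimately have "len (v \<otimes>\<^bsub>W\<^esub> y) \<le> length ?ws" using len_le_length mc by metis
    then show ?thesis using ws by simp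
  qed
  have "len x = len (inv\<^bsub>W\<^esub> u \<otimes>\<^bsub>W\<^esub> (u \<otimes>\<^bsub>W\<^esub> x))" using x uc by (simp add: W.m_assoc[symmetric])
  also have "\<dots> \<le> len (u \<otimes>\<^bsub>W\<^esub> x)"
    using le[of "inv\<^bsub>W\<^esub> u" "u \<otimes>\<^bsub>W\<^esub> x"] u Omega_subgroup x uc by (simp add: subgroup.m_inv_closed)
  finally show ?thesis using le[OF u x] by simp
qed

lemma len_zero_iff: "x \<in> carrier W \<Longrightarrow> (len x = 0) = (x \<in> Omega)"
proof
  assume x: "x \<in> carrier W" and "len x = 0"
  then obtain ws u where "ws \<in> lists S" "length ws = 0" "u \<in> Omega" "x = wprod W ws \<otimes>\<^bsub>W\<^esub> u"
    using len_witness by metis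
  then show "x \<in> Omega" using Omega_carrier by auto
next
  assume x: "x \<in> carrier W" and "x \<in> Omega"
  then have "len x \<le> length ([] :: 'v list)"
    using Omega_carrier by (intro len_le_length[of "[]" x]) auto
  then show "len x = 0" by simp
qed

lemma len_one: "len \<one>\<^bsub>W\<^esub> = 0"
  using len_zero_iff[of "\<one>\<^bsub>W\<^esub>"] Omega_subgroup by (simp add: subgroup.one_closed)

lemma len_S: "s \<in> S \<Longrightarrow> len s = 1"
  using len_S_mult[of s "\<one>\<^bsub>W\<^esub>"] len_one S_carrier by auto

lemma len_decrease:
  assumes x: "x \<in> carrier W" and k: "len x = Suc k"
  shows "\<exists>s\<in>S. len (s \<otimes>\<^bsub>W\<^esub> x) = k"
proof -
  obtain ws u where ws: "ws \<in> lists S" "length ws = Suc k" "u \<in> Omega" "x = wprod W ws \<otimes>\<^bsub>W\<^esub> u"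
    using len_witness[OF x] k by metis
  then obtain s ws' where sw: "ws = s # ws'" by (cases ws) auto
  have s: "s \<in> S" "s \<in> carrier W" using sw ws S_carrier by auto
  have ws': "ws' \<in> lists S" using sw ws by auto
  have "s \<otimes>\<^bsub>W\<^esub> x = wprod W ws' \<otimes>\<^bsub>W\<^esub> u"
    using ws(4) sw s wprod_S_closed[OF ws'] Omega_closed[OF ws(3)] S_involution[OF s(1)]
    by (simp add: W.m_assoc[symmetric])
  then have "len (s \<otimes>\<^bsub>W\<^esub> x) \<le> k" using len_le_length[OF ws' ws(3)] ws sw by auto
  then show ?thesis using len_S_mult[OF s(1) x] k s by auto
qed

end

locale pro_p_coxeter_grp = ext_coxeter_grp W Waff S Omega
  for W1 :: "('w,'c) monoid_scheme" and W :: "('v,'b) monoid_scheme" and proj :: "'w \<Rightarrow> 'v"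
    and Waff S Omega :: "'v set" and n :: "'v \<Rightarrow> 'w" +
  assumes pro: "pro_p_coxeter W1 W proj Waff S Omega n"
begin

lemma W1_group: "group W1" using pro by (simp add: pro_p_coxeter_def)
sublocale W1: group W1 by (rule W1_group)

lemma proj_hom: "proj \<in> hom W1 W" using pro by (simp add: pro_p_coxeter_def)
lemma n_closed: "s \<in> S \<Longrightarrow> n s \<in> carrier W1" using pro by (simp add: pro_p_coxeter_def)
lemma proj_n: "s \<in> S \<Longrightarrow> proj (n s) = s" using pro by (simp add: pro_p_coxeter_def)

sublocale PH: group_hom W1 W proj
  using proj_hom by (simp add: group_hom_def group_hom_axioms_def W1_group W_group)

lemma proj_closed: "x \<in> carrier W1 \<Longrightarrow> proj x \<in> carrier W"
  using proj_hom by (auto simp: hom_def)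

abbreviation "L1 \<equiv> len1 proj W S Omega"

lemma len1_eq: "L1 x = len (proj x)" by (simp add: len1_def)

lemma len1_Omega_left: "x \<in> carrier W1 \<Longrightarrow> y \<in> carrier W1 \<Longrightarrow> proj x \<in> Omega \<Longrightarrow> L1 (x \<otimes>\<^bsub>W1\<^esub> y) = L1 y"
  by (simp add: len1_eq len_Omega_mult proj_closed)

lemma len1_Omega_right: "x \<in> carrier W1 \<Longrightarrow> y \<in> carrier W1 \<Longrightarrow> proj y \<in> Omega \<Longrightarrow> L1 (x \<otimes>\<^bsub>W1\<^esub> y) = L1 x"
  by (simp add: len1_eq len_mult_Omega proj_closed)

lemma len1_zero_iff: "x \<in> carrier W1 \<Longrightarrow> (L1 x = 0) = (proj x \<in> Omega)"
  by (simp add: len1_eq len_zero_iff proj_closed)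

lemma len1_n: "s \<in> S \<Longrightarrow> L1 (n s) = 1"
  by (simp add: len1_eq proj_n len_S)

lemma proj_inv: "x \<in> carrier W1 \<Longrightarrow> proj (inv\<^bsub>W1\<^esub> x) = inv\<^bsub>W\<^esub> proj x"
  by (rule PH.hom_inv)

lemma Omega_inv: "u \<in> Omega \<Longrightarrow> inv\<^bsub>W\<^esub> u \<in> Omega"
  using Omega_subgroup by (simp add: subgroup.m_inv_closed)

lemma Omega_one: "\<one>\<^bsub>W\<^esub> \<in> Omega"
  using Omega_subgroup by (simp add: subgroup.one_closed)

lemma len1_one: "L1 \<one>\<^bsub>W1\<^esub> = 0"
  by (simp add: len1_zero_iff Omega_one)

lemma len1_zero_inv: "x \<in> carrier W1 \<Longrightarrow> L1 x = 0 \<Longrightarrow> L1 (inv\<^bsub>W1\<^esub> x) = 0"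
  by (simp add: len1_zero_iff proj_inv Omega_inv)

lemma len1_zero_add:
  "x \<in> carrier W1 \<Longrightarrow> y \<in> carrier W1 \<Longrightarrow> L1 x = 0 \<Longrightarrow> L1 (x \<otimes>\<^bsub>W1\<^esub> y) = L1 x + L1 y"
  using len1_Omega_left len1_zero_iff by auto

lemma len1_zero_add':
  "x \<in> carrier W1 \<Longrightarrow> y \<in> carrier W1 \<Longrightarrow> L1 y = 0 \<Longrightarrow> L1 (x \<otimes>\<^bsub>W1\<^esub> y) = L1 x + L1 y"
  using len1_Omega_right len1_zero_iff by auto

lemma kernel_len1: "t \<in> kernel W1 W proj \<Longrightarrow> t \<in> carrier W1 \<and> proj t = \<one>\<^bsub>W\<^esub> \<and> L1 t = 0"
  by (simp add: kernel_def len1_zero_iff Omega_one)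

lemma len1_n_left:
  "s \<in> S \<Longrightarrow> w \<in> carrier W1 \<Longrightarrow> L1 (n s \<otimes>\<^bsub>W1\<^esub> w) = Suc (L1 w) \<or> L1 w = Suc (L1 (n s \<otimes>\<^bsub>W1\<^esub> w))"
  using len_S_mult[of s "proj w"] by (simp add: len1_eq proj_n n_closed proj_closed)

lemma proj_n_square: "s \<in> S \<Longrightarrow> proj (n s \<otimes>\<^bsub>W1\<^esub> n s) = \<one>\<^bsub>W\<^esub>"
  by (simp add: n_closed proj_n S_involution)

lemma len1_n_square: "s \<in> S \<Longrightarrow> L1 (n s \<otimes>\<^bsub>W1\<^esub> n s) = 0"
  using proj_n_square[of s] by (simp add: len1_zero_iff n_closed Omega_one del: PH.hom_mult)

lemma len1_decrease:
  assumes w: "w \<in> carrier W1" and k: "L1 w = Suc k"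
  shows "\<exists>s\<in>S. L1 (inv\<^bsub>W1\<^esub> (n s) \<otimes>\<^bsub>W1\<^esub> w) = k"
proof -
  obtain s where s: "s \<in> S" "len (s \<otimes>\<^bsub>W\<^esub> proj w) = k"
    using len_decrease[of "proj w" k] k w by (auto simp: len1_eq proj_closed)
  have "proj (inv\<^bsub>W1\<^esub> (n s) \<otimes>\<^bsub>W1\<^esub> w) = s \<otimes>\<^bsub>W\<^esub> proj w"
    using s w by (simp add: n_closed proj_inv proj_n inv_S)
  then show ?thesis using s by (metis len1_eq)
qed

end

section \<open>Generic pro-p Hecke algebras\<close>

text \<open>The braid relations of the lifts \<open>n s\<close> and the compatibility conditions on \<open>a\<close> and \<open>b\<close> are
  never used below: they are what makes the Hecke algebra \<open>H\<close> exist, and \<open>H\<close> is given.\<close>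

locale pro_p_hecke = pro_p_coxeter_grp W1 W proj Waff S Omega n + r_algebra R H
  for W1 :: "('w,'c) monoid_scheme" and W :: "('v,'b) monoid_scheme" and proj :: "'w \<Rightarrow> 'v"
    and Waff S Omega :: "'v set" and n :: "'v \<Rightarrow> 'w"
    and R :: "('r,'d) ring_scheme" and H :: "('r,'h) module" +
  fixes a :: "'v \<Rightarrow> 'r" and b :: "'v \<Rightarrow> 'w \<Rightarrow> 'r" and Tw :: "'w \<Rightarrow> 'h"
  assumes params: "hecke_params R W1 W proj S n a b"
    and halg: "hecke_alg R W1 W proj S Omega n a b H Tw"
    and aunit: "\<forall>s\<in>S. a s \<in> Units R"
begin

lemma Tw_closed: "w \<in> carrier W1 \<Longrightarrow> Tw w \<in> carrier H"
  using halg by (auto simp: hecke_alg_def)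

lemma Tw_mult: "w \<in> carrier W1 \<Longrightarrow> w' \<in> carrier W1 \<Longrightarrow> L1 (w \<otimes>\<^bsub>W1\<^esub> w') = L1 w + L1 w' \<Longrightarrow>
   Tw (w \<otimes>\<^bsub>W1\<^esub> w') = Tw w \<otimes>\<^bsub>H\<^esub> Tw w'"
  using halg by (auto simp: hecke_alg_def)

lemma Tw_basis: "h \<in> carrier H \<Longrightarrow> \<exists>!f. f \<in> fin_coeffs R (carrier W1) \<and>
        h = finsum H (\<lambda>w. f w \<odot>\<^bsub>H\<^esub> Tw w) {w. f w \<noteq> \<zero>\<^bsub>R\<^esub>}"
  using halg by (auto simp: hecke_alg_def)

definition bH where "bH s = finsum H (\<lambda>t. b s t \<odot>\<^bsub>H\<^esub> Tw t) {t. b s t \<noteq> \<zero>\<^bsub>R\<^esub>}"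

lemma Tw_quadratic: "s \<in> S \<Longrightarrow> Tw (n s) \<otimes>\<^bsub>H\<^esub> Tw (n s) =
        a s \<odot>\<^bsub>H\<^esub> Tw (n s \<otimes>\<^bsub>W1\<^esub> n s) \<oplus>\<^bsub>H\<^esub> Tw (n s) \<otimes>\<^bsub>H\<^esub> bH s"
  using halg by (auto simp: hecke_alg_def bH_def)

lemma a_closed: "s \<in> S \<Longrightarrow> a s \<in> carrier R" using params by (auto simp: hecke_params_def)
lemma b_fin_coeffs: "s \<in> S \<Longrightarrow> b s \<in> fin_coeffs R (kernel W1 W proj)" using params by (auto simp: hecke_params_def)

lemma b_coeffsD: assumes s: "s \<in> S"
  shows "finite {t. b s t \<noteq> \<zero>\<^bsub>R\<^esub>}" "\<And>t. b s t \<in> carrier R"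
    "\<And>t. b s t \<noteq> \<zero>\<^bsub>R\<^esub> \<Longrightarrow> t \<in> carrier W1 \<and> proj t = \<one>\<^bsub>W\<^esub> \<and> L1 t = 0"
  using fin_coeffsD[OF b_fin_coeffs[OF s]] kernel_len1 by blast+

lemma bH_closed: "s \<in> S \<Longrightarrow> bH s \<in> carrier H"
  unfolding bH_def using b_coeffsD by (auto intro!: M.finsum_closed Tw_closed)

lemma Tw_one: "Tw \<one>\<^bsub>W1\<^esub> = \<one>\<^bsub>H\<^esub>"
proof -
  have lt: "Tw \<one>\<^bsub>W1\<^esub> \<otimes>\<^bsub>H\<^esub> Tw w = Tw w" if w: "w \<in> carrier W1" for w
    using Tw_mult[of "\<one>\<^bsub>W1\<^esub>" w] w len1_one by simp
  obtain f where f: "f \<in> fin_coeffs R (carrier W1)"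
     "\<one>\<^bsub>H\<^esub> = finsum H (\<lambda>w. f w \<odot>\<^bsub>H\<^esub> Tw w) {w. f w \<noteq> \<zero>\<^bsub>R\<^esub>}"
    using Tw_basis[of "\<one>\<^bsub>H\<^esub>"] by auto
  have fp: "finite {w. f w \<noteq> \<zero>\<^bsub>R\<^esub>}" "{w. f w \<noteq> \<zero>\<^bsub>R\<^esub>} \<subseteq> carrier W1" "\<And>w. f w \<in> carrier R"
    using fin_coeffsD[OF f(1)] by auto
  have T1c: "Tw \<one>\<^bsub>W1\<^esub> \<in> carrier H" by (simp add: Tw_closed)
  have "Tw \<one>\<^bsub>W1\<^esub> = Tw \<one>\<^bsub>W1\<^esub> \<otimes>\<^bsub>H\<^esub> \<one>\<^bsub>H\<^esub>" using T1c by simp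
  also have "\<dots> = finsum H (\<lambda>w. Tw \<one>\<^bsub>W1\<^esub> \<otimes>\<^bsub>H\<^esub> (f w \<odot>\<^bsub>H\<^esub> Tw w)) {w. f w \<noteq> \<zero>\<^bsub>R\<^esub>}"
    by (subst f(2), rule H.finsum_rdistr) (use fp T1c Tw_closed in auto)
  also have "\<dots> = finsum H (\<lambda>w. f w \<odot>\<^bsub>H\<^esub> Tw w) {w. f w \<noteq> \<zero>\<^bsub>R\<^esub>}"
    by (intro M.finsum_cong') (use fp T1c Tw_closed lt in \<open>auto simp: smult_mult_r\<close>)
  also have "\<dots> = \<one>\<^bsub>H\<^esub>" using f(2) by simp
  finally show ?thesis .
qed

lemma Tw_len0_unit:
  assumes w: "w \<in> carrier W1" and l: "L1 w = 0"
  shows "Tw w \<in> Units H" "inv\<^bsub>H\<^esub> (Tw w) = Tw (inv\<^bsub>W1\<^esub> w)"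
proof -
  have wi: "inv\<^bsub>W1\<^esub> w \<in> carrier W1" "L1 (inv\<^bsub>W1\<^esub> w) = 0" using w l len1_zero_inv by auto
  have a1: "Tw w \<otimes>\<^bsub>H\<^esub> Tw (inv\<^bsub>W1\<^esub> w) = \<one>\<^bsub>H\<^esub>"
    using Tw_mult[of w "inv\<^bsub>W1\<^esub> w"] w wi l len1_one Tw_one by simp
  have a2: "Tw (inv\<^bsub>W1\<^esub> w) \<otimes>\<^bsub>H\<^esub> Tw w = \<one>\<^bsub>H\<^esub>"
    using Tw_mult[of "inv\<^bsub>W1\<^esub> w" w] w wi l len1_one Tw_one by simp
  show "Tw w \<in> Units H" unfolding Units_def using a1 a2 w wi Tw_closed by blast
  then show "inv\<^bsub>H\<^esub> (Tw w) = Tw (inv\<^bsub>W1\<^esub> w)"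
    using a2 by (metis H.inv_unique' H.Units_closed Tw_closed wi(1) H.inv_char a1)
qed

lemma Tw_quadratic_diff:
  assumes s: "s \<in> S"
  shows "Tw (n s) \<otimes>\<^bsub>H\<^esub> Tw (n s) \<ominus>\<^bsub>H\<^esub> Tw (n s) \<otimes>\<^bsub>H\<^esub> bH s = a s \<odot>\<^bsub>H\<^esub> Tw (n s \<otimes>\<^bsub>W1\<^esub> n s)"
proof -
  have c: "Tw (n s) \<in> carrier H" "bH s \<in> carrier H" "a s \<odot>\<^bsub>H\<^esub> Tw (n s \<otimes>\<^bsub>W1\<^esub> n s) \<in> carrier H"
    using s n_closed Tw_closed bH_closed a_closed by auto
  have nb: "Tw (n s) \<otimes>\<^bsub>H\<^esub> bH s \<in> carrier H" using c by simp
  have "Tw (n s) \<otimes>\<^bsub>H\<^esub> Tw (n s) \<ominus>\<^bsub>H\<^esub> Tw (n s) \<otimes>\<^bsub>H\<^esub> bH s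
      = (a s \<odot>\<^bsub>H\<^esub> Tw (n s \<otimes>\<^bsub>W1\<^esub> n s) \<oplus>\<^bsub>H\<^esub> Tw (n s) \<otimes>\<^bsub>H\<^esub> bH s) \<oplus>\<^bsub>H\<^esub> \<ominus>\<^bsub>H\<^esub> (Tw (n s) \<otimes>\<^bsub>H\<^esub> bH s)"
    by (simp add: Tw_quadratic[OF s] a_minus_def)
  also have "\<dots> = a s \<odot>\<^bsub>H\<^esub> Tw (n s \<otimes>\<^bsub>W1\<^esub> n s) \<oplus>\<^bsub>H\<^esub> (Tw (n s) \<otimes>\<^bsub>H\<^esub> bH s \<oplus>\<^bsub>H\<^esub> \<ominus>\<^bsub>H\<^esub> (Tw (n s) \<otimes>\<^bsub>H\<^esub> bH s))"
    using c nb by (intro M.a_assoc) auto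
  also have "\<dots> = a s \<odot>\<^bsub>H\<^esub> Tw (n s \<otimes>\<^bsub>W1\<^esub> n s)" using c nb by (simp add: M.r_neg)
  finally show ?thesis .
qed

lemma bH_conj_comm:
  assumes s: "s \<in> S"
  shows "finsum H (\<lambda>t. b s t \<odot>\<^bsub>H\<^esub> Tw (n s \<otimes>\<^bsub>W1\<^esub> t \<otimes>\<^bsub>W1\<^esub> inv\<^bsub>W1\<^esub> (n s))) {t. b s t \<noteq> \<zero>\<^bsub>R\<^esub>} \<otimes>\<^bsub>H\<^esub> Tw (n s)
       = Tw (n s) \<otimes>\<^bsub>H\<^esub> bH s"
proof -
  let ?A = "{t. b s t \<noteq> \<zero>\<^bsub>R\<^esub>}"
  have nc: "n s \<in> carrier W1" using n_closed s by auto
  have tc: "\<And>t. t \<in> ?A \<Longrightarrow> t \<in> carrier W1 \<and> proj t = \<one>\<^bsub>W\<^esub> \<and> L1 t = 0" using b_coeffsD(3)[OF s] by blast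
  have ct: "\<And>t. t \<in> ?A \<Longrightarrow> n s \<otimes>\<^bsub>W1\<^esub> t \<otimes>\<^bsub>W1\<^esub> inv\<^bsub>W1\<^esub> (n s) \<in> carrier W1" using tc nc by auto
  have e1: "Tw (n s \<otimes>\<^bsub>W1\<^esub> t \<otimes>\<^bsub>W1\<^esub> inv\<^bsub>W1\<^esub> (n s)) \<otimes>\<^bsub>H\<^esub> Tw (n s) = Tw (n s) \<otimes>\<^bsub>H\<^esub> Tw t"
    if t: "t \<in> ?A" for t
  proof -
    let ?c = "n s \<otimes>\<^bsub>W1\<^esub> t \<otimes>\<^bsub>W1\<^esub> inv\<^bsub>W1\<^esub> (n s)"
    have tt: "t \<in> carrier W1" "proj t = \<one>\<^bsub>W\<^esub>" "L1 t = 0" using tc[OF t] by auto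
    have sc: "s \<in> carrier W" using s S_carrier by auto
    have pc: "proj ?c = \<one>\<^bsub>W\<^esub>" using tt nc s sc by (simp add: proj_inv proj_n S_involution inv_S)
    have lc: "L1 ?c = 0" using pc ct[OF t] by (simp add: len1_zero_iff Omega_one)
    have "?c \<otimes>\<^bsub>W1\<^esub> n s = n s \<otimes>\<^bsub>W1\<^esub> t" using nc tt by (simp add: W1.m_assoc)
    then have "Tw (?c \<otimes>\<^bsub>W1\<^esub> n s) = Tw (n s \<otimes>\<^bsub>W1\<^esub> t)" by simp
    moreover have "Tw (?c \<otimes>\<^bsub>W1\<^esub> n s) = Tw ?c \<otimes>\<^bsub>H\<^esub> Tw (n s)"
      using Tw_mult[of ?c "n s"] len1_zero_add[of ?c "n s"] ct[OF t] nc lc by simp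
    moreover have "Tw (n s \<otimes>\<^bsub>W1\<^esub> t) = Tw (n s) \<otimes>\<^bsub>H\<^esub> Tw t"
      using Tw_mult[of "n s" t] len1_zero_add'[of "n s" t] tt nc by simp
    ultimately show ?thesis by simp
  qed
  have "finsum H (\<lambda>t. b s t \<odot>\<^bsub>H\<^esub> Tw (n s \<otimes>\<^bsub>W1\<^esub> t \<otimes>\<^bsub>W1\<^esub> inv\<^bsub>W1\<^esub> (n s))) ?A \<otimes>\<^bsub>H\<^esub> Tw (n s)
     = finsum H (\<lambda>t. (b s t \<odot>\<^bsub>H\<^esub> Tw (n s \<otimes>\<^bsub>W1\<^esub> t \<otimes>\<^bsub>W1\<^esub> inv\<^bsub>W1\<^esub> (n s))) \<otimes>\<^bsub>H\<^esub> Tw (n s)) ?A"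
    by (rule H.finsum_ldistr) (use b_coeffsD[OF s] ct Tw_closed nc in auto)
  also have "\<dots> = finsum H (\<lambda>t. Tw (n s) \<otimes>\<^bsub>H\<^esub> (b s t \<odot>\<^bsub>H\<^esub> Tw t)) ?A"
    by (intro M.finsum_cong') (use b_coeffsD[OF s] ct Tw_closed nc tc e1 in \<open>auto simp: smult_mult_l smult_mult_r\<close>)
  also have "\<dots> = Tw (n s) \<otimes>\<^bsub>H\<^esub> bH s"
    unfolding bH_def by (rule H.finsum_rdistr[symmetric]) (use b_coeffsD[OF s] Tw_closed nc tc in auto)
  finally show ?thesis .
qed

text \<open>With \<open>N = T(n s)\<close>, the quadratic relation reads \<open>N (N - b s) = a s T(n s \<otimes> n s)\<close>, and
  \<open>T(n s \<otimes> n s)\<close> is invertible since \<open>n s \<otimes> n s\<close> has length \<open>0\<close>; this gives a right inverse of \<open>N\<close>.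
  Moving \<open>b s\<close> to the left of \<open>N\<close> by conjugation gives a left inverse.\<close>

lemma Tw_n_unit:
  assumes s: "s \<in> S"
  shows "Tw (n s) \<in> Units H"
proof -
  define N where "N = Tw (n s)"
  define N2 where "N2 = Tw (n s \<otimes>\<^bsub>W1\<^esub> n s)"
  define N2i where "N2i = Tw (inv\<^bsub>W1\<^esub> (n s \<otimes>\<^bsub>W1\<^esub> n s))"
  define B where "B = bH s"
  define B' where "B' = finsum H (\<lambda>t. b s t \<odot>\<^bsub>H\<^esub> Tw (n s \<otimes>\<^bsub>W1\<^esub> t \<otimes>\<^bsub>W1\<^esub> inv\<^bsub>W1\<^esub> (n s))) {t. b s t \<noteq> \<zero>\<^bsub>R\<^esub>}"
  define ai where "ai = inv\<^bsub>R\<^esub> (a s)"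
  have nc: "n s \<in> carrier W1" "n s \<otimes>\<^bsub>W1\<^esub> n s \<in> carrier W1" using n_closed s by auto
  have ac: "a s \<in> carrier R" "ai \<in> carrier R" "ai \<otimes>\<^bsub>R\<^esub> a s = \<one>\<^bsub>R\<^esub>" using aunit s ai_def by auto
  have u2: "Tw (n s \<otimes>\<^bsub>W1\<^esub> n s) \<in> Units H" "inv\<^bsub>H\<^esub> (Tw (n s \<otimes>\<^bsub>W1\<^esub> n s)) = N2i"
    using Tw_len0_unit[OF nc(2) len1_n_square[OF s]] N2i_def by auto
  have N2: "N2 \<otimes>\<^bsub>H\<^esub> N2i = \<one>\<^bsub>H\<^esub>" "N2i \<otimes>\<^bsub>H\<^esub> N2 = \<one>\<^bsub>H\<^esub>" using u2 N2_def by auto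
  have cs: "N \<in> carrier H" "N2 \<in> carrier H" "N2i \<in> carrier H" "B \<in> carrier H" "B' \<in> carrier H"
    using N_def N2_def N2i_def B_def B'_def Tw_closed nc bH_closed s u2 b_coeffsD[OF s]
    by (auto intro!: M.finsum_closed Tw_closed)
  have q: "N \<otimes>\<^bsub>H\<^esub> N \<ominus>\<^bsub>H\<^esub> N \<otimes>\<^bsub>H\<^esub> B = a s \<odot>\<^bsub>H\<^esub> N2"
    using Tw_quadratic_diff[OF s] N_def B_def N2_def by simp
  have cb: "B' \<otimes>\<^bsub>H\<^esub> N = N \<otimes>\<^bsub>H\<^esub> B" using bH_conj_comm[OF s] B'_def N_def B_def by simp
  have "N \<otimes>\<^bsub>H\<^esub> (ai \<odot>\<^bsub>H\<^esub> ((N \<ominus>\<^bsub>H\<^esub> B) \<otimes>\<^bsub>H\<^esub> N2i)) = ai \<odot>\<^bsub>H\<^esub> ((N \<otimes>\<^bsub>H\<^esub> N \<ominus>\<^bsub>H\<^esub> N \<otimes>\<^bsub>H\<^esub> B) \<otimes>\<^bsub>H\<^esub> N2i)"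
    using cs ac by (simp add: smult_mult_r H.ring_simprules)
  also have "\<dots> = \<one>\<^bsub>H\<^esub>" using q cs ac N2 by (simp add: smult_mult_l M.smult_assoc1[symmetric])
  finally have right: "N \<otimes>\<^bsub>H\<^esub> (ai \<odot>\<^bsub>H\<^esub> ((N \<ominus>\<^bsub>H\<^esub> B) \<otimes>\<^bsub>H\<^esub> N2i)) = \<one>\<^bsub>H\<^esub>" .
  have "(ai \<odot>\<^bsub>H\<^esub> (N2i \<otimes>\<^bsub>H\<^esub> (N \<ominus>\<^bsub>H\<^esub> B'))) \<otimes>\<^bsub>H\<^esub> N = ai \<odot>\<^bsub>H\<^esub> (N2i \<otimes>\<^bsub>H\<^esub> (N \<otimes>\<^bsub>H\<^esub> N \<ominus>\<^bsub>H\<^esub> B' \<otimes>\<^bsub>H\<^esub> N))"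
    using cs ac by (simp add: smult_mult_l H.ring_simprules)
  also have "\<dots> = \<one>\<^bsub>H\<^esub>" using q cb cs ac N2 by (simp add: smult_mult_r M.smult_assoc1[symmetric])
  finally have left: "(ai \<odot>\<^bsub>H\<^esub> (N2i \<otimes>\<^bsub>H\<^esub> (N \<ominus>\<^bsub>H\<^esub> B'))) \<otimes>\<^bsub>H\<^esub> N = \<one>\<^bsub>H\<^esub>" .
  show ?thesis unfolding N_def[symmetric]
    by (rule H.Units_of_left_right_inverse[OF _ _ _ right left]) (use cs ac in auto)
qed

lemma Tw_unit: "w \<in> carrier W1 \<Longrightarrow> Tw w \<in> Units H"
proof (induct "L1 w" arbitrary: w)
  case 0 then show ?case using Tw_len0_unit by simp
next
  case (Suc k)
  obtain s where s: "s \<in> S" "L1 (inv\<^bsub>W1\<^esub> (n s) \<otimes>\<^bsub>W1\<^esub> w) = k"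
    using len1_decrease[OF Suc(3) Suc(2)[symmetric]] by blast
  let ?w = "inv\<^bsub>W1\<^esub> (n s) \<otimes>\<^bsub>W1\<^esub> w"
  have nc: "n s \<in> carrier W1" using n_closed s by auto
  have wc: "?w \<in> carrier W1" using nc Suc by simp
  have eq: "w = n s \<otimes>\<^bsub>W1\<^esub> ?w" using nc Suc by (simp add: W1.m_assoc[symmetric])
  have "Tw w = Tw (n s) \<otimes>\<^bsub>H\<^esub> Tw ?w"
    using Tw_mult[of "n s" ?w] eq nc wc s Suc(2) len1_n by simp
  then show ?case using Suc(1)[OF s(2)[symmetric] wc] Tw_n_unit[OF s(1)] by simp
qed

end

section \<open>The presentation of the Hecke algebra\<close>

locale hecke_presentation = pro_p_hecke W1 W proj Waff S Omega n R H a b Tw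
  for W1 :: "('w,'c) monoid_scheme" and W :: "('v,'b) monoid_scheme" and proj :: "'w \<Rightarrow> 'v"
    and Waff S Omega :: "'v set" and n :: "'v \<Rightarrow> 'w"
    and R :: "('r,'d) ring_scheme" and H :: "('r,'h) module"
    and a :: "'v \<Rightarrow> 'r" and b :: "'v \<Rightarrow> 'w \<Rightarrow> 'r" and Tw :: "'w \<Rightarrow> 'h"
begin

sublocale P: presented_group_rep W1 L1 H Tw
proof (unfold_locales)
  show "w \<in> carrier W1 \<Longrightarrow> Tw w \<in> Units H" for w by (rule Tw_unit)
  show "w \<in> carrier W1 \<Longrightarrow> w' \<in> carrier W1 \<Longrightarrow> L1 (w \<otimes>\<^bsub>W1\<^esub> w') = L1 w + L1 w' \<Longrightarrow>
        Tw (w \<otimes>\<^bsub>W1\<^esub> w') = Tw w \<otimes>\<^bsub>H\<^esub> Tw w'" for w w' by (rule Tw_mult)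
qed

abbreviation "AG \<equiv> pres_group W1 L1"

sublocale C: group_algebra_lift R AG H P.ind_hom
  by (intro group_algebra_lift.intro group_algebra.intro group_algebra_lift_axioms.intro
      r_algebra_axioms R.is_cring P.A_group P.ind_hom_closed P.ind_hom_mult P.ind_hom_one)

abbreviation "RA \<equiv> galg R AG"

definition "TA w = delta R (pres_gen W1 L1 w)"
definition "TA_inv w = delta R (inv\<^bsub>AG\<^esub> (pres_gen W1 L1 w))"
definition "bA s = finsum RA (\<lambda>t. b s t \<odot>\<^bsub>RA\<^esub> TA t) {t. b s t \<noteq> \<zero>\<^bsub>R\<^esub>}"
definition "quad_rel s = TA (n s) \<otimes>\<^bsub>RA\<^esub> TA (n s) \<ominus>\<^bsub>RA\<^esub> a s \<odot>\<^bsub>RA\<^esub> TA (n s \<otimes>\<^bsub>W1\<^esub> n s)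
          \<ominus>\<^bsub>RA\<^esub> TA (n s) \<otimes>\<^bsub>RA\<^esub> bA s"

lemma hecke_ideal_gens_eq: "hecke_ideal_gens R W1 L1 S n a b = quad_rel ` S"
  unfolding hecke_ideal_gens_def quad_rel_def bA_def TA_def Let_def by simp

lemma RA_carrier: "carrier RA = C.coeffs" by (rule C.galg_simps(1))

lemma TA_closed: "w \<in> carrier W1 \<Longrightarrow> TA w \<in> carrier RA"
  unfolding TA_def RA_carrier by (intro R.delta_fin_coeffs P.pres_gen_closed)

lemma TA_inv_closed: "w \<in> carrier W1 \<Longrightarrow> TA_inv w \<in> carrier RA"
  unfolding TA_inv_def RA_carrier by (intro R.delta_fin_coeffs P.A.inv_closed P.pres_gen_closed)

lemma bA_closed: "s \<in> S \<Longrightarrow> bA s \<in> carrier RA"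
  unfolding bA_def using b_coeffsD
  by (intro C.RA.M.finsum_closed) (auto intro!: C.RA.M.smult_closed TA_closed)

lemma quad_rel_closed: "s \<in> S \<Longrightarrow> quad_rel s \<in> carrier RA"
  unfolding quad_rel_def using n_closed a_closed
  by (auto intro!: C.RA.M.minus_closed C.RA.H.m_closed C.RA.M.smult_closed TA_closed bA_closed)

lemma pres_gen_one: "pres_gen W1 L1 \<one>\<^bsub>W1\<^esub> = \<one>\<^bsub>AG\<^esub>"
proof -
  let ?g = "pres_gen W1 L1 \<one>\<^bsub>W1\<^esub>"
  have gc: "?g \<in> carrier AG" by (simp add: P.pres_gen_closed)
  have "?g = ?g \<otimes>\<^bsub>AG\<^esub> ?g" using P.pres_gen_mult[of "\<one>\<^bsub>W1\<^esub>" "\<one>\<^bsub>W1\<^esub>"] len1_one by simp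
  then have "inv\<^bsub>AG\<^esub> ?g \<otimes>\<^bsub>AG\<^esub> ?g = inv\<^bsub>AG\<^esub> ?g \<otimes>\<^bsub>AG\<^esub> (?g \<otimes>\<^bsub>AG\<^esub> ?g)" by simp
  then show ?thesis using gc by (simp add: P.A.m_assoc[symmetric])
qed

lemma TA_one: "TA \<one>\<^bsub>W1\<^esub> = \<one>\<^bsub>RA\<^esub>"
  by (simp add: TA_def pres_gen_one C.galg_one_eq_delta)

lemma TA_mult: "v \<in> carrier W1 \<Longrightarrow> w \<in> carrier W1 \<Longrightarrow> L1 (v \<otimes>\<^bsub>W1\<^esub> w) = L1 v + L1 w \<Longrightarrow>
   TA (v \<otimes>\<^bsub>W1\<^esub> w) = TA v \<otimes>\<^bsub>RA\<^esub> TA w"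
  by (simp add: TA_def P.pres_gen_mult C.delta_mult P.pres_gen_closed)

lemma TA_inv_len0: assumes v: "v \<in> carrier W1" and l: "L1 v = 0" shows "TA_inv v = TA (inv\<^bsub>W1\<^esub> v)"
proof -
  have vi: "inv\<^bsub>W1\<^esub> v \<in> carrier W1" "L1 (inv\<^bsub>W1\<^esub> v) = 0" using v l len1_zero_inv by auto
  have "pres_gen W1 L1 v \<otimes>\<^bsub>AG\<^esub> pres_gen W1 L1 (inv\<^bsub>W1\<^esub> v) = \<one>\<^bsub>AG\<^esub>"
    using P.pres_gen_mult[of v "inv\<^bsub>W1\<^esub> v"] v vi l len1_one pres_gen_one by simp
  moreover have "pres_gen W1 L1 (inv\<^bsub>W1\<^esub> v) \<otimes>\<^bsub>AG\<^esub> pres_gen W1 L1 v = \<one>\<^bsub>AG\<^esub>"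
    using P.pres_gen_mult[of "inv\<^bsub>W1\<^esub> v" v] v vi l len1_one pres_gen_one by simp
  ultimately have "inv\<^bsub>AG\<^esub> (pres_gen W1 L1 v) = pres_gen W1 L1 (inv\<^bsub>W1\<^esub> v)"
    using P.pres_gen_closed v vi P.A.inv_equality by blast
  then show ?thesis by (simp add: TA_inv_def TA_def)
qed

lemma TA_inv_mult: assumes v: "v \<in> carrier W1" and w: "w \<in> carrier W1" and l: "L1 (v \<otimes>\<^bsub>W1\<^esub> w) = L1 v + L1 w"
  shows "TA_inv (v \<otimes>\<^bsub>W1\<^esub> w) = TA_inv w \<otimes>\<^bsub>RA\<^esub> TA_inv v"
  using v w l by (simp add: TA_inv_def P.pres_gen_mult P.pres_gen_closed P.A.inv_mult_group C.delta_mult)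

lemma TA_inv_TA: "w \<in> carrier W1 \<Longrightarrow> TA_inv w \<otimes>\<^bsub>RA\<^esub> TA w = \<one>\<^bsub>RA\<^esub>"
  by (simp add: TA_inv_def TA_def C.delta_mult P.pres_gen_closed C.galg_one_eq_delta)

lemma TA_TA_inv: "w \<in> carrier W1 \<Longrightarrow> TA w \<otimes>\<^bsub>RA\<^esub> TA_inv w = \<one>\<^bsub>RA\<^esub>"
  by (simp add: TA_inv_def TA_def C.delta_mult P.pres_gen_closed C.galg_one_eq_delta)

lemma lift_TA: "w \<in> carrier W1 \<Longrightarrow> C.lift (TA w) = Tw w"
  unfolding TA_def by (simp add: C.lift_delta P.pres_gen_closed P.ind_hom_pres_gen)

lemma lift_closed: "x \<in> carrier RA \<Longrightarrow> C.lift x \<in> carrier H"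
  by (simp add: RA_carrier C.lift_closed)

lemma lift_add: "x \<in> carrier RA \<Longrightarrow> y \<in> carrier RA \<Longrightarrow> C.lift (x \<oplus>\<^bsub>RA\<^esub> y) = C.lift x \<oplus>\<^bsub>H\<^esub> C.lift y"
  by (simp add: RA_carrier C.lift_add)

lemma lift_mult: "x \<in> carrier RA \<Longrightarrow> y \<in> carrier RA \<Longrightarrow> C.lift (x \<otimes>\<^bsub>RA\<^esub> y) = C.lift x \<otimes>\<^bsub>H\<^esub> C.lift y"
  by (simp add: RA_carrier C.lift_mult)

lemma lift_smult: "r \<in> carrier R \<Longrightarrow> x \<in> carrier RA \<Longrightarrow> C.lift (r \<odot>\<^bsub>RA\<^esub> x) = r \<odot>\<^bsub>H\<^esub> C.lift x"
  by (simp add: RA_carrier C.lift_smult)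

lemma lift_neg: "x \<in> carrier RA \<Longrightarrow> C.lift (\<ominus>\<^bsub>RA\<^esub> x) = \<ominus>\<^bsub>H\<^esub> C.lift x"
proof -
  assume x: "x \<in> carrier RA"
  have "\<ominus>\<^bsub>RA\<^esub> x = (\<ominus>\<^bsub>R\<^esub> \<one>\<^bsub>R\<^esub>) \<odot>\<^bsub>RA\<^esub> x"
    using x by (simp add: C.RA.M.smult_l_minus)
  then have "C.lift (\<ominus>\<^bsub>RA\<^esub> x) = (\<ominus>\<^bsub>R\<^esub> \<one>\<^bsub>R\<^esub>) \<odot>\<^bsub>H\<^esub> C.lift x"
    using x by (simp add: lift_smult)
  also have "\<dots> = \<ominus>\<^bsub>H\<^esub> C.lift x" using lift_closed[OF x] by (simp add: M.smult_l_minus)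
  finally show ?thesis .
qed

lemma lift_minus: "x \<in> carrier RA \<Longrightarrow> y \<in> carrier RA \<Longrightarrow> C.lift (x \<ominus>\<^bsub>RA\<^esub> y) = C.lift x \<ominus>\<^bsub>H\<^esub> C.lift y"
  by (simp add: a_minus_def lift_add lift_neg)

lemma lift_zero: "C.lift \<zero>\<^bsub>RA\<^esub> = \<zero>\<^bsub>H\<^esub>"
  using lift_smult[of "\<zero>\<^bsub>R\<^esub>" "\<zero>\<^bsub>RA\<^esub>"] lift_closed[of "\<zero>\<^bsub>RA\<^esub>"] by simp

lemma lift_finsum:
  assumes "finite A" "\<And>i. i \<in> A \<Longrightarrow> f i \<in> carrier RA"
  shows "C.lift (finsum RA f A) = finsum H (\<lambda>i. C.lift (f i)) A"
  using assms
proof (induct A rule: finite_induct)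
  case empty then show ?case by (simp add: lift_zero)
next
  case (insert x A)
  then show ?case
    by (simp add: C.RA.M.finsum_insert lift_add C.RA.M.finsum_closed Pi_def M.finsum_insert lift_closed)
qed

lemma lift_bA: assumes s: "s \<in> S" shows "C.lift (bA s) = bH s"
  unfolding bA_def bH_def
  using b_coeffsD[OF s]
  by (subst lift_finsum) (auto intro!: M.finsum_cong' M.smult_closed Tw_closed simp: TA_closed lift_smult lift_TA)

lemma lift_quad_rel: "s \<in> S \<Longrightarrow> C.lift (quad_rel s) = \<zero>\<^bsub>H\<^esub>"
proof -
  assume s: "s \<in> S"
  have nc: "n s \<in> carrier W1" "n s \<otimes>\<^bsub>W1\<^esub> n s \<in> carrier W1" using n_closed s by auto
  have cs: "TA (n s) \<in> carrier RA" "TA (n s \<otimes>\<^bsub>W1\<^esub> n s) \<in> carrier RA" "bA s \<in> carrier RA"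
    using TA_closed nc bA_closed s by auto
  have hc: "Tw (n s) \<in> carrier H" "Tw (n s \<otimes>\<^bsub>W1\<^esub> n s) \<in> carrier H" "bH s \<in> carrier H"
    using Tw_closed nc bH_closed s by auto
  have "C.lift (quad_rel s) = Tw (n s) \<otimes>\<^bsub>H\<^esub> Tw (n s) \<ominus>\<^bsub>H\<^esub> a s \<odot>\<^bsub>H\<^esub> Tw (n s \<otimes>\<^bsub>W1\<^esub> n s)
          \<ominus>\<^bsub>H\<^esub> Tw (n s) \<otimes>\<^bsub>H\<^esub> bH s"
    unfolding quad_rel_def using cs a_closed[OF s] nc
    by (simp add: lift_minus lift_mult lift_smult lift_TA lift_bA s)
  also have "\<dots> = \<zero>\<^bsub>H\<^esub>"
    using Tw_quadratic[OF s] hc a_closed[OF s] by (simp add: H.ring_simprules)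
  finally show ?thesis .
qed

lemma lift_ring_hom_ring: "ring_hom_ring RA H C.lift"
  unfolding ring_hom_ring_def ring_hom_ring_axioms_def
  using C.galg_ring H.ring_axioms C.lift_ring_hom by simp

definition "I = genideal RA (quad_rel ` S)"

lemma I_ideal: "ideal I RA"
  unfolding I_def using quad_rel_closed by (intro ring.genideal_ideal[OF C.galg_ring]) auto

lemma quad_rel_in_I: "s \<in> S \<Longrightarrow> quad_rel s \<in> I"
  unfolding I_def using quad_rel_closed ring.genideal_self[OF C.galg_ring, of "quad_rel ` S"] by auto

lemma I_subset_kernel: "I \<subseteq> a_kernel RA H C.lift"
  unfolding I_def
proof (rule ring.genideal_minimal[OF C.galg_ring])
  show "ideal (a_kernel RA H C.lift) RA" by (rule ring_hom_ring.kernel_is_ideal[OF lift_ring_hom_ring])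
  show "quad_rel ` S \<subseteq> a_kernel RA H C.lift"
    unfolding a_kernel_def' using quad_rel_closed lift_quad_rel by auto
qed

abbreviation "coeffsW1 \<equiv> fin_coeffs R (carrier W1)"

definition "lin_comb c = finsum RA (\<lambda>w. c w \<odot>\<^bsub>RA\<^esub> TA w) {w. c w \<noteq> \<zero>\<^bsub>R\<^esub>}"

lemma lin_comb_eq_sum:
  assumes c: "c \<in> coeffsW1" and A: "finite A" "{w. c w \<noteq> \<zero>\<^bsub>R\<^esub>} \<subseteq> A" "A \<subseteq> carrier W1"
  shows "lin_comb c = finsum RA (\<lambda>w. c w \<odot>\<^bsub>RA\<^esub> TA w) A"
  unfolding lin_comb_def
  by (rule C.RA.M.finsum_superset) (use A fin_coeffsD(1)[OF c] in \<open>auto simp: TA_closed subset_iff\<close>)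

lemma lin_comb_closed: "c \<in> coeffsW1 \<Longrightarrow> lin_comb c \<in> carrier RA"
  unfolding lin_comb_def using fin_coeffsD[of c R "carrier W1"]
  by (intro C.RA.M.finsum_closed) (auto intro!: TA_closed)

lemma lin_comb_add:
  assumes c: "c \<in> coeffsW1" and d: "d \<in> coeffsW1"
  shows "lin_comb (\<lambda>w. c w \<oplus>\<^bsub>R\<^esub> d w) = lin_comb c \<oplus>\<^bsub>RA\<^esub> lin_comb d"
proof -
  define A where "A = {w. c w \<noteq> \<zero>\<^bsub>R\<^esub>} \<union> {w. d w \<noteq> \<zero>\<^bsub>R\<^esub>}"
  have A: "finite A" "A \<subseteq> carrier W1" using fin_coeffsD[OF c] fin_coeffsD[OF d] A_def by auto
  have cd: "(\<lambda>w. c w \<oplus>\<^bsub>R\<^esub> d w) \<in> coeffsW1" by (rule R.fin_coeffs_add[OF c d])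
  have cc: "\<And>w. c w \<in> carrier R" "\<And>w. d w \<in> carrier R" using fin_coeffsD(1)[OF c] fin_coeffsD(1)[OF d] by auto
  have "lin_comb (\<lambda>w. c w \<oplus>\<^bsub>R\<^esub> d w) = finsum RA (\<lambda>w. (c w \<oplus>\<^bsub>R\<^esub> d w) \<odot>\<^bsub>RA\<^esub> TA w) A"
    by (rule lin_comb_eq_sum[OF cd A(1) _ A(2)]) (auto simp: A_def)
  also have "\<dots> = finsum RA (\<lambda>w. c w \<odot>\<^bsub>RA\<^esub> TA w \<oplus>\<^bsub>RA\<^esub> d w \<odot>\<^bsub>RA\<^esub> TA w) A"
    by (intro C.RA.M.finsum_cong') (use A cc in \<open>auto simp: C.RA.M.smult_l_distr TA_closed subset_iff\<close>)
  also have "\<dots> = lin_comb c \<oplus>\<^bsub>RA\<^esub> lin_comb d"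
    using lin_comb_eq_sum[OF c A(1) _ A(2)] lin_comb_eq_sum[OF d A(1) _ A(2)] A cc
    by (subst C.RA.M.finsum_addf) (auto simp: A_def TA_closed subset_iff)
  finally show ?thesis .
qed

lemma lin_comb_smult:
  assumes r: "r \<in> carrier R" and c: "c \<in> coeffsW1"
  shows "lin_comb (\<lambda>w. r \<otimes>\<^bsub>R\<^esub> c w) = r \<odot>\<^bsub>RA\<^esub> lin_comb c"
proof -
  define A where "A = {w. c w \<noteq> \<zero>\<^bsub>R\<^esub>}"
  have A: "finite A" "A \<subseteq> carrier W1" using fin_coeffsD[OF c] A_def by auto
  have rc: "(\<lambda>w. r \<otimes>\<^bsub>R\<^esub> c w) \<in> coeffsW1" by (rule R.fin_coeffs_smult[OF c r])
  have cc: "\<And>w. c w \<in> carrier R" using fin_coeffsD(1)[OF c] by auto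
  have "lin_comb (\<lambda>w. r \<otimes>\<^bsub>R\<^esub> c w) = finsum RA (\<lambda>w. (r \<otimes>\<^bsub>R\<^esub> c w) \<odot>\<^bsub>RA\<^esub> TA w) A"
    by (rule lin_comb_eq_sum[OF rc A(1) _ A(2)]) (use r in \<open>auto simp: A_def\<close>)
  also have "\<dots> = finsum RA (\<lambda>w. r \<odot>\<^bsub>RA\<^esub> (c w \<odot>\<^bsub>RA\<^esub> TA w)) A"
    by (intro C.RA.M.finsum_cong') (use A cc r in \<open>auto simp: C.RA.M.smult_assoc1 TA_closed subset_iff\<close>)
  also have "\<dots> = r \<odot>\<^bsub>RA\<^esub> lin_comb c"
    unfolding lin_comb_def A_def[symmetric]
    by (rule C.RA.M.finsum_smult_ldistr[symmetric]) (use A cc r in \<open>auto simp: TA_closed subset_iff\<close>)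
  finally show ?thesis .
qed

lemma lin_comb_zero: "lin_comb (\<lambda>w. \<zero>\<^bsub>R\<^esub>) = \<zero>\<^bsub>RA\<^esub>"
  unfolding lin_comb_def by simp

lemma lin_comb_delta: "w \<in> carrier W1 \<Longrightarrow> lin_comb (delta R w) = TA w"
proof -
  assume w: "w \<in> carrier W1"
  have "lin_comb (delta R w) = finsum RA (\<lambda>v. delta R w v \<odot>\<^bsub>RA\<^esub> TA v) {w}"
    by (rule lin_comb_eq_sum[OF R.delta_fin_coeffs[OF w]]) (use w in \<open>auto simp: delta_def\<close>)
  also have "\<dots> = TA w" using w TA_closed by (simp add: delta_def)
  finally show ?thesis .
qed

lemma lift_lin_comb: "c \<in> coeffsW1 \<Longrightarrow> C.lift (lin_comb c) = finsum H (\<lambda>w. c w \<odot>\<^bsub>H\<^esub> Tw w) {w. c w \<noteq> \<zero>\<^bsub>R\<^esub>}"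
proof -
  assume c: "c \<in> coeffsW1"
  have A: "finite {w. c w \<noteq> \<zero>\<^bsub>R\<^esub>}" "{w. c w \<noteq> \<zero>\<^bsub>R\<^esub>} \<subseteq> carrier W1" "\<And>w. c w \<in> carrier R"
    using fin_coeffsD[OF c] by auto
  show ?thesis unfolding lin_comb_def
    using A by (subst lift_finsum) (auto intro!: M.finsum_cong' simp: TA_closed lift_smult lift_TA subset_iff Tw_closed)
qed

lemma I_subset: "I \<subseteq> carrier RA" using I_ideal by (simp add: ideal_def additive_subgroup.a_subset)

lemma I_zero: "\<zero>\<^bsub>RA\<^esub> \<in> I" using I_ideal by (simp add: ideal_def additive_subgroup.zero_closed)
lemma I_add: "i \<in> I \<Longrightarrow> j \<in> I \<Longrightarrow> i \<oplus>\<^bsub>RA\<^esub> j \<in> I"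
  using I_ideal by (simp add: ideal_def additive_subgroup.a_closed)
lemma I_lmult: "i \<in> I \<Longrightarrow> x \<in> carrier RA \<Longrightarrow> x \<otimes>\<^bsub>RA\<^esub> i \<in> I"
  using I_ideal by (simp add: ideal.I_l_closed)
lemma I_rmult: "i \<in> I \<Longrightarrow> x \<in> carrier RA \<Longrightarrow> i \<otimes>\<^bsub>RA\<^esub> x \<in> I"
  using I_ideal by (simp add: ideal.I_r_closed)
lemma I_smult: "i \<in> I \<Longrightarrow> r \<in> carrier R \<Longrightarrow> r \<odot>\<^bsub>RA\<^esub> i \<in> I"
proof -
  assume i: "i \<in> I" and r: "r \<in> carrier R"
  have ic: "i \<in> carrier RA" using i I_subset by auto
  have "r \<odot>\<^bsub>RA\<^esub> i = (r \<odot>\<^bsub>RA\<^esub> \<one>\<^bsub>RA\<^esub>) \<otimes>\<^bsub>RA\<^esub> i" using ic r by (simp add: C.RA.smult_mult_l)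
  then show ?thesis using I_lmult[OF i] r by simp
qed
lemma I_neg: "i \<in> I \<Longrightarrow> \<ominus>\<^bsub>RA\<^esub> i \<in> I"
  using I_ideal by (simp add: ideal_def additive_subgroup.a_inv_closed)

definition "spanned = {x \<in> carrier RA. \<exists>c\<in>coeffsW1. x \<ominus>\<^bsub>RA\<^esub> lin_comb c \<in> I}"

lemma spanned_closed: "x \<in> spanned \<Longrightarrow> x \<in> carrier RA" by (simp add: spanned_def)

lemma TA_spanned: "w \<in> carrier W1 \<Longrightarrow> TA w \<in> spanned"
  unfolding spanned_def using R.delta_fin_coeffs[of w] lin_comb_delta TA_closed I_zero
  by (auto intro!: bexI[of _ "delta R w"] simp: C.RA.M.r_neg a_minus_def)

lemma spanned_add: "x \<in> spanned \<Longrightarrow> y \<in> spanned \<Longrightarrow> x \<oplus>\<^bsub>RA\<^esub> y \<in> spanned"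
proof -
  assume x: "x \<in> spanned" and y: "y \<in> spanned"
  obtain c where c: "c \<in> coeffsW1" "x \<ominus>\<^bsub>RA\<^esub> lin_comb c \<in> I" using x spanned_def by auto
  obtain d where d: "d \<in> coeffsW1" "y \<ominus>\<^bsub>RA\<^esub> lin_comb d \<in> I" using y spanned_def by auto
  have "(x \<oplus>\<^bsub>RA\<^esub> y) \<ominus>\<^bsub>RA\<^esub> lin_comb (\<lambda>w. c w \<oplus>\<^bsub>R\<^esub> d w) = (x \<ominus>\<^bsub>RA\<^esub> lin_comb c) \<oplus>\<^bsub>RA\<^esub> (y \<ominus>\<^bsub>RA\<^esub> lin_comb d)"
    using lin_comb_add[OF c(1) d(1)] lin_comb_closed[OF c(1)] lin_comb_closed[OF d(1)] spanned_closed[OF x] spanned_closed[OF y]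
    by (simp add: C.RA.M.add_diff_add)
  moreover have "x \<oplus>\<^bsub>RA\<^esub> y \<in> carrier RA" using spanned_closed x y by simp
  ultimately show ?thesis unfolding spanned_def using c d I_add R.fin_coeffs_add[OF c(1) d(1)]
    by (intro CollectI conjI bexI[of _ "\<lambda>w. c w \<oplus>\<^bsub>R\<^esub> d w"]) auto
qed

lemma spanned_add_I: "x \<in> spanned \<Longrightarrow> i \<in> I \<Longrightarrow> x \<oplus>\<^bsub>RA\<^esub> i \<in> spanned"
proof -
  assume x: "x \<in> spanned" and i: "i \<in> I"
  obtain c where c: "c \<in> coeffsW1" "x \<ominus>\<^bsub>RA\<^esub> lin_comb c \<in> I" using x spanned_def by auto
  have "(x \<oplus>\<^bsub>RA\<^esub> i) \<ominus>\<^bsub>RA\<^esub> lin_comb c = (x \<ominus>\<^bsub>RA\<^esub> lin_comb c) \<oplus>\<^bsub>RA\<^esub> i"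
    using lin_comb_closed[OF c(1)] spanned_closed[OF x] i I_subset by (simp add: C.RA.M.add_diff_comm subsetD)
  moreover have "x \<oplus>\<^bsub>RA\<^esub> i \<in> carrier RA" using spanned_closed x i I_subset by auto
  ultimately show ?thesis unfolding spanned_def using c I_add i
    by (intro CollectI conjI bexI[of _ c]) auto
qed

lemma spanned_smult: "r \<in> carrier R \<Longrightarrow> x \<in> spanned \<Longrightarrow> r \<odot>\<^bsub>RA\<^esub> x \<in> spanned"
proof -
  assume r: "r \<in> carrier R" and x: "x \<in> spanned"
  obtain c where c: "c \<in> coeffsW1" "x \<ominus>\<^bsub>RA\<^esub> lin_comb c \<in> I" using x spanned_def by auto
  have xc: "x \<in> carrier RA" using spanned_closed x by auto
  have "r \<odot>\<^bsub>RA\<^esub> x \<ominus>\<^bsub>RA\<^esub> lin_comb (\<lambda>w. r \<otimes>\<^bsub>R\<^esub> c w) = r \<odot>\<^bsub>RA\<^esub> (x \<ominus>\<^bsub>RA\<^esub> lin_comb c)"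
    using lin_comb_smult[OF r c(1)] lin_comb_closed[OF c(1)] xc r
    by (simp add: a_minus_def C.RA.M.smult_r_distr C.RA.M.smult_r_minus)
  then show ?thesis unfolding spanned_def using c I_smult r R.fin_coeffs_smult[OF c(1) r] xc
    by (intro CollectI conjI bexI[of _ "\<lambda>w. r \<otimes>\<^bsub>R\<^esub> c w"]) auto
qed

lemma zero_spanned: "\<zero>\<^bsub>RA\<^esub> \<in> spanned"
  unfolding spanned_def using R.fin_coeffs_zero lin_comb_zero I_zero
  by (auto intro!: bexI[of _ "\<lambda>w. \<zero>\<^bsub>R\<^esub>"] simp: a_minus_def)

lemma spanned_finsum: "finite A \<Longrightarrow> (\<And>i. i \<in> A \<Longrightarrow> f i \<in> spanned) \<Longrightarrow> finsum RA f A \<in> spanned"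
proof (induct A rule: finite_induct)
  case empty then show ?case by (simp add: zero_spanned)
next
  case (insert x A)
  then have "finsum RA f (insert x A) = f x \<oplus>\<^bsub>RA\<^esub> finsum RA f A"
    using spanned_closed by (intro C.RA.M.finsum_insert) auto
  then show ?case using insert spanned_add by simp
qed

text \<open>The left multipliers preserving \<open>spanned\<close> form a subring containing every \<open>TA w\<close> and
  \<open>TA_inv w\<close> (by induction on the length, using the quadratic relations), so they exhaust \<open>RA\<close>;
  applied to \<open>\<one>\<close> this shows that the \<open>TA w\<close> span \<open>RA\<close> modulo \<open>I\<close>.\<close>

definition "stab = {z \<in> carrier RA. \<forall>x\<in>spanned. z \<otimes>\<^bsub>RA\<^esub> x \<in> spanned}"

lemma stab_closed: "z \<in> stab \<Longrightarrow> z \<in> carrier RA" by (simp add: stab_def)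

lemma stabI:
  assumes z: "z \<in> carrier RA" and h: "\<And>w. w \<in> carrier W1 \<Longrightarrow> z \<otimes>\<^bsub>RA\<^esub> TA w \<in> spanned"
  shows "z \<in> stab"
  unfolding stab_def
proof (intro CollectI conjI ballI z)
  fix x assume x: "x \<in> spanned"
  obtain c where c: "c \<in> coeffsW1" "x \<ominus>\<^bsub>RA\<^esub> lin_comb c \<in> I" using x spanned_def by auto
  have xc: "x \<in> carrier RA" using spanned_closed x by auto
  have lc: "lin_comb c \<in> carrier RA" using lin_comb_closed c by auto
  have A: "finite {w. c w \<noteq> \<zero>\<^bsub>R\<^esub>}" "{w. c w \<noteq> \<zero>\<^bsub>R\<^esub>} \<subseteq> carrier W1" "\<And>w. c w \<in> carrier R"
    using fin_coeffsD[OF c(1)] by auto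
  have "z \<otimes>\<^bsub>RA\<^esub> lin_comb c = finsum RA (\<lambda>w. z \<otimes>\<^bsub>RA\<^esub> (c w \<odot>\<^bsub>RA\<^esub> TA w)) {w. c w \<noteq> \<zero>\<^bsub>R\<^esub>}"
    unfolding lin_comb_def by (rule C.RA.H.finsum_rdistr) (use A z in \<open>auto simp: TA_closed subset_iff\<close>)
  also have "\<dots> = finsum RA (\<lambda>w. c w \<odot>\<^bsub>RA\<^esub> (z \<otimes>\<^bsub>RA\<^esub> TA w)) {w. c w \<noteq> \<zero>\<^bsub>R\<^esub>}"
    by (intro C.RA.M.finsum_cong') (use A z in \<open>auto simp: TA_closed subset_iff C.RA.smult_mult_r\<close>)
  finally have zl: "z \<otimes>\<^bsub>RA\<^esub> lin_comb c \<in> spanned"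
    using A h by (auto intro!: spanned_finsum spanned_smult)
  have "z \<otimes>\<^bsub>RA\<^esub> x = z \<otimes>\<^bsub>RA\<^esub> lin_comb c \<oplus>\<^bsub>RA\<^esub> z \<otimes>\<^bsub>RA\<^esub> (x \<ominus>\<^bsub>RA\<^esub> lin_comb c)"
    using z xc lc by (simp add: C.RA.H.ring_simprules)
  then show "z \<otimes>\<^bsub>RA\<^esub> x \<in> spanned" using spanned_add_I[OF zl I_lmult[OF c(2) z]] by simp
qed

lemma stab_mult: "z \<in> stab \<Longrightarrow> z' \<in> stab \<Longrightarrow> z \<otimes>\<^bsub>RA\<^esub> z' \<in> stab"
  unfolding stab_def using spanned_closed by (auto simp: C.RA.H.m_assoc)

lemma stab_add: "z \<in> stab \<Longrightarrow> z' \<in> stab \<Longrightarrow> z \<oplus>\<^bsub>RA\<^esub> z' \<in> stab"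
  unfolding stab_def using spanned_closed by (auto simp: C.RA.H.l_distr intro!: spanned_add)

lemma stab_smult: "r \<in> carrier R \<Longrightarrow> z \<in> stab \<Longrightarrow> r \<odot>\<^bsub>RA\<^esub> z \<in> stab"
  unfolding stab_def using spanned_closed by (auto simp: C.RA.smult_mult_l intro!: spanned_smult)

lemma stab_add_I: "z \<in> stab \<Longrightarrow> i \<in> I \<Longrightarrow> z \<oplus>\<^bsub>RA\<^esub> i \<in> stab"
proof -
  assume z: "z \<in> stab" and i: "i \<in> I"
  have ic: "i \<in> carrier RA" using i I_subset by auto
  show ?thesis unfolding stab_def
  proof (intro CollectI conjI ballI)
    show "z \<oplus>\<^bsub>RA\<^esub> i \<in> carrier RA" using z ic stab_closed by auto
    fix x assume x: "x \<in> spanned"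
    have "(z \<oplus>\<^bsub>RA\<^esub> i) \<otimes>\<^bsub>RA\<^esub> x = z \<otimes>\<^bsub>RA\<^esub> x \<oplus>\<^bsub>RA\<^esub> i \<otimes>\<^bsub>RA\<^esub> x"
      using z ic spanned_closed[OF x] stab_closed by (simp add: C.RA.H.l_distr)
    then show "(z \<oplus>\<^bsub>RA\<^esub> i) \<otimes>\<^bsub>RA\<^esub> x \<in> spanned"
      using spanned_add_I[of "z \<otimes>\<^bsub>RA\<^esub> x" "i \<otimes>\<^bsub>RA\<^esub> x"] z x I_rmult[OF i spanned_closed[OF x]] stab_def by auto
  qed
qed

lemma stab_neg: "z \<in> stab \<Longrightarrow> \<ominus>\<^bsub>RA\<^esub> z \<in> stab"
proof -
  assume z: "z \<in> stab"
  have "\<ominus>\<^bsub>RA\<^esub> z = (\<ominus>\<^bsub>R\<^esub> \<one>\<^bsub>R\<^esub>) \<odot>\<^bsub>RA\<^esub> z" using stab_closed[OF z] by (simp add: C.RA.M.smult_l_minus)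
  then show ?thesis using stab_smult[OF _ z] by simp
qed

lemma stab_minus: "z \<in> stab \<Longrightarrow> z' \<in> stab \<Longrightarrow> z \<ominus>\<^bsub>RA\<^esub> z' \<in> stab"
  by (simp add: a_minus_def stab_add stab_neg)

lemma one_stab: "\<one>\<^bsub>RA\<^esub> \<in> stab"
  unfolding stab_def using spanned_closed by auto

lemma stab_finsum: "finite A \<Longrightarrow> (\<And>i. i \<in> A \<Longrightarrow> f i \<in> stab) \<Longrightarrow> finsum RA f A \<in> stab"
proof (induct A rule: finite_induct)
  case empty then show ?case using stab_smult[OF R.zero_closed one_stab] one_stab stab_closed by simp
next
  case (insert x A)
  then have "finsum RA f (insert x A) = f x \<oplus>\<^bsub>RA\<^esub> finsum RA f A"
    using stab_closed by (intro C.RA.M.finsum_insert) auto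
  then show ?case using insert stab_add by simp
qed

lemma TA_len0_stab: "v \<in> carrier W1 \<Longrightarrow> L1 v = 0 \<Longrightarrow> TA v \<in> stab"
  by (rule stabI) (auto simp: TA_closed TA_mult[symmetric] len1_zero_add intro!: TA_spanned)

lemma bA_stab: "s \<in> S \<Longrightarrow> bA s \<in> stab"
  unfolding bA_def using b_coeffsD by (auto intro!: stab_finsum stab_smult TA_len0_stab)

lemma TA_n_square: assumes s: "s \<in> S"
  shows "TA (n s) \<otimes>\<^bsub>RA\<^esub> TA (n s) = quad_rel s \<oplus>\<^bsub>RA\<^esub> (a s \<odot>\<^bsub>RA\<^esub> TA (n s \<otimes>\<^bsub>W1\<^esub> n s) \<oplus>\<^bsub>RA\<^esub> TA (n s) \<otimes>\<^bsub>RA\<^esub> bA s)"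
proof -
  have nc: "n s \<in> carrier W1" "n s \<otimes>\<^bsub>W1\<^esub> n s \<in> carrier W1" using n_closed s by auto
  have cs: "TA (n s) \<in> carrier RA" "TA (n s \<otimes>\<^bsub>W1\<^esub> n s) \<in> carrier RA" "bA s \<in> carrier RA"
    using TA_closed nc bA_closed s by auto
  show ?thesis unfolding quad_rel_def using cs a_closed[OF s] by (simp add: C.RA.M.diff_diff_add_cancel)
qed

lemma TA_n_bA_mult_spanned:
  assumes s: "s \<in> S" and w': "w' \<in> carrier W1"
    and lsum: "L1 (n s \<otimes>\<^bsub>W1\<^esub> w') = L1 (n s) + L1 w'"
  shows "TA (n s) \<otimes>\<^bsub>RA\<^esub> (bA s \<otimes>\<^bsub>RA\<^esub> TA w') \<in> spanned"
proof -
  let ?A = "{t. b s t \<noteq> \<zero>\<^bsub>R\<^esub>}"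
  have nc: "n s \<in> carrier W1" using n_closed s by auto
  have bp: "finite ?A" "\<And>t. b s t \<in> carrier R" "\<And>t. t \<in> ?A \<Longrightarrow> t \<in> carrier W1 \<and> proj t = \<one>\<^bsub>W\<^esub> \<and> L1 t = 0"
    using b_coeffsD[OF s] by auto
  have cs: "TA (n s) \<in> carrier RA" "TA w' \<in> carrier RA" using TA_closed nc w' by auto
  have summand: "TA (n s) \<otimes>\<^bsub>RA\<^esub> (TA t \<otimes>\<^bsub>RA\<^esub> TA w') = TA (n s \<otimes>\<^bsub>W1\<^esub> (t \<otimes>\<^bsub>W1\<^esub> w'))" if t: "t \<in> ?A" for t
  proof -
    have tc: "t \<in> carrier W1" "proj t = \<one>\<^bsub>W\<^esub>" "L1 t = 0" using bp(3)[OF t] by auto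
    have l1: "L1 (t \<otimes>\<^bsub>W1\<^esub> w') = L1 t + L1 w'" using len1_zero_add[OF tc(1) w' tc(3)] .
    have "proj (n s \<otimes>\<^bsub>W1\<^esub> (t \<otimes>\<^bsub>W1\<^esub> w')) = proj (n s \<otimes>\<^bsub>W1\<^esub> w')"
      using tc nc w' by simp
    then have l2: "L1 (n s \<otimes>\<^bsub>W1\<^esub> (t \<otimes>\<^bsub>W1\<^esub> w')) = L1 (n s) + L1 (t \<otimes>\<^bsub>W1\<^esub> w')"
      using lsum l1 tc by (simp add: len1_eq)
    show ?thesis using TA_mult[OF tc(1) w' l1] TA_mult[OF nc _ l2] tc w' by simp
  qed
  have "bA s \<otimes>\<^bsub>RA\<^esub> TA w' = finsum RA (\<lambda>t. (b s t \<odot>\<^bsub>RA\<^esub> TA t) \<otimes>\<^bsub>RA\<^esub> TA w') ?A"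
    unfolding bA_def by (rule C.RA.H.finsum_ldistr) (use bp cs in \<open>auto intro!: TA_closed\<close>)
  then have "TA (n s) \<otimes>\<^bsub>RA\<^esub> (bA s \<otimes>\<^bsub>RA\<^esub> TA w')
      = TA (n s) \<otimes>\<^bsub>RA\<^esub> finsum RA (\<lambda>t. (b s t \<odot>\<^bsub>RA\<^esub> TA t) \<otimes>\<^bsub>RA\<^esub> TA w') ?A" by simp
  also have "\<dots> = finsum RA (\<lambda>t. TA (n s) \<otimes>\<^bsub>RA\<^esub> ((b s t \<odot>\<^bsub>RA\<^esub> TA t) \<otimes>\<^bsub>RA\<^esub> TA w')) ?A"
    by (rule C.RA.H.finsum_rdistr) (use bp cs in \<open>auto intro!: TA_closed\<close>)
  also have "\<dots> = finsum RA (\<lambda>t. b s t \<odot>\<^bsub>RA\<^esub> TA (n s \<otimes>\<^bsub>W1\<^esub> (t \<otimes>\<^bsub>W1\<^esub> w'))) ?A"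
  proof (rule C.RA.M.finsum_cong'[OF refl])
    show "(\<lambda>t. b s t \<odot>\<^bsub>RA\<^esub> TA (n s \<otimes>\<^bsub>W1\<^esub> (t \<otimes>\<^bsub>W1\<^esub> w'))) \<in> ?A \<rightarrow> carrier RA"
      using bp nc w' by (auto intro!: TA_closed)
    fix t assume t: "t \<in> ?A"
    have "TA t \<in> carrier RA" using bp(3)[OF t] TA_closed by auto
    then show "TA (n s) \<otimes>\<^bsub>RA\<^esub> ((b s t \<odot>\<^bsub>RA\<^esub> TA t) \<otimes>\<^bsub>RA\<^esub> TA w') = b s t \<odot>\<^bsub>RA\<^esub> TA (n s \<otimes>\<^bsub>W1\<^esub> (t \<otimes>\<^bsub>W1\<^esub> w'))"
      using summand[OF t] cs bp(2) by (simp add: C.RA.smult_mult_l C.RA.smult_mult_r)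
  qed
  finally show ?thesis using bp nc w' by (auto intro!: spanned_finsum spanned_smult TA_spanned)
qed

lemma TA_n_descent_spanned:
  assumes s: "s \<in> S" and w': "w' \<in> carrier W1"
    and lsum: "L1 (n s \<otimes>\<^bsub>W1\<^esub> w') = L1 (n s) + L1 w'"
  shows "TA (n s) \<otimes>\<^bsub>RA\<^esub> (TA (n s) \<otimes>\<^bsub>RA\<^esub> TA w') \<in> spanned"
proof -
  have nc: "n s \<in> carrier W1" "n s \<otimes>\<^bsub>W1\<^esub> n s \<in> carrier W1" using n_closed s by auto
  define N where "N = TA (n s)"
  define V where "V = TA w'"
  define P where "P = TA (n s \<otimes>\<^bsub>W1\<^esub> n s)"
  define B where "B = bA s"
  have cs: "N \<in> carrier RA" "V \<in> carrier RA" "P \<in> carrier RA" "B \<in> carrier RA" "quad_rel s \<in> carrier RA"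
    using N_def V_def P_def B_def TA_closed nc w' bA_closed s quad_rel_closed by auto
  have ac: "a s \<in> carrier R" using a_closed s by auto
  have "N \<otimes>\<^bsub>RA\<^esub> (N \<otimes>\<^bsub>RA\<^esub> V) = (N \<otimes>\<^bsub>RA\<^esub> N) \<otimes>\<^bsub>RA\<^esub> V" using cs by (simp add: C.RA.H.m_assoc)
  also have "\<dots> = (quad_rel s \<oplus>\<^bsub>RA\<^esub> (a s \<odot>\<^bsub>RA\<^esub> P \<oplus>\<^bsub>RA\<^esub> N \<otimes>\<^bsub>RA\<^esub> B)) \<otimes>\<^bsub>RA\<^esub> V"
    using TA_n_square[OF s] N_def P_def B_def by simp
  also have "\<dots> = (a s \<odot>\<^bsub>RA\<^esub> (P \<otimes>\<^bsub>RA\<^esub> V) \<oplus>\<^bsub>RA\<^esub> N \<otimes>\<^bsub>RA\<^esub> (B \<otimes>\<^bsub>RA\<^esub> V)) \<oplus>\<^bsub>RA\<^esub> quad_rel s \<otimes>\<^bsub>RA\<^esub> V"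
    using cs ac by (simp add: C.RA.H.l_distr C.RA.smult_mult_l C.RA.H.m_assoc C.RA.M.a_comm)
  finally have eq: "N \<otimes>\<^bsub>RA\<^esub> (N \<otimes>\<^bsub>RA\<^esub> V)
      = (a s \<odot>\<^bsub>RA\<^esub> (P \<otimes>\<^bsub>RA\<^esub> V) \<oplus>\<^bsub>RA\<^esub> N \<otimes>\<^bsub>RA\<^esub> (B \<otimes>\<^bsub>RA\<^esub> V)) \<oplus>\<^bsub>RA\<^esub> quad_rel s \<otimes>\<^bsub>RA\<^esub> V" .
  have "P \<otimes>\<^bsub>RA\<^esub> V = TA (n s \<otimes>\<^bsub>W1\<^esub> n s \<otimes>\<^bsub>W1\<^esub> w')"
    using TA_mult[OF nc(2) w'] len1_zero_add[OF nc(2) w' len1_n_square[OF s]] P_def V_def by simp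
  then have "P \<otimes>\<^bsub>RA\<^esub> V \<in> spanned" using TA_spanned nc w' by simp
  moreover have "N \<otimes>\<^bsub>RA\<^esub> (B \<otimes>\<^bsub>RA\<^esub> V) \<in> spanned"
    unfolding N_def B_def V_def by (rule TA_n_bA_mult_spanned[OF s w' lsum])
  ultimately have "a s \<odot>\<^bsub>RA\<^esub> (P \<otimes>\<^bsub>RA\<^esub> V) \<oplus>\<^bsub>RA\<^esub> N \<otimes>\<^bsub>RA\<^esub> (B \<otimes>\<^bsub>RA\<^esub> V) \<in> spanned"
    using ac by (intro spanned_add spanned_smult)
  moreover have "quad_rel s \<otimes>\<^bsub>RA\<^esub> V \<in> I" using I_rmult[OF quad_rel_in_I[OF s]] cs by auto
  ultimately show ?thesis using eq spanned_add_I N_def V_def by simp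
qed

lemma TA_n_stab: assumes s: "s \<in> S" shows "TA (n s) \<in> stab"
proof (rule stabI)
  have nc: "n s \<in> carrier W1" using n_closed s by auto
  show "TA (n s) \<in> carrier RA" using TA_closed nc by auto
  fix w assume w: "w \<in> carrier W1"
  show "TA (n s) \<otimes>\<^bsub>RA\<^esub> TA w \<in> spanned"
  proof (cases "L1 (n s \<otimes>\<^bsub>W1\<^esub> w) = Suc (L1 w)")
    case True
    then have "TA (n s \<otimes>\<^bsub>W1\<^esub> w) = TA (n s) \<otimes>\<^bsub>RA\<^esub> TA w"
      using TA_mult[of "n s" w] nc w len1_n[OF s] by simp
    then show ?thesis using TA_spanned[of "n s \<otimes>\<^bsub>W1\<^esub> w"] nc w by simp
  next
    case False
    then have lw: "L1 w = Suc (L1 (n s \<otimes>\<^bsub>W1\<^esub> w))" using len1_n_left[OF s w] by auto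
    define w' where "w' = inv\<^bsub>W1\<^esub> (n s) \<otimes>\<^bsub>W1\<^esub> w"
    have w'c: "w' \<in> carrier W1" using w'_def nc w by simp
    have "proj w' = proj (n s \<otimes>\<^bsub>W1\<^esub> w)"
      using w'_def nc w s by (simp add: proj_inv proj_n inv_S)
    then have lw': "L1 w' = L1 (n s \<otimes>\<^bsub>W1\<^esub> w)" by (simp add: len1_eq)
    have weq: "w = n s \<otimes>\<^bsub>W1\<^esub> w'" using w'_def nc w by (simp add: W1.m_assoc[symmetric])
    have lsum: "L1 (n s \<otimes>\<^bsub>W1\<^esub> w') = L1 (n s) + L1 w'" using weq lw lw' len1_n[OF s] by simp
    have "TA w = TA (n s) \<otimes>\<^bsub>RA\<^esub> TA w'" using TA_mult[OF nc w'c lsum] weq by simp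
    then show ?thesis using TA_n_descent_spanned[OF s w'c lsum] by simp
  qed
qed

lemma TA_stab: "v \<in> carrier W1 \<Longrightarrow> TA v \<in> stab"
proof (induct "L1 v" arbitrary: v)
  case 0 then show ?case using TA_len0_stab by simp
next
  case (Suc k)
  obtain s where s: "s \<in> S" "L1 (inv\<^bsub>W1\<^esub> (n s) \<otimes>\<^bsub>W1\<^esub> v) = k"
    using len1_decrease[OF Suc(3) Suc(2)[symmetric]] by blast
  let ?w = "inv\<^bsub>W1\<^esub> (n s) \<otimes>\<^bsub>W1\<^esub> v"
  have nc: "n s \<in> carrier W1" using n_closed s by auto
  have wc: "?w \<in> carrier W1" using nc Suc by simp
  have eq: "v = n s \<otimes>\<^bsub>W1\<^esub> ?w" using nc Suc by (simp add: W1.m_assoc[symmetric])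
  have "TA v = TA (n s) \<otimes>\<^bsub>RA\<^esub> TA ?w"
    using TA_mult[of "n s" ?w] eq nc wc s Suc(2) len1_n by simp
  then show ?case using Suc(1)[OF s(2)[symmetric] wc] TA_n_stab[OF s(1)] stab_mult by simp
qed

lemma TA_inv_n_quad_rel:
  assumes s: "s \<in> S"
  defines "U \<equiv> TA (inv\<^bsub>W1\<^esub> (n s \<otimes>\<^bsub>W1\<^esub> n s))"
  shows "TA_inv (n s) \<otimes>\<^bsub>RA\<^esub> quad_rel s \<otimes>\<^bsub>RA\<^esub> U
    = TA (n s) \<otimes>\<^bsub>RA\<^esub> U \<ominus>\<^bsub>RA\<^esub> a s \<odot>\<^bsub>RA\<^esub> TA_inv (n s) \<ominus>\<^bsub>RA\<^esub> bA s \<otimes>\<^bsub>RA\<^esub> U"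
proof -
  have nc: "n s \<in> carrier W1" "n s \<otimes>\<^bsub>W1\<^esub> n s \<in> carrier W1" "inv\<^bsub>W1\<^esub> (n s \<otimes>\<^bsub>W1\<^esub> n s) \<in> carrier W1"
    using n_closed s by auto
  define N where "N = TA (n s)"
  define Ti where "Ti = TA_inv (n s)"
  define P where "P = TA (n s \<otimes>\<^bsub>W1\<^esub> n s)"
  define B where "B = bA s"
  have cs: "N \<in> carrier RA" "Ti \<in> carrier RA" "P \<in> carrier RA" "U \<in> carrier RA" "B \<in> carrier RA"
    using N_def Ti_def P_def U_def B_def TA_closed TA_inv_closed nc bA_closed s by auto
  have ac: "a s \<in> carrier R" using a_closed s by auto
  have TiN: "Ti \<otimes>\<^bsub>RA\<^esub> N = \<one>\<^bsub>RA\<^esub>" using TA_inv_TA nc Ti_def N_def by simp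
  have PU: "P \<otimes>\<^bsub>RA\<^esub> U = \<one>\<^bsub>RA\<^esub>"
    using TA_TA_inv[OF nc(2)] TA_inv_len0[OF nc(2) len1_n_square[OF s]] P_def U_def by simp
  have "Ti \<otimes>\<^bsub>RA\<^esub> quad_rel s \<otimes>\<^bsub>RA\<^esub> U
      = Ti \<otimes>\<^bsub>RA\<^esub> (N \<otimes>\<^bsub>RA\<^esub> N) \<otimes>\<^bsub>RA\<^esub> U \<ominus>\<^bsub>RA\<^esub> Ti \<otimes>\<^bsub>RA\<^esub> (a s \<odot>\<^bsub>RA\<^esub> P) \<otimes>\<^bsub>RA\<^esub> U
        \<ominus>\<^bsub>RA\<^esub> Ti \<otimes>\<^bsub>RA\<^esub> (N \<otimes>\<^bsub>RA\<^esub> B) \<otimes>\<^bsub>RA\<^esub> U"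
    unfolding quad_rel_def N_def[symmetric] P_def[symmetric] B_def[symmetric]
    using cs ac by (intro C.RA.H.mult_diff_diff_distrib) auto
  also have "Ti \<otimes>\<^bsub>RA\<^esub> (N \<otimes>\<^bsub>RA\<^esub> N) \<otimes>\<^bsub>RA\<^esub> U = N \<otimes>\<^bsub>RA\<^esub> U"
    using cs TiN by (simp add: C.RA.H.m_assoc[symmetric])
  also have "Ti \<otimes>\<^bsub>RA\<^esub> (a s \<odot>\<^bsub>RA\<^esub> P) \<otimes>\<^bsub>RA\<^esub> U = a s \<odot>\<^bsub>RA\<^esub> Ti"
    using cs ac PU by (simp add: C.RA.smult_mult_r C.RA.smult_mult_l C.RA.H.m_assoc)
  also have "Ti \<otimes>\<^bsub>RA\<^esub> (N \<otimes>\<^bsub>RA\<^esub> B) \<otimes>\<^bsub>RA\<^esub> U = B \<otimes>\<^bsub>RA\<^esub> U"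
    using cs TiN by (simp add: C.RA.H.m_assoc[symmetric])
  finally show ?thesis unfolding N_def Ti_def B_def .
qed

text \<open>Multiplying the quadratic relation by \<open>T(n s)\<^sup>-\<^sup>1\<close> on the left and by \<open>T(n s \<otimes> n s)\<^sup>-\<^sup>1\<close>
  on the right expresses \<open>a s \<odot> T(n s)\<^sup>-\<^sup>1\<close> modulo the ideal through positive generators, which can then
  be divided by the unit \<open>a s\<close>.\<close>

lemma TA_inv_n_stab: assumes s: "s \<in> S" shows "TA_inv (n s) \<in> stab"
proof -
  have nc: "n s \<in> carrier W1" "inv\<^bsub>W1\<^esub> (n s \<otimes>\<^bsub>W1\<^esub> n s) \<in> carrier W1"
    using n_closed s by auto
  define U where "U = TA (inv\<^bsub>W1\<^esub> (n s \<otimes>\<^bsub>W1\<^esub> n s))"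
  define J where "J = TA_inv (n s) \<otimes>\<^bsub>RA\<^esub> quad_rel s \<otimes>\<^bsub>RA\<^esub> U"
  have cs: "TA (n s) \<in> carrier RA" "TA_inv (n s) \<in> carrier RA" "U \<in> carrier RA" "bA s \<in> carrier RA"
    using TA_closed TA_inv_closed nc bA_closed s U_def by auto
  have ac: "a s \<in> carrier R" "inv\<^bsub>R\<^esub> (a s) \<in> carrier R" "inv\<^bsub>R\<^esub> (a s) \<otimes>\<^bsub>R\<^esub> a s = \<one>\<^bsub>R\<^esub>"
    using aunit s by auto
  have "J \<in> I" unfolding J_def using quad_rel_in_I[OF s] cs I_lmult I_rmult by auto
  moreover have "TA (n s) \<otimes>\<^bsub>RA\<^esub> U \<ominus>\<^bsub>RA\<^esub> bA s \<otimes>\<^bsub>RA\<^esub> U \<in> stab"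
    using TA_stab nc bA_stab s U_def by (auto intro!: stab_minus stab_mult)
  ultimately have "TA (n s) \<otimes>\<^bsub>RA\<^esub> U \<ominus>\<^bsub>RA\<^esub> bA s \<otimes>\<^bsub>RA\<^esub> U \<ominus>\<^bsub>RA\<^esub> J \<in> stab"
    unfolding a_minus_def[of RA _ J] using stab_add_I I_neg by simp
  moreover have "TA (n s) \<otimes>\<^bsub>RA\<^esub> U \<ominus>\<^bsub>RA\<^esub> bA s \<otimes>\<^bsub>RA\<^esub> U \<ominus>\<^bsub>RA\<^esub> J = a s \<odot>\<^bsub>RA\<^esub> TA_inv (n s)"
    unfolding J_def U_def TA_inv_n_quad_rel[OF s] using cs ac U_def
    by (intro C.RA.H.diff_diff_diff_cancel) auto
  ultimately have "inv\<^bsub>R\<^esub> (a s) \<odot>\<^bsub>RA\<^esub> (a s \<odot>\<^bsub>RA\<^esub> TA_inv (n s)) \<in> stab"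
    using stab_smult ac by simp
  then show ?thesis using ac cs by (simp add: C.RA.M.smult_assoc1[symmetric])
qed

lemma TA_inv_stab: "v \<in> carrier W1 \<Longrightarrow> TA_inv v \<in> stab"
proof (induct "L1 v" arbitrary: v)
  case 0 then show ?case using TA_inv_len0 TA_stab len1_zero_inv by simp
next
  case (Suc k)
  obtain s where s: "s \<in> S" "L1 (inv\<^bsub>W1\<^esub> (n s) \<otimes>\<^bsub>W1\<^esub> v) = k"
    using len1_decrease[OF Suc(3) Suc(2)[symmetric]] by blast
  let ?w = "inv\<^bsub>W1\<^esub> (n s) \<otimes>\<^bsub>W1\<^esub> v"
  have nc: "n s \<in> carrier W1" using n_closed s by auto
  have wc: "?w \<in> carrier W1" using nc Suc by simp
  have eq: "v = n s \<otimes>\<^bsub>W1\<^esub> ?w" using nc Suc by (simp add: W1.m_assoc[symmetric])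
  have "TA_inv v = TA_inv ?w \<otimes>\<^bsub>RA\<^esub> TA_inv (n s)"
    using TA_inv_mult[of "n s" ?w] eq nc wc s Suc(2) len1_n by simp
  then show ?case using Suc(1)[OF s(2)[symmetric] wc] TA_inv_n_stab[OF s(1)] stab_mult by simp
qed

lemma delta_stab: "g \<in> carrier AG \<Longrightarrow> delta R g \<in> stab"
proof -
  assume "g \<in> carrier AG"
  then obtain ws where ws: "ws \<in> P.words" "g = P.cls ws" by (auto simp: P.A_carrier)
  have "delta R (P.cls ws) \<in> stab" using ws(1)
  proof (induct ws)
    case Nil then show ?case using P.A_one C.galg_one_eq_delta one_stab by simp
  next
    case (Cons p ws)
    obtain x e where p: "p = (x, e)" by (cases p)
    have x: "x \<in> carrier W1" and wsc: "ws \<in> P.words" using Cons p by auto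
    have cc: "P.cls ws \<in> carrier AG" using wsc P.A_carrier by auto
    show ?case
    proof (cases e)
      case True
      then have "delta R (P.cls (p # ws)) = TA x \<otimes>\<^bsub>RA\<^esub> delta R (P.cls ws)"
        using p x cc by (simp add: P.cls_Cons_True TA_def C.delta_mult P.pres_gen_closed)
      then show ?thesis using stab_mult TA_stab[OF x] Cons(3) by simp
    next
      case False
      then have "delta R (P.cls (p # ws)) = TA_inv x \<otimes>\<^bsub>RA\<^esub> delta R (P.cls ws)"
        using p x cc by (simp add: P.cls_Cons_False TA_inv_def C.delta_mult P.pres_gen_closed)
      then show ?thesis using stab_mult TA_inv_stab[OF x] Cons(3) by simp
    qed
  qed
  then show ?thesis using ws by simp
qed

lemma stab_all: "x \<in> carrier RA \<Longrightarrow> x \<in> stab"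
proof -
  assume x: "x \<in> carrier RA"
  then have xf: "x \<in> C.coeffs" by (simp add: RA_carrier)
  have sp: "finite (C.supp x)" "C.supp x \<subseteq> carrier AG" using C.supp_coeffs[OF xf] by auto
  have "finsum RA (\<lambda>g. x g \<odot>\<^bsub>RA\<^esub> delta R g) (C.supp x) \<in> stab"
    using sp xf by (intro stab_finsum stab_smult delta_stab) (auto simp: C.coeffs_closed)
  then show ?thesis using C.galg_expansion[OF xf] by simp
qed

lemma spanned_all: "x \<in> carrier RA \<Longrightarrow> x \<in> spanned"
proof -
  assume x: "x \<in> carrier RA"
  have "x \<otimes>\<^bsub>RA\<^esub> TA \<one>\<^bsub>W1\<^esub> \<in> spanned" using stab_all[OF x] TA_spanned[of "\<one>\<^bsub>W1\<^esub>"] unfolding stab_def by auto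
  then show ?thesis using x TA_one by simp
qed

lemma lift_lin_comb_eq_zero:
  assumes c: "c \<in> coeffsW1" and z: "C.lift (lin_comb c) = \<zero>\<^bsub>H\<^esub>"
  shows "c = (\<lambda>w. \<zero>\<^bsub>R\<^esub>)"
proof -
  have "\<exists>!f. f \<in> coeffsW1 \<and> \<zero>\<^bsub>H\<^esub> = finsum H (\<lambda>w. f w \<odot>\<^bsub>H\<^esub> Tw w) {w. f w \<noteq> \<zero>\<^bsub>R\<^esub>}"
    by (rule Tw_basis) simp
  moreover have "c \<in> coeffsW1 \<and> \<zero>\<^bsub>H\<^esub> = finsum H (\<lambda>w. c w \<odot>\<^bsub>H\<^esub> Tw w) {w. c w \<noteq> \<zero>\<^bsub>R\<^esub>}"
    using c z lift_lin_comb[OF c] by simp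
  moreover have "(\<lambda>w. \<zero>\<^bsub>R\<^esub>) \<in> coeffsW1 \<and> \<zero>\<^bsub>H\<^esub> = finsum H (\<lambda>w. \<zero>\<^bsub>R\<^esub> \<odot>\<^bsub>H\<^esub> Tw w) {w. \<zero>\<^bsub>R\<^esub> \<noteq> \<zero>\<^bsub>R\<^esub>}"
    using R.fin_coeffs_zero by simp
  ultimately show ?thesis by blast
qed

lemma kernel_lift_eq_I: "a_kernel RA H C.lift = I"
proof
  show "I \<subseteq> a_kernel RA H C.lift" by (rule I_subset_kernel)
  show "a_kernel RA H C.lift \<subseteq> I"
  proof
    fix x assume "x \<in> a_kernel RA H C.lift"
    then have x: "x \<in> carrier RA" "C.lift x = \<zero>\<^bsub>H\<^esub>" by (auto simp: a_kernel_def')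
    obtain c where c: "c \<in> coeffsW1" "x \<ominus>\<^bsub>RA\<^esub> lin_comb c \<in> I" using spanned_all[OF x(1)] spanned_def by auto
    have lc: "lin_comb c \<in> carrier RA" using lin_comb_closed c by auto
    have "C.lift x \<ominus>\<^bsub>H\<^esub> C.lift (lin_comb c) = \<zero>\<^bsub>H\<^esub>"
      using I_subset_kernel c(2) x(1) lc by (auto simp: a_kernel_def' lift_minus)
    then have "C.lift (lin_comb c) = \<zero>\<^bsub>H\<^esub>" using x lift_closed[OF lc] by simp
    then have "lin_comb c = \<zero>\<^bsub>RA\<^esub>" using lift_lin_comb_eq_zero[OF c(1)] lin_comb_zero by simp
    then show "x \<in> I" using c(2) x(1) by (simp add: a_minus_def)
  qed
qed

lemma lift_surj: "C.lift ` carrier RA = carrier H"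
proof
  show "C.lift ` carrier RA \<subseteq> carrier H" using lift_closed by auto
  show "carrier H \<subseteq> C.lift ` carrier RA"
  proof
    fix h assume h: "h \<in> carrier H"
    obtain f where f: "f \<in> coeffsW1" "h = finsum H (\<lambda>w. f w \<odot>\<^bsub>H\<^esub> Tw w) {w. f w \<noteq> \<zero>\<^bsub>R\<^esub>}"
      using Tw_basis[OF h] by auto
    then have "h = C.lift (lin_comb f)" using lift_lin_comb by simp
    then show "h \<in> C.lift ` carrier RA" using lin_comb_closed[OF f(1)] by blast
  qed
qed

lemma lift_quotient_iso: "(\<lambda>P. the_elem (C.lift ` P)) \<in> ring_iso (RA Quot I) H"
  using ring_hom_ring.FactRing_iso_set[OF lift_ring_hom_ring lift_surj] kernel_lift_eq_I by simp

lemma lift_quotient_coset: "x \<in> carrier RA \<Longrightarrow> the_elem (C.lift ` (I +>\<^bsub>RA\<^esub> x)) = C.lift x"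
proof -
  assume x: "x \<in> carrier RA"
  have "C.lift ` (I +>\<^bsub>RA\<^esub> x) = {C.lift x}"
  proof
    show "C.lift ` (I +>\<^bsub>RA\<^esub> x) \<subseteq> {C.lift x}"
    proof
      fix y assume "y \<in> C.lift ` (I +>\<^bsub>RA\<^esub> x)"
      then obtain i where i: "i \<in> I" "y = C.lift (i \<oplus>\<^bsub>RA\<^esub> x)" unfolding a_r_coset_def' by auto
      have ic: "i \<in> carrier RA" using i I_subset by auto
      have "C.lift i = \<zero>\<^bsub>H\<^esub>" using i I_subset_kernel by (auto simp: a_kernel_def')
      then show "y \<in> {C.lift x}" using i ic x lift_closed[OF x] by (simp add: lift_add)
    qed
    show "{C.lift x} \<subseteq> C.lift ` (I +>\<^bsub>RA\<^esub> x)"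
      using I_zero x unfolding a_r_coset_def' by force
  qed
  then show ?thesis by simp
qed

lemma hecke_presentation_iso:
  "\<exists>\<phi>. \<phi> \<in> ring_iso (RA Quot I) H \<and>
      (\<forall>r\<in>carrier R. \<forall>x\<in>carrier RA. \<phi> (I +>\<^bsub>RA\<^esub> (r \<odot>\<^bsub>RA\<^esub> x)) = r \<odot>\<^bsub>H\<^esub> \<phi> (I +>\<^bsub>RA\<^esub> x)) \<and>
      (\<forall>w\<in>carrier W1. \<phi> (I +>\<^bsub>RA\<^esub> delta R (pres_gen W1 L1 w)) = Tw w)"
proof (intro exI conjI ballI)
  show "(\<lambda>P. the_elem (C.lift ` P)) \<in> ring_iso (RA Quot I) H" by (rule lift_quotient_iso)
  fix r x assume r: "r \<in> carrier R" and x: "x \<in> carrier RA"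
  show "the_elem (C.lift ` (I +>\<^bsub>RA\<^esub> (r \<odot>\<^bsub>RA\<^esub> x))) = r \<odot>\<^bsub>H\<^esub> the_elem (C.lift ` (I +>\<^bsub>RA\<^esub> x))"
    using r x by (simp add: lift_quotient_coset lift_smult)
next
  fix w assume w: "w \<in> carrier W1"
  show "the_elem (C.lift ` (I +>\<^bsub>RA\<^esub> delta R (pres_gen W1 L1 w))) = Tw w"
    using lift_quotient_coset[OF TA_closed[OF w]] lift_TA[OF w] by (simp add: TA_def)
qed

end

lemma hecke_presentationI:
  assumes "cring R"
    and "pro_p_coxeter W1 W proj Waff S Omega n"
    and "hecke_params R W1 W proj S n a b"
    and "hecke_alg R W1 W proj S Omega n a b H Tw"
    and "\<forall>s\<in>S. a s \<in> Units R"
  shows "hecke_presentation W1 W proj Waff S Omega n R H a b Tw"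
proof -
  have "ext_coxeter_grp W Waff S Omega"
    using assms(2) by (simp add: ext_coxeter_grp_def pro_p_coxeter_def)
  then have "pro_p_coxeter_grp W1 W proj Waff S Omega n"
    by (rule pro_p_coxeter_grp.intro) (simp add: pro_p_coxeter_grp_axioms_def assms(2))
  moreover have "r_algebra R H"
    using assms(1,4) unfolding r_algebra_def r_algebra_axioms_def hecke_alg_def by blast
  ultimately show ?thesis
    unfolding hecke_presentation_def pro_p_hecke_def pro_p_hecke_axioms_def using assms(3-5) by blast
qed

theorem proposition2p4p3:
  fixes R :: "'r ring"
    and W1 :: "'w monoid" and W :: "'v monoid" and proj :: "'w \<Rightarrow> 'v"
    and Waff S Omega :: "'v set" and n :: "'v \<Rightarrow> 'w"
    and a :: "'v \<Rightarrow> 'r" and b :: "'v \<Rightarrow> 'w \<Rightarrow> 'r"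
    and H :: "('r,'h) module" and Tw :: "'w \<Rightarrow> 'h"
  assumes "cring R"
    and "pro_p_coxeter W1 W proj Waff S Omega n"
    and "hecke_params R W1 W proj S n a b"
    and "hecke_alg R W1 W proj S Omega n a b H Tw"
    and "\<forall>s\<in>S. a s \<in> Units R"
  shows "let len = len1 proj W S Omega;
             RA = galg R (pres_group W1 len);
             I = genideal RA (hecke_ideal_gens R W1 len S n a b)
         in \<exists>\<phi>. \<phi> \<in> ring_iso (RA Quot I) H \<and>
                (\<forall>r\<in>carrier R. \<forall>x\<in>carrier RA.
                    \<phi> (I +>\<^bsub>RA\<^esub> (r \<odot>\<^bsub>RA\<^esub> x)) = r \<odot>\<^bsub>H\<^esub> \<phi> (I +>\<^bsub>RA\<^esub> x)) \<and>
                (\<forall>w\<in>carrier W1. \<phi> (I +>\<^bsub>RA\<^esub> delta R (pres_gen W1 len w)) = Tw w)"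
proof -
  interpret hecke_presentation W1 W proj Waff S Omega n R H a b Tw
    using hecke_presentationI[OF assms] .
  show ?thesis
    unfolding Let_def hecke_ideal_gens_eq I_def[symmetric] using hecke_presentation_iso by simp
qed

end
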